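(* Let $(G,N,\vartheta)$ and $(H,M,\varphi)$ be character triples of finite groups with $(G,N,\vartheta)\geq_c(H,M,\varphi)$, and let $C\leq\mathbf{C}_G(N)$. Let $\nu\in\mathrm{Irr}(C\cap N)$ be the unique irreducible constituent of $\vartheta_{C\cap N}$, which is also the unique irreducible constituent of $\varphi_{C\cap N}$. Then $$\left(\mathbf{N}_G(C)_{\vartheta\cdot\psi},N\cdot C,\vartheta\cdot\psi\right)\geq_c\left(\mathbf{N}_H(C)_{\varphi\cdot\psi},M\cdot C,\varphi\cdot\psi\right)$$ for every $\psi\in\mathrm{Irr}(C\mid\nu)$.
   Context: Central products: since $C$ centralizes $N$ (and hence $M$), $NC$ and $MC$ are central products, written $N\cdot C$ and $M\cdot C$. For $\vartheta\in\mathrm{Irr}(N)$ and $\psi\in\mathrm{Irr}(C)$ lying over the same character $\nu$ of $N\cap C$, $\vartheta\cdot\psi$ denotes the unique irreducible character of $N\cdot C$ with $(\vartheta\cdot\psi)(nc)=\vartheta(n)\psi(c)$ for $n\in N$, $c\in C$ (similarly $\varphi\cdot\psi$ on $M\cdot C$). Subscripts denote stabilizers; $\mathrm{Irr}(C\mid\nu)$ is the set of irreducible characters of $C$ lying over $\nu$. Character triples and $\geq_c$: a character triple $(G,N,\vartheta)$ consists of $N\trianglelefteq G$ and a $G$-invariant $\vartheta\in\mathrm{Irr}(N)$. A projective representation of $G$ associated with $\vartheta$ is a map $\mathcal{P}:G\to\mathrm{GL}_{\vartheta(1)}(\mathbb{C})$ with $\mathcal{P}(x)\mathcal{P}(y)=\alpha(x,y)\mathcal{P}(xy)$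 for a factor set $\alpha$, such that $\mathcal{P}|_N$ is a representation affording $\vartheta$ and $\mathcal{P}(xn)=\mathcal{P}(x)\mathcal{P}(n)$, $\mathcal{P}(nx)=\mathcal{P}(n)\mathcal{P}(x)$ for $x\in G,n\in N$. One writes $(G,N,\vartheta)\geq_c(H,M,\varphi)$ for character triples if $G=NH$, $M=N\cap H$, $\mathbf{C}_G(N)\leq H$, and there are projective representations $\mathcal{P}$ of $G$ associated with $\vartheta$ and $\mathcal{P}'$ of $H$ associated with $\varphi$, with factor sets $\alpha,\alpha'$, such that $\alpha|_{H\times H}=\alpha'$ and for every $c\in\mathbf{C}_G(N)$ the matrices $\mathcal{P}(c)$, $\mathcal{P}'(c)$ are scalar with the same scalar. *)

theory Defs
  imports "HOL-Algebra.Coset" "Jordan_Normal_Form.Matrix"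
begin

text \<open>All groups are subgroups (given as subsets) of an ambient finite group A
  (a HOL-Algebra group structure). Characters are complex-valued functions on
  the carrier of A that vanish outside the subgroup they are characters of.\<close>

definition mat_trace :: "complex mat \<Rightarrow> complex" where
  "mat_trace P = (\<Sum>i<dim_row P. P $$ (i, i))"

definition is_rep :: "('a, 'b) monoid_scheme \<Rightarrow> 'a set \<Rightarrow> nat \<Rightarrow> ('a \<Rightarrow> complex mat) \<Rightarrow> bool" where
  "is_rep A K n \<rho> \<longleftrightarrow>
     (\<forall>g\<in>K. \<rho> g \<in> carrier_mat n n) \<and> \<rho> \<one>\<^bsub>A\<^esub> = 1\<^sub>m n \<and>
     (\<forall>g\<in>K. \<forall>h\<in>K. \<rho> (g \<otimes>\<^bsub>A\<^esub> h) = \<rho> g * \<rho> h)"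

definition invariant_subspace :: "'a set \<Rightarrow> nat \<Rightarrow> ('a \<Rightarrow> complex mat) \<Rightarrow> complex vec set \<Rightarrow> bool" where
  "invariant_subspace K n \<rho> W \<longleftrightarrow>
     W \<subseteq> carrier_vec n \<and> 0\<^sub>v n \<in> W \<and>
     (\<forall>v\<in>W. \<forall>w\<in>W. v + w \<in> W) \<and> (\<forall>a. \<forall>v\<in>W. a \<cdot>\<^sub>v v \<in> W) \<and>
     (\<forall>g\<in>K. \<forall>v\<in>W. \<rho> g *\<^sub>v v \<in> W)"

definition irreducible_rep :: "('a, 'b) monoid_scheme \<Rightarrow> 'a set \<Rightarrow> nat \<Rightarrow> ('a \<Rightarrow> complex mat) \<Rightarrow> bool" where
  "irreducible_rep A K n \<rho> \<longleftrightarrow> is_rep A K n \<rho> \<and> n > 0 \<and>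
     (\<forall>W. invariant_subspace K n \<rho> W \<longrightarrow> W = {0\<^sub>v n} \<or> W = carrier_vec n)"

definition Irr :: "('a, 'b) monoid_scheme \<Rightarrow> 'a set \<Rightarrow> ('a \<Rightarrow> complex) set" where
  "Irr A K = {\<chi>. \<exists>n \<rho>. irreducible_rep A K n \<rho> \<and>
      (\<forall>g\<in>K. \<chi> g = mat_trace (\<rho> g)) \<and> (\<forall>g. g \<notin> K \<longrightarrow> \<chi> g = 0)}"

definition char_inner :: "'a set \<Rightarrow> ('a \<Rightarrow> complex) \<Rightarrow> ('a \<Rightarrow> complex) \<Rightarrow> complex" where
  "char_inner K \<chi> \<psi> = (\<Sum>g\<in>K. \<chi> g * cnj (\<psi> g)) / of_nat (card K)"

definition lies_over :: "'a set \<Rightarrow> ('a \<Rightarrow> complex) \<Rightarrow> ('a \<Rightarrow> complex) \<Rightarrow> bool" where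
  "lies_over L \<chi> \<nu> \<longleftrightarrow> char_inner L \<chi> \<nu> \<noteq> 0"

definition Irr_over :: "('a, 'b) monoid_scheme \<Rightarrow> 'a set \<Rightarrow> 'a set \<Rightarrow> ('a \<Rightarrow> complex) \<Rightarrow> ('a \<Rightarrow> complex) set" where
  "Irr_over A K L \<nu> = {\<psi> \<in> Irr A K. lies_over L \<psi> \<nu>}"

definition centralizer_in :: "('a, 'b) monoid_scheme \<Rightarrow> 'a set \<Rightarrow> 'a set \<Rightarrow> 'a set" where
  "centralizer_in A K X = {g \<in> K. \<forall>x\<in>X. g \<otimes>\<^bsub>A\<^esub> x = x \<otimes>\<^bsub>A\<^esub> g}"

definition normalizer_in :: "('a, 'b) monoid_scheme \<Rightarrow> 'a set \<Rightarrow> 'a set \<Rightarrow> 'a set" where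
  "normalizer_in A K X = {g \<in> K. (\<lambda>x. g \<otimes>\<^bsub>A\<^esub> x \<otimes>\<^bsub>A\<^esub> inv\<^bsub>A\<^esub> g) ` X = X}"

definition char_stab :: "('a, 'b) monoid_scheme \<Rightarrow> 'a set \<Rightarrow> ('a \<Rightarrow> complex) \<Rightarrow> 'a set" where
  "char_stab A K \<chi> = {g \<in> K. \<forall>x\<in>carrier A. \<chi> (g \<otimes>\<^bsub>A\<^esub> x \<otimes>\<^bsub>A\<^esub> inv\<^bsub>A\<^esub> g) = \<chi> x}"

definition cprod_char :: "('a, 'b) monoid_scheme \<Rightarrow> 'a set \<Rightarrow> 'a set \<Rightarrow> ('a \<Rightarrow> complex) \<Rightarrow> ('a \<Rightarrow> complex) \<Rightarrow> 'a \<Rightarrow> complex" where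
  "cprod_char A N C \<theta> \<psi> x =
     (if x \<in> N <#>\<^bsub>A\<^esub> C
      then (let p = (SOME p. fst p \<in> N \<and> snd p \<in> C \<and> x = fst p \<otimes>\<^bsub>A\<^esub> snd p)
            in \<theta> (fst p) * \<psi> (snd p))
      else 0)"

definition char_triple :: "('a, 'b) monoid_scheme \<Rightarrow> 'a set \<Rightarrow> 'a set \<Rightarrow> ('a \<Rightarrow> complex) \<Rightarrow> bool" where
  "char_triple A K N \<theta> \<longleftrightarrow> subgroup K A \<and> normal N (A\<lparr>carrier := K\<rparr>) \<and> \<theta> \<in> Irr A N \<and>
     (\<forall>g\<in>K. \<forall>x\<in>carrier A. \<theta> (g \<otimes>\<^bsub>A\<^esub> x \<otimes>\<^bsub>A\<^esub> inv\<^bsub>A\<^esub> g) = \<theta> x)"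

definition proj_rep_assoc :: "('a, 'b) monoid_scheme \<Rightarrow> 'a set \<Rightarrow> 'a set \<Rightarrow> ('a \<Rightarrow> complex)
    \<Rightarrow> ('a \<Rightarrow> complex mat) \<Rightarrow> ('a \<times> 'a \<Rightarrow> complex) \<Rightarrow> bool" where
  "proj_rep_assoc A K N \<theta> P \<alpha> \<longleftrightarrow>
     (\<exists>d. of_nat d = \<theta> \<one>\<^bsub>A\<^esub> \<and>
        (\<forall>x\<in>K. P x \<in> carrier_mat d d \<and> invertible_mat (P x)) \<and>
        (\<forall>x\<in>K. \<forall>y\<in>K. P x * P y = \<alpha> (x, y) \<cdot>\<^sub>m P (x \<otimes>\<^bsub>A\<^esub> y)) \<and>
        is_rep A N d P \<and> (\<forall>n\<in>N. \<theta> n = mat_trace (P n)) \<and>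
        (\<forall>x\<in>K. \<forall>n\<in>N. P (x \<otimes>\<^bsub>A\<^esub> n) = P x * P n \<and> P (n \<otimes>\<^bsub>A\<^esub> x) = P n * P x))"

definition geq_c :: "('a, 'b) monoid_scheme \<Rightarrow> 'a set \<Rightarrow> 'a set \<Rightarrow> ('a \<Rightarrow> complex)
    \<Rightarrow> 'a set \<Rightarrow> 'a set \<Rightarrow> ('a \<Rightarrow> complex) \<Rightarrow> bool" where
  "geq_c A G N \<theta> H M \<phi> \<longleftrightarrow>
     char_triple A G N \<theta> \<and> char_triple A H M \<phi> \<and>
     G = N <#>\<^bsub>A\<^esub> H \<and> M = N \<inter> H \<and> centralizer_in A G N \<subseteq> H \<and>
     (\<exists>P \<alpha> P' \<alpha>'. proj_rep_assoc A G N \<theta> P \<alpha> \<and> proj_rep_assoc A H M \<phi> P' \<alpha>' \<and>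
        (\<forall>x\<in>H. \<forall>y\<in>H. \<alpha> (x, y) = \<alpha>' (x, y)) \<and>
        (\<forall>c\<in>centralizer_in A G N. \<exists>z::complex.
            P c = z \<cdot>\<^sub>m 1\<^sub>m (dim_row (P c)) \<and> P' c = z \<cdot>\<^sub>m 1\<^sub>m (dim_row (P' c))))"

end

theory Submission
  imports Defs "Jordan_Normal_Form.Spectral_Radius"
begin

(* Let P be a projective representation of G associated with \<theta> and \<sigma> a representation of C
   affording \<psi>. On N C the character \<theta>\<cdot>\<psi> is afforded by n c \<mapsto> P(n) \<otimes> \<sigma>(c): this is well defined
   because P and \<sigma> both act on C \<inter> N by the scalar \<nu>/\<nu>(1), and it is irreducible by the Schur
   orthogonality relations. Every element x of the stabilizer G' of \<theta>\<cdot>\<psi> in N_G(C) can be written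
   x = t n c with n \<in> N, c \<in> C and t in the corresponding stabilizer H' on the H-side, where t
   depends only on the coset x N C. Choosing for every t \<in> H' a matrix V(t) that intertwines \<sigma>
   with its t-conjugate, x \<mapsto> P(t n) \<otimes> V(t) \<sigma>(c) is a projective representation of G'
   associated with \<theta>\<cdot>\<psi> (Schur's lemma), and the same recipe with P' gives one of H' associated
   with \<phi>\<cdot>\<psi>. Since both use the same t, n, c and V(t), their factor sets on H' are computed
   from the factor sets of P and P' on H, which agree, and from the scalars by which P and P' act
   on C \<subseteq> C_G(N), which agree as well; the same scalars show that both representations act by
   the same scalar on the centralizer of N C. *)

lemma sum_lessThan_mult_split:
  fixes f :: "nat \<Rightarrow> 'c::comm_monoid_add"
  shows "(\<Sum>k<a*b. f k) = (\<Sum>i<a. \<Sum>j<b. f (i*b+j))"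
proof -
  have "(\<Sum>k<a*b. f k) = (\<Sum>i<a. sum f {i*b..<i*b+b})"
    using sum.nat_group[of f b a] by simp
  also have "\<dots> = (\<Sum>i<a. \<Sum>j<b. f (i*b+j))"
  proof (rule sum.cong[OF refl])
    fix i
    have "sum f {i*b..<i*b+b} = (\<Sum>j\<in>{0..<b}. f (j + i*b))"
      using sum.shift_bounds_nat_ivl[of f 0 "i*b" b] by (simp add: add.commute)
    also have "\<dots> = (\<Sum>j<b. f (i*b+j))" by (simp add: atLeast0LessThan add.commute)
    finally show "sum f {i*b..<i*b+b} = (\<Sum>j<b. f (i*b+j))" .
  qed
  finally show ?thesis .
qed

lemma div_mod_less_of_less_mult: "i < a*b \<Longrightarrow> i div b < a \<and> i mod b < (b::nat)"
  by (metis less_mult_imp_div_less mod_less_divisor mult_zero_right neq0_conv not_less0 mult.commute)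

lemma mult_add_less_mult:
  assumes "x < (a::nat)" "y < b"
  shows "x*b+y < a*b"
proof -
  have "x*b+y < Suc x * b" using assms by simp
  also have "\<dots> \<le> a*b" using assms(1) by (intro mult_le_mono1) simp
  finally show ?thesis .
qed

lemma mat_trace_mult_comm:
  assumes "(A::complex mat) \<in> carrier_mat n m" and "B \<in> carrier_mat m n"
  shows "mat_trace (A * B) = mat_trace (B * A)"
proof -
  have "mat_trace (A * B) = (\<Sum>i<n. \<Sum>j<m. A $$ (i,j) * B $$ (j,i))"
    using assms by (simp add: mat_trace_def scalar_prod_def atLeast0LessThan)
  also have "\<dots> = (\<Sum>j<m. \<Sum>i<n. B $$ (j,i) * A $$ (i,j))"
    by (subst sum.swap) (simp add: mult.commute)
  also have "\<dots> = mat_trace (B * A)"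
    using assms by (simp add: mat_trace_def scalar_prod_def atLeast0LessThan)
  finally show ?thesis .
qed

lemma mat_trace_one [simp]: "mat_trace (1\<^sub>m n) = of_nat n"
  by (simp add: mat_trace_def)

lemma mat_trace_smult: "A \<in> carrier_mat n n \<Longrightarrow> mat_trace (c \<cdot>\<^sub>m A) = c * mat_trace A"
  by (simp add: mat_trace_def sum_distrib_left)

lemma smult_smult_mat: "(a::'a::semigroup_mult) \<cdot>\<^sub>m (b \<cdot>\<^sub>m X) = (a * b) \<cdot>\<^sub>m X"
  by (rule eq_matI) (auto simp: mult.assoc)

lemma one_smult_mat [simp]: "(1::'a::monoid_mult) \<cdot>\<^sub>m X = X"
  by (rule eq_matI) auto

lemma scalar_mat_mult_left: "V \<in> carrier_mat n m \<Longrightarrow> ((k::'a::comm_ring_1) \<cdot>\<^sub>m 1\<^sub>m n) * V = k \<cdot>\<^sub>m V"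
  using mult_smult_assoc_mat[of "1\<^sub>m n" n n V m k] by simp

lemma scalar_mat_mult_right: "V \<in> carrier_mat n m \<Longrightarrow> V * ((k::'a::comm_ring_1) \<cdot>\<^sub>m 1\<^sub>m m) = k \<cdot>\<^sub>m V"
  using mult_smult_distrib[of V n m "1\<^sub>m m" m k] by simp

lemma scalar_mat_eqD:
  assumes "(a::'a::ring_1) \<cdot>\<^sub>m 1\<^sub>m n = b \<cdot>\<^sub>m 1\<^sub>m n" "n > 0"
  shows "a = b"
proof -
  have "(a \<cdot>\<^sub>m 1\<^sub>m n) $$ (0,0) = (b \<cdot>\<^sub>m 1\<^sub>m n) $$ (0,0)" using assms(1) by simp
  thus ?thesis using assms(2) by simp
qed

lemma mat_eq_scalar_if_eigen_everywhere:
  assumes X: "(X::'a::comm_ring_1 mat) \<in> carrier_mat n n"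
    and eig: "\<And>v. v \<in> carrier_vec n \<Longrightarrow> X *\<^sub>v v = c \<cdot>\<^sub>v v"
  shows "X = c \<cdot>\<^sub>m 1\<^sub>m n"
proof (rule eq_matI)
  fix i j assume "i < dim_row (c \<cdot>\<^sub>m 1\<^sub>m n)" "j < dim_col (c \<cdot>\<^sub>m 1\<^sub>m n)"
  hence ij: "i < n" "j < n" by auto
  have "X $$ (i,j) = (X *\<^sub>v unit_vec n j) $ i" using X ij by simp
  also have "\<dots> = (c \<cdot>\<^sub>v unit_vec n j) $ i" using eig[of "unit_vec n j"] by simp
  finally show "X $$ (i,j) = (c \<cdot>\<^sub>m 1\<^sub>m n) $$ (i,j)" using ij by simp
qed (use X in auto)

lemma invertible_matE:
  assumes "invertible_mat T" "T \<in> carrier_mat n n"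
  obtains Ti where "Ti \<in> carrier_mat n n" "T * Ti = 1\<^sub>m n" "Ti * T = 1\<^sub>m n"
proof -
  from assms obtain B where B: "T * B = 1\<^sub>m (dim_row T)" "B * T = 1\<^sub>m (dim_row B)"
    unfolding invertible_mat_def inverts_mat_def by blast
  have "B \<in> carrier_mat n n"
    using B assms(2) by (metis carrier_matD carrier_matI index_mult_mat(2,3) index_one_mat(2,3))
  with B assms(2) show ?thesis using that by auto
qed

lemma invertible_matI:
  assumes "T \<in> carrier_mat n n" "Ti \<in> carrier_mat n n" "T * Ti = 1\<^sub>m n" "Ti * T = 1\<^sub>m n"
  shows "invertible_mat T"
  using assms unfolding invertible_mat_def inverts_mat_def square_mat.simps by auto

lemma invertible_mat_iff_det:
  assumes T: "(T :: 'a::field mat) \<in> carrier_mat n n"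
  shows "invertible_mat T \<longleftrightarrow> det T \<noteq> 0"
proof
  assume "invertible_mat T"
  then obtain Ti where "Ti \<in> carrier_mat n n" "T * Ti = 1\<^sub>m n" by (rule invertible_matE[OF _ T])
  hence "det T * det Ti = 1" using det_mult[OF T] by (metis det_one)
  thus "det T \<noteq> 0" by auto
next
  assume "det T \<noteq> 0"
  hence "T \<in> Units (ring_mat TYPE('a) n undefined)" by (rule det_non_zero_imp_unit[OF T])
  then obtain B where "B \<in> carrier_mat n n" "B * T = 1\<^sub>m n" "T * B = 1\<^sub>m n"
    unfolding Units_def ring_mat_def by auto
  thus "invertible_mat T" using T invertible_matI by blast
qed

lemma invertible_mat_mult:
  assumes "X \<in> carrier_mat n n" "Y \<in> carrier_mat n n" "invertible_mat X" "invertible_mat (Y::'a::field mat)"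
  shows "invertible_mat (X * Y)"
  using assms invertible_mat_iff_det[of "X * Y" n]
  by (simp add: invertible_mat_iff_det det_mult[of X n Y])

lemma invertible_smult_imp_nonzero:
  assumes "invertible_mat (a \<cdot>\<^sub>m (X::'a::field mat))" "X \<in> carrier_mat n n" "n > 0"
  shows "a \<noteq> 0"
  using assms by (auto simp: invertible_mat_iff_det[of "a \<cdot>\<^sub>m X" n])

lemma smult_invertible_mat_cancel:
  assumes X: "X \<in> carrier_mat n n" and iX: "invertible_mat X" and n: "n > 0"
    and eq: "a \<cdot>\<^sub>m X = (b::'a::field) \<cdot>\<^sub>m X"
  shows "a = b"
proof -
  obtain Xi where Xi: "Xi \<in> carrier_mat n n" "X * Xi = 1\<^sub>m n" by (rule invertible_matE[OF iX X])
  have "(a \<cdot>\<^sub>m X) * Xi = a \<cdot>\<^sub>m 1\<^sub>m n" "(b \<cdot>\<^sub>m X) * Xi = b \<cdot>\<^sub>m 1\<^sub>m n"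
    using mult_smult_assoc_mat[OF X Xi(1)] Xi by simp_all
  thus ?thesis using eq n scalar_mat_eqD by metis
qed

lemma mult_cancel_left_mat:
  assumes "X \<in> carrier_mat n n" "Y \<in> carrier_mat n n" "Z \<in> carrier_mat n m" "X * Y = 1\<^sub>m n"
  shows "X * (Y * Z) = (Z :: 'a::semiring_1 mat)"
  using assms by (simp add: assoc_mult_mat[symmetric, of X n n Y n Z m])

section \<open>Kronecker products\<close>

definition kron :: "'a::comm_semiring_1 mat \<Rightarrow> 'a mat \<Rightarrow> 'a mat" where
  "kron A B = mat (dim_row A * dim_row B) (dim_col A * dim_col B)
     (\<lambda>(i,j). A $$ (i div dim_row B, j div dim_col B) * B $$ (i mod dim_row B, j mod dim_col B))"

lemma kron_carrier: "A \<in> carrier_mat a a \<Longrightarrow> B \<in> carrier_mat b b \<Longrightarrow> kron A B \<in> carrier_mat (a*b) (a*b)"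
  unfolding kron_def by auto

lemma dim_kron [simp]:
  "dim_row (kron A B) = dim_row A * dim_row B" "dim_col (kron A B) = dim_col A * dim_col B"
  unfolding kron_def by auto

lemma index_kron:
  "i < dim_row A * dim_row B \<Longrightarrow> j < dim_col A * dim_col B \<Longrightarrow>
   kron A B $$ (i,j) = A $$ (i div dim_row B, j div dim_col B) * B $$ (i mod dim_row B, j mod dim_col B)"
  unfolding kron_def by auto

lemma kron_mult:
  assumes A: "A \<in> carrier_mat a a" and B: "B \<in> carrier_mat b b"
    and C: "C \<in> carrier_mat a a" and D: "D \<in> carrier_mat b b"
  shows "kron A B * kron C D = kron (A * C) (B * D)"
proof (rule eq_matI)
  fix i j assume "i < dim_row (kron (A * C) (B * D))" "j < dim_col (kron (A * C) (B * D))"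
  hence i: "i < a*b" and j: "j < a*b" using A B C D by auto
  have "(kron A B * kron C D) $$ (i,j) = (\<Sum>k<a*b. kron A B $$ (i,k) * kron C D $$ (k,j))"
    using A B C D i j by (simp add: scalar_prod_def atLeast0LessThan)
  also have "\<dots> = (\<Sum>x<a. \<Sum>y<b. kron A B $$ (i,x*b+y) * kron C D $$ (x*b+y,j))"
    by (rule sum_lessThan_mult_split)
  also have "\<dots> = (\<Sum>x<a. \<Sum>y<b. (A $$ (i div b, x) * C $$ (x, j div b)) * (B $$ (i mod b, y) * D $$ (y, j mod b)))"
    using A B C D i j by (intro sum.cong refl) (simp add: index_kron mult_add_less_mult mult_ac)
  also have "\<dots> = (\<Sum>x<a. A $$ (i div b, x) * C $$ (x, j div b)) * (\<Sum>y<b. B $$ (i mod b, y) * D $$ (y, j mod b))"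
    by (simp add: sum_product)
  also have "\<dots> = kron (A * C) (B * D) $$ (i,j)"
    using A B C D i j div_mod_less_of_less_mult[OF i] div_mod_less_of_less_mult[OF j]
    by (simp add: index_kron scalar_prod_def atLeast0LessThan)
  finally show "(kron A B * kron C D) $$ (i,j) = kron (A * C) (B * D) $$ (i,j)" .
qed (use A B C D in auto)

lemma kron_one: "kron (1\<^sub>m a) (1\<^sub>m b) = 1\<^sub>m (a*b)"
proof (rule eq_matI)
  fix i j assume "i < dim_row (1\<^sub>m (a*b))" "j < dim_col (1\<^sub>m (a*b))"
  hence i: "i < a*b" and j: "j < a*b" by auto
  have "(i div b = j div b \<and> i mod b = j mod b) \<longleftrightarrow> i = j"
    by (metis div_mult_mod_eq)
  thus "kron (1\<^sub>m a) (1\<^sub>m b) $$ (i,j) = 1\<^sub>m (a*b) $$ (i,j)"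
    using i j div_mod_less_of_less_mult[OF i] div_mod_less_of_less_mult[OF j] by (auto simp: index_kron)
qed auto

lemma kron_smult_left: "kron (c \<cdot>\<^sub>m A) B = c \<cdot>\<^sub>m kron A B"
  by (rule eq_matI) (auto simp: index_kron div_mod_less_of_less_mult mult_ac)

lemma kron_smult_right: "kron A (c \<cdot>\<^sub>m B) = c \<cdot>\<^sub>m kron A B"
  by (rule eq_matI) (auto simp: index_kron div_mod_less_of_less_mult mult_ac)

lemma kron_invertible:
  assumes A: "A \<in> carrier_mat a a" and B: "B \<in> carrier_mat b b"
    and "invertible_mat A" "invertible_mat B"
  shows "invertible_mat (kron A B)"
proof -
  obtain Ai where Ai: "Ai \<in> carrier_mat a a" "A * Ai = 1\<^sub>m a" "Ai * A = 1\<^sub>m a"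
    using invertible_matE assms by metis
  obtain Bi where Bi: "Bi \<in> carrier_mat b b" "B * Bi = 1\<^sub>m b" "Bi * B = 1\<^sub>m b"
    using invertible_matE assms by metis
  show ?thesis
    by (rule invertible_matI[OF kron_carrier[OF A B] kron_carrier[OF Ai(1) Bi(1)]])
      (simp_all add: kron_mult[OF A B Ai(1) Bi(1)] kron_mult[OF Ai(1) Bi(1) A B] Ai Bi kron_one)
qed

lemma mat_trace_kron:
  assumes A: "A \<in> carrier_mat a a" and B: "B \<in> carrier_mat b b"
  shows "mat_trace (kron A B) = mat_trace A * mat_trace B"
proof -
  have "mat_trace (kron A B) = (\<Sum>x<a. \<Sum>y<b. kron A B $$ (x*b+y,x*b+y))"
    using A B sum_lessThan_mult_split by (simp add: mat_trace_def)
  also have "\<dots> = (\<Sum>x<a. \<Sum>y<b. A $$ (x,x) * B $$ (y,y))"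
    using A B by (intro sum.cong refl) (simp add: index_kron mult_add_less_mult)
  also have "\<dots> = mat_trace A * mat_trace B" using A B by (simp add: mat_trace_def sum_product)
  finally show ?thesis .
qed

lemma kron_mult_vec_index:
  assumes "X \<in> carrier_mat d d" "Y \<in> carrier_mat e e" "w \<in> carrier_vec (d*e)" "i < d*e"
  shows "(kron X Y *\<^sub>v w) $ i = (\<Sum>x<d. \<Sum>y<e. X $$ (i div e, x) * Y $$ (i mod e, y) * w $ (x*e+y))"
proof -
  have "(kron X Y *\<^sub>v w) $ i = (\<Sum>k<d*e. kron X Y $$ (i,k) * w $ k)"
    using assms by (simp add: scalar_prod_def atLeast0LessThan)
  also have "\<dots> = (\<Sum>x<d. \<Sum>y<e. kron X Y $$ (i,x*e+y) * w $ (x*e+y))"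
    by (rule sum_lessThan_mult_split)
  also have "\<dots> = (\<Sum>x<d. \<Sum>y<e. X $$ (i div e, x) * Y $$ (i mod e, y) * w $ (x*e+y))"
    using assms by (intro sum.cong refl) (simp add: index_kron mult_add_less_mult)
  finally show ?thesis .
qed

lemma kron_scalar_left_eq_scalar:
  assumes V: "V \<in> carrier_mat e e" and d: "d > 0" and z: "z \<noteq> 0"
    and eq: "kron (z \<cdot>\<^sub>m 1\<^sub>m d) V = (w::'a::field) \<cdot>\<^sub>m 1\<^sub>m (d*e)"
  shows "V = (w / z) \<cdot>\<^sub>m 1\<^sub>m e"
proof (rule eq_matI)
  fix i j assume "i < dim_row ((w / z) \<cdot>\<^sub>m 1\<^sub>m e)" "j < dim_col ((w / z) \<cdot>\<^sub>m 1\<^sub>m e)"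
  hence i: "i < e" and j: "j < e" by auto
  have "e \<le> d * e" using d by simp
  hence ij: "i < d * e" "j < d * e" using i j by linarith+
  have "z * V $$ (i,j) = kron (z \<cdot>\<^sub>m 1\<^sub>m d) V $$ (i,j)" using ij i j V d by (simp add: index_kron)
  also have "\<dots> = w * (if i = j then 1 else 0)" using eq ij by simp
  finally show "V $$ (i,j) = ((w / z) \<cdot>\<^sub>m 1\<^sub>m e) $$ (i,j)" using z i j by (auto simp: field_simps)
qed (use V in auto)

lemma set_multI: "a \<in> X \<Longrightarrow> b \<in> Y \<Longrightarrow> a \<otimes>\<^bsub>G\<^esub> b \<in> X <#>\<^bsub>G\<^esub> Y"
  unfolding set_mult_def by blast

lemma set_multE:
  assumes "x \<in> X <#>\<^bsub>G\<^esub> Y"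
  obtains a b where "a \<in> X" "b \<in> Y" "x = a \<otimes>\<^bsub>G\<^esub> b"
  using assms unfolding set_mult_def by blast

context group
begin

lemma mult_inv_cancel_left: "x \<in> carrier G \<Longrightarrow> y \<in> carrier G \<Longrightarrow> x \<otimes> (inv x \<otimes> y) = y"
  by (simp add: m_assoc[symmetric])

lemma inv_mult_cancel_left: "x \<in> carrier G \<Longrightarrow> y \<in> carrier G \<Longrightarrow> inv x \<otimes> (x \<otimes> y) = y"
  by (simp add: m_assoc[symmetric])

lemma conj_mult:
  "g \<in> carrier G \<Longrightarrow> x \<in> carrier G \<Longrightarrow> y \<in> carrier G \<Longrightarrow>
   g \<otimes> (x \<otimes> y) \<otimes> inv g = (g \<otimes> x \<otimes> inv g) \<otimes> (g \<otimes> y \<otimes> inv g)"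
  by (simp add: m_assoc inv_mult_cancel_left)

lemma commute_conj:
  assumes a: "a \<in> carrier G" and b: "b \<in> carrier G" and ab: "a \<otimes> b = b \<otimes> a"
  shows "a \<otimes> b \<otimes> inv a = b" and "inv a \<otimes> b \<otimes> a = b"
proof -
  show "a \<otimes> b \<otimes> inv a = b" using ab a b by (simp add: m_assoc)
  have "inv a \<otimes> b \<otimes> a = inv a \<otimes> (a \<otimes> b)" using ab a b by (simp add: m_assoc)
  thus "inv a \<otimes> b \<otimes> a = b" using a b by (simp add: inv_mult_cancel_left)
qed

lemma commute_mult_inv:
  assumes g: "g \<in> carrier G" and c: "c \<in> carrier G" and n: "n \<in> carrier G"
    and gn: "g \<otimes> n = n \<otimes> g" and cn: "c \<otimes> n = n \<otimes> c"
  shows "(g \<otimes> inv c) \<otimes> n = n \<otimes> (g \<otimes> inv c)"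
proof -
  have "inv c \<otimes> n = (inv c \<otimes> n \<otimes> c) \<otimes> inv c" using c n by (simp add: m_assoc)
  also have "\<dots> = n \<otimes> inv c" using commute_conj(2)[OF c n cn] by simp
  finally have icn: "inv c \<otimes> n = n \<otimes> inv c" .
  have "(g \<otimes> inv c) \<otimes> n = (g \<otimes> n) \<otimes> inv c" using g c n icn by (simp add: m_assoc)
  also have "\<dots> = n \<otimes> (g \<otimes> inv c)" using g c n gn by (simp add: m_assoc)
  finally show ?thesis .
qed

lemma mult_defect:
  assumes "x \<in> carrier G" "y \<in> carrier G" "u \<in> carrier G" "v \<in> carrier G" "w \<in> carrier G"
    and "c \<in> carrier G" "c' \<in> carrier G" "c'' \<in> carrier G"
    and "x = u \<otimes> c" "y = v \<otimes> c'" "x \<otimes> y = w \<otimes> c''"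
  shows "u \<otimes> v = w \<otimes> (c'' \<otimes> (inv y \<otimes> inv c \<otimes> y) \<otimes> inv c')"
proof -
  have u: "u = x \<otimes> inv c" and v: "v = y \<otimes> inv c'" using assms by (simp_all add: m_assoc)
  have "u \<otimes> v = x \<otimes> (inv c \<otimes> (y \<otimes> inv c'))" unfolding u v using assms(1-8) by (simp add: m_assoc)
  also have "\<dots> = (x \<otimes> y) \<otimes> ((inv y \<otimes> inv c \<otimes> y) \<otimes> inv c')"
    using assms(1-8) by (simp add: m_assoc mult_inv_cancel_left)
  also have "\<dots> = w \<otimes> (c'' \<otimes> (inv y \<otimes> inv c \<otimes> y) \<otimes> inv c')"
    unfolding assms(11) using assms(1-8) by (simp add: m_assoc)
  finally show ?thesis .
qed

lemma decomp_mult_right: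
  assumes "t \<in> carrier G" "x \<in> carrier G" "n \<in> carrier G" "c \<in> carrier G" "n1 \<in> carrier G" "c1 \<in> carrier G"
    and e: "inv t \<otimes> x = n \<otimes> c" and comm: "c \<otimes> n1 = n1 \<otimes> c"
  shows "inv t \<otimes> (x \<otimes> (n1 \<otimes> c1)) = (n \<otimes> n1) \<otimes> (c \<otimes> c1)"
proof -
  have "inv t \<otimes> (x \<otimes> (n1 \<otimes> c1)) = (inv t \<otimes> x) \<otimes> (n1 \<otimes> c1)" using assms(1-6) by (simp add: m_assoc)
  also have "\<dots> = n \<otimes> (c \<otimes> n1) \<otimes> c1" unfolding e using assms(1-6) by (simp add: m_assoc)
  also have "\<dots> = (n \<otimes> n1) \<otimes> (c \<otimes> c1)" unfolding comm using assms(1-6) by (simp add: m_assoc)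
  finally show ?thesis .
qed

lemma decomp_mult_left:
  assumes "t \<in> carrier G" "x \<in> carrier G" "n \<in> carrier G" "c \<in> carrier G" "n1 \<in> carrier G" "c1 \<in> carrier G"
    and e: "inv t \<otimes> x = n \<otimes> c" and comm: "(inv t \<otimes> c1 \<otimes> t) \<otimes> n = n \<otimes> (inv t \<otimes> c1 \<otimes> t)"
  shows "inv t \<otimes> ((n1 \<otimes> c1) \<otimes> x) = ((inv t \<otimes> n1 \<otimes> t) \<otimes> n) \<otimes> ((inv t \<otimes> c1 \<otimes> t) \<otimes> c)"
proof -
  have "((inv t \<otimes> n1 \<otimes> t) \<otimes> n) \<otimes> ((inv t \<otimes> c1 \<otimes> t) \<otimes> c)
      = (inv t \<otimes> n1 \<otimes> t) \<otimes> ((n \<otimes> (inv t \<otimes> c1 \<otimes> t)) \<otimes> c)" using assms(1-6) by (simp add: m_assoc)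
  also have "\<dots> = (inv t \<otimes> n1 \<otimes> t) \<otimes> (((inv t \<otimes> c1 \<otimes> t) \<otimes> n) \<otimes> c)" using comm by simp
  also have "\<dots> = inv t \<otimes> ((n1 \<otimes> c1) \<otimes> (t \<otimes> (n \<otimes> c)))"
    using assms(1-6) by (simp add: m_assoc mult_inv_cancel_left)
  also have "t \<otimes> (n \<otimes> c) = x" using e[symmetric] assms(1,2) by (simp add: mult_inv_cancel_left)
  finally show ?thesis by simp
qed

lemma subgroup_mult_mem_iff:
  assumes "subgroup H G" "a \<in> carrier G" "y \<in> H"
  shows "a \<otimes> y \<in> H \<longleftrightarrow> a \<in> H"
proof
  assume "a \<otimes> y \<in> H"
  hence "(a \<otimes> y) \<otimes> inv y \<in> H" using assms by (simp add: subgroup.m_closed subgroup.m_inv_closed)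
  thus "a \<in> H" using assms by (simp add: m_assoc subgroup.mem_carrier)
qed (use assms in \<open>simp add: subgroup.m_closed\<close>)

lemma subgroup_mult_left_bij:
  assumes K: "subgroup K G" and h: "h \<in> K"
  shows "bij_betw (\<lambda>k. h \<otimes> k) K K"
proof (rule bij_betwI')
  show "(h \<otimes> x = h \<otimes> y) = (x = y)" if "x \<in> K" "y \<in> K" for x y
    using that K h by (simp add: subgroup.mem_carrier)
  show "h \<otimes> x \<in> K" if "x \<in> K" for x using that K h by (simp add: subgroup.m_closed)
  show "\<exists>x\<in>K. y = h \<otimes> x" if y: "y \<in> K" for y
  proof
    show "inv h \<otimes> y \<in> K" using K h y by (simp add: subgroup.m_closed subgroup.m_inv_closed)
    show "y = h \<otimes> (inv h \<otimes> y)" using K h y by (simp add: subgroup.mem_carrier mult_inv_cancel_left)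
  qed
qed

end

section \<open>Matrix representations\<close>

lemma mult_mat_zero_vec: "(X::'a::semiring_0 mat) \<in> carrier_mat n m \<Longrightarrow> X *\<^sub>v 0\<^sub>v m = 0\<^sub>v n"
  by (rule eq_vecI) (auto simp: row_def scalar_prod_def)

lemma is_repD:
  assumes "is_rep A K n \<rho>"
  shows "\<And>g. g \<in> K \<Longrightarrow> \<rho> g \<in> carrier_mat n n" and "\<rho> \<one>\<^bsub>A\<^esub> = 1\<^sub>m n"
    and "\<And>g h. g \<in> K \<Longrightarrow> h \<in> K \<Longrightarrow> \<rho> (g \<otimes>\<^bsub>A\<^esub> h) = \<rho> g * \<rho> h"
  using assms unfolding is_rep_def by auto

lemma irreducible_repD:
  assumes "irreducible_rep A K n \<rho>"
  shows "is_rep A K n \<rho>" and "n > 0"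
    and "\<And>W. invariant_subspace K n \<rho> W \<Longrightarrow> W = {0\<^sub>v n} \<or> W = carrier_vec n"
  using assms unfolding irreducible_rep_def by blast+

lemma zero_invariant_subspace: "is_rep A K n \<rho> \<Longrightarrow> invariant_subspace K n \<rho> {0\<^sub>v n}"
  unfolding invariant_subspace_def by (auto simp: mult_mat_zero_vec is_repD(1))

lemma intertwiner_preimage_invariant:
  assumes r1: "is_rep A K n \<rho>1" and r2: "is_rep A K m \<rho>2" and X: "X \<in> carrier_mat m n"
    and intw: "\<forall>k\<in>K. X * \<rho>1 k = \<rho>2 k * X" and W: "invariant_subspace K m \<rho>2 W"
  shows "invariant_subspace K n \<rho>1 {v \<in> carrier_vec n. X *\<^sub>v v \<in> W}"
proof -
  from W have W0: "0\<^sub>v m \<in> W"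
    and Wadd: "\<And>v w. v \<in> W \<Longrightarrow> w \<in> W \<Longrightarrow> v + w \<in> W"
    and Wsm: "\<And>a v. v \<in> W \<Longrightarrow> a \<cdot>\<^sub>v v \<in> W"
    and Wg: "\<And>g v. g \<in> K \<Longrightarrow> v \<in> W \<Longrightarrow> \<rho>2 g *\<^sub>v v \<in> W"
    unfolding invariant_subspace_def by blast+
  have "X *\<^sub>v (\<rho>1 g *\<^sub>v v) = \<rho>2 g *\<^sub>v (X *\<^sub>v v)" if "g \<in> K" "v \<in> carrier_vec n" for g v
  proof -
    have "X *\<^sub>v (\<rho>1 g *\<^sub>v v) = (X * \<rho>1 g) *\<^sub>v v"
      using that X is_repD(1)[OF r1 that(1)] by simp
    also have "\<dots> = \<rho>2 g *\<^sub>v (X *\<^sub>v v)"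
      using that X is_repD(1)[OF r2 that(1)] intw by simp
    finally show ?thesis .
  qed
  thus ?thesis
    unfolding invariant_subspace_def using X W0 Wadd Wsm Wg is_repD(1)[OF r1]
    by (auto simp: mult_mat_zero_vec mult_add_distrib_mat_vec mult_mat_vec intro!: mult_mat_vec_carrier)
qed

lemma schur_lemma:
  assumes irr: "irreducible_rep A K n \<rho>" and X: "X \<in> carrier_mat n n"
    and comm: "\<forall>k\<in>K. X * \<rho> k = \<rho> k * X"
  shows "\<exists>c. X = c \<cdot>\<^sub>m 1\<^sub>m n"
proof -
  note r = irreducible_repD(1)[OF irr]
  obtain c where "c \<in> spectrum X" using spectrum_non_empty[OF X irreducible_repD(2)[OF irr]] by blast
  then obtain v where v: "v \<in> carrier_vec n" "v \<noteq> 0\<^sub>v n" "X *\<^sub>v v = c \<cdot>\<^sub>v v"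
    unfolding spectrum_def eigenvalue_def eigenvector_def using X by auto
  define W where "W = {w \<in> carrier_vec n. X *\<^sub>v w = c \<cdot>\<^sub>v w}"
  have "X *\<^sub>v (\<rho> g *\<^sub>v w) = c \<cdot>\<^sub>v (\<rho> g *\<^sub>v w)" if "g \<in> K" "w \<in> W" for g w
  proof -
    have gw: "\<rho> g \<in> carrier_mat n n" "w \<in> carrier_vec n" using that is_repD(1)[OF r] W_def by auto
    have "X *\<^sub>v (\<rho> g *\<^sub>v w) = (X * \<rho> g) *\<^sub>v w" using X gw by simp
    also have "\<dots> = (\<rho> g * X) *\<^sub>v w" using comm that(1) by simp
    also have "\<dots> = \<rho> g *\<^sub>v (X *\<^sub>v w)" using X gw by simp
    finally have "X *\<^sub>v (\<rho> g *\<^sub>v w) = \<rho> g *\<^sub>v (X *\<^sub>v w)" .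
    thus ?thesis using that is_repD(1)[OF r that(1)] unfolding W_def by (simp add: mult_mat_vec)
  qed
  hence "invariant_subspace K n \<rho> W"
    unfolding invariant_subspace_def using X is_repD(1)[OF r]
    by (auto intro!: mult_mat_vec_carrier simp: W_def mult_add_distrib_mat_vec smult_add_distrib_vec mult_mat_vec
        smult_smult_assoc mult.commute mult_mat_zero_vec)
  note W = irreducible_repD(3)[OF irr this]
  have "W \<noteq> {0\<^sub>v n}" using v unfolding W_def by auto
  hence "W = carrier_vec n" using W by argo
  hence "X = c \<cdot>\<^sub>m 1\<^sub>m n" by (intro mat_eq_scalar_if_eigen_everywhere[OF X]) (auto simp: W_def)
  thus ?thesis by blast
qed

lemma central_element_acts_scalar:
  assumes irr: "irreducible_rep A K n \<rho>" and s: "s \<in> K" and cen: "\<forall>k\<in>K. s \<otimes>\<^bsub>A\<^esub> k = k \<otimes>\<^bsub>A\<^esub> s"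
  shows "\<rho> s = (\<rho> s $$ (0,0)) \<cdot>\<^sub>m 1\<^sub>m n"
proof -
  note r = irreducible_repD(1)[OF irr]
  have "\<rho> s * \<rho> k = \<rho> k * \<rho> s" if k: "k \<in> K" for k
  proof -
    have "\<rho> s * \<rho> k = \<rho> (s \<otimes>\<^bsub>A\<^esub> k)" using is_repD(3)[OF r s k] by simp
    also have "\<dots> = \<rho> (k \<otimes>\<^bsub>A\<^esub> s)" using cen k by simp
    also have "\<dots> = \<rho> k * \<rho> s" using is_repD(3)[OF r k s] by simp
    finally show ?thesis .
  qed
  then obtain c where c: "\<rho> s = c \<cdot>\<^sub>m 1\<^sub>m n" using schur_lemma[OF irr is_repD(1)[OF r s]] by blast
  thus ?thesis using irreducible_repD(2)[OF irr] by simp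
qed

lemma twisted_intertwiners_proportional:
  assumes irr: "irreducible_rep A K n \<rho>" and surj: "K \<subseteq> \<phi> ` K"
    and X: "X \<in> carrier_mat n n" and XK: "\<forall>\<gamma>\<in>K. X * \<rho> \<gamma> = \<rho> (\<phi> \<gamma>) * X"
    and V: "V \<in> carrier_mat n n" "invertible_mat V" and VK: "\<forall>\<gamma>\<in>K. V * \<rho> \<gamma> = \<rho> (\<phi> \<gamma>) * V"
  shows "\<exists>\<kappa>. X = \<kappa> \<cdot>\<^sub>m V"
proof -
  note r = irreducible_repD(1)[OF irr]
  obtain Vi where Vi: "Vi \<in> carrier_mat n n" "V * Vi = 1\<^sub>m n" "Vi * V = 1\<^sub>m n"
    by (rule invertible_matE[OF V(2,1)])
  have "X * Vi * \<rho> \<delta> = \<rho> \<delta> * (X * Vi)" if \<delta>: "\<delta> \<in> K" for \<delta>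
  proof -
    obtain \<gamma> where \<gamma>: "\<gamma> \<in> K" and \<delta>\<gamma>: "\<delta> = \<phi> \<gamma>" using surj \<delta> by blast
    have \<rho>\<gamma>: "\<rho> \<gamma> \<in> carrier_mat n n" and \<rho>\<delta>: "\<rho> \<delta> \<in> carrier_mat n n" using is_repD(1)[OF r] \<gamma> \<delta> by auto
    have "Vi * \<rho> \<delta> = Vi * (\<rho> \<delta> * V) * Vi"
      using Vi V \<rho>\<delta> by (simp add: assoc_mult_mat[of _ n n _ n _ n])
    also have "\<dots> = Vi * (V * \<rho> \<gamma>) * Vi" using VK \<gamma> \<delta>\<gamma> by simp
    also have "\<dots> = \<rho> \<gamma> * Vi" using mult_cancel_left_mat[OF Vi(1) V(1) \<rho>\<gamma> Vi(3)] by simp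
    finally have "X * Vi * \<rho> \<delta> = X * \<rho> \<gamma> * Vi"
      using X Vi \<rho>\<gamma> \<rho>\<delta> by (simp add: assoc_mult_mat[of _ n n _ n _ n])
    also have "\<dots> = \<rho> \<delta> * (X * Vi)"
      using XK \<gamma> \<delta>\<gamma> X Vi \<rho>\<delta> by (simp add: assoc_mult_mat[of _ n n _ n _ n])
    finally show ?thesis .
  qed
  then obtain \<kappa> where \<kappa>: "X * Vi = \<kappa> \<cdot>\<^sub>m 1\<^sub>m n"
    using schur_lemma[OF irr mult_carrier_mat[OF X Vi(1)]] by auto
  have "X = X * Vi * V" using X Vi V by (simp add: assoc_mult_mat[of _ n n _ n _ n])
  also have "\<dots> = \<kappa> \<cdot>\<^sub>m V" using \<kappa> V scalar_mat_mult_left by simp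
  finally show ?thesis by blast
qed

lemma irreducible_rep_similar:
  assumes irr: "irreducible_rep A K n \<rho>1" and r2: "is_rep A K n \<rho>2"
    and T: "T \<in> carrier_mat n n" and iT: "invertible_mat T"
    and intw: "\<forall>k\<in>K. \<rho>2 k * T = T * \<rho>1 k"
  shows "irreducible_rep A K n \<rho>2"
proof -
  obtain Ti where Ti: "Ti \<in> carrier_mat n n" "T * Ti = 1\<^sub>m n" by (rule invertible_matE[OF iT T])
  have TTi: "T *\<^sub>v (Ti *\<^sub>v w) = w" if "w \<in> carrier_vec n" for w
    using that T Ti by (simp add: assoc_mult_mat_vec[symmetric])
  have "W = {0\<^sub>v n} \<or> W = carrier_vec n" if W: "invariant_subspace K n \<rho>2 W" for W
  proof -
    have Wc: "W \<subseteq> carrier_vec n" and W0: "0\<^sub>v n \<in> W" using W unfolding invariant_subspace_def by auto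
    define V where "V = {v \<in> carrier_vec n. T *\<^sub>v v \<in> W}"
    have "invariant_subspace K n \<rho>1 V" unfolding V_def
      by (rule intertwiner_preimage_invariant[OF irreducible_repD(1)[OF irr] r2 T _ W]) (use intw in simp)
    note V = irreducible_repD(3)[OF irr this]
    have TiV: "Ti *\<^sub>v w \<in> V" if "w \<in> W" for w
      using that Wc Ti TTi unfolding V_def by auto
    show ?thesis
    proof (cases "V = {0\<^sub>v n}")
      case True
      have "w = 0\<^sub>v n" if w: "w \<in> W" for w
      proof -
        have "w = T *\<^sub>v (Ti *\<^sub>v w)" using TTi w Wc by auto
        also have "Ti *\<^sub>v w = 0\<^sub>v n" using TiV[OF w] True by simp
        finally show ?thesis using mult_mat_zero_vec[OF T] by simp
      qed
      hence "W \<subseteq> {0\<^sub>v n}" by blast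
      thus ?thesis using W0 by blast
    next
      case False
      hence V_full: "V = carrier_vec n" using V by argo
      have "w \<in> W" if w: "w \<in> carrier_vec n" for w
      proof -
        have "Ti *\<^sub>v w \<in> V" unfolding V_full using Ti w by simp
        hence "T *\<^sub>v (Ti *\<^sub>v w) \<in> W" unfolding V_def by simp
        thus ?thesis using TTi[OF w] by simp
      qed
      thus ?thesis using Wc by blast
    qed
  qed
  thus ?thesis unfolding irreducible_rep_def using r2 irreducible_repD(2)[OF irr] by blast
qed

lemma nonzero_intertwiner_invertible:
  assumes irr: "irreducible_rep A K n \<rho>1" and r2: "is_rep A K n \<rho>2"
    and T: "T \<in> carrier_mat n n" and nz: "T \<noteq> 0\<^sub>m n n"
    and intw: "\<forall>k\<in>K. \<rho>2 k * T = T * \<rho>1 k"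
  shows "invertible_mat T"
proof -
  let ?ker = "{v \<in> carrier_vec n. T *\<^sub>v v \<in> {0\<^sub>v n}}"
  have "invariant_subspace K n \<rho>1 ?ker"
    by (rule intertwiner_preimage_invariant[OF irreducible_repD(1)[OF irr] r2 T])
      (use intw zero_invariant_subspace[OF r2] in simp_all)
  note ker = irreducible_repD(3)[OF irr this]
  have "?ker \<noteq> carrier_vec n"
  proof
    assume "?ker = carrier_vec n"
    have "T *\<^sub>v v = 0 \<cdot>\<^sub>v v" if v: "v \<in> carrier_vec n" for v
    proof -
      have "T *\<^sub>v v = 0\<^sub>v n" using v \<open>?ker = carrier_vec n\<close> by blast
      moreover have "0 \<cdot>\<^sub>v v = 0\<^sub>v n" using v by (intro eq_vecI) auto
      ultimately show ?thesis by simp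
    qed
    hence "T = 0 \<cdot>\<^sub>m 1\<^sub>m n" by (rule mat_eq_scalar_if_eigen_everywhere[OF T])
    thus False using nz by auto
  qed
  hence "?ker = {0\<^sub>v n}" using ker by argo
  hence "det T \<noteq> 0" using det_0_iff_vec_prod_zero[OF T] by auto
  thus ?thesis using invertible_mat_iff_det[OF T] by blast
qed

lemma invariant_subspace_lincomb:
  assumes inv: "invariant_subspace K n \<rho> W" and fin: "finite S" and v: "\<forall>x\<in>S. v x \<in> W"
  shows "vec n (\<lambda>i. \<Sum>x\<in>S. f x * v x $ i) \<in> W"
  using fin v
proof (induction S rule: finite_induct)
  case empty
  have "vec n (\<lambda>i. \<Sum>x\<in>{}. f x * v x $ i) = 0\<^sub>v n" by (rule eq_vecI) auto
  thus ?case using inv unfolding invariant_subspace_def by simp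
next
  case (insert a S)
  have Wc: "W \<subseteq> carrier_vec n" and Wadd: "\<And>v w. v \<in> W \<Longrightarrow> w \<in> W \<Longrightarrow> v + w \<in> W"
    and Wsm: "\<And>c v. v \<in> W \<Longrightarrow> c \<cdot>\<^sub>v v \<in> W"
    using inv unfolding invariant_subspace_def by blast+
  have va: "v a \<in> W" using insert by simp
  have "vec n (\<lambda>i. \<Sum>x\<in>insert a S. f x * v x $ i) = f a \<cdot>\<^sub>v v a + vec n (\<lambda>i. \<Sum>x\<in>S. f x * v x $ i)"
    by (rule eq_vecI) (use insert va Wc in auto)
  thus ?case using Wadd[OF Wsm[OF va]] insert by simp
qed

lemma invariant_subspace_full_if_unit_vecs:
  assumes inv: "invariant_subspace K n \<rho> W" and units: "\<And>k. k < n \<Longrightarrow> unit_vec n k \<in> W"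
  shows "W = carrier_vec n"
proof
  show "W \<subseteq> carrier_vec n" using inv unfolding invariant_subspace_def by blast
  show "carrier_vec n \<subseteq> W"
  proof
    fix v :: "complex vec" assume v: "v \<in> carrier_vec n"
    have "vec n (\<lambda>i. \<Sum>k\<in>{..<n}. v $ k * unit_vec n k $ i) \<in> W"
      by (intro invariant_subspace_lincomb[OF inv]) (use units in auto)
    moreover have "vec n (\<lambda>i. \<Sum>k\<in>{..<n}. v $ k * unit_vec n k $ i) = v"
    proof (rule eq_vecI)
      fix i assume "i < dim_vec v"
      hence i: "i < n" using v by simp
      have "(\<Sum>k\<in>{..<n}. v $ k * unit_vec n k $ i) = (\<Sum>k\<in>{..<n}. if k = i then v $ k else 0)"
        by (rule sum.cong) (use i in auto)
      thus "vec n (\<lambda>i. \<Sum>k\<in>{..<n}. v $ k * unit_vec n k $ i) $ i = v $ i" using i by simp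
    qed (use v in simp)
    ultimately show "v \<in> W" by simp
  qed
qed

lemma sum_product_double_sum_swap:
  fixes g h :: "'x \<Rightarrow> complex" and F G :: "'x \<Rightarrow> nat \<Rightarrow> complex"
  assumes "finite N" "finite C"
  shows "(\<Sum>p\<in>N\<times>C. g (fst p) * h (snd p) * (\<Sum>x<d. \<Sum>y<e. F (fst p) x * G (snd p) y * w x y))
       = (\<Sum>x<d. \<Sum>y<e. w x y * (\<Sum>n\<in>N. g n * F n x) * (\<Sum>c\<in>C. h c * G c y))"
proof -
  have "(\<Sum>p\<in>N\<times>C. g (fst p) * h (snd p) * (\<Sum>x<d. \<Sum>y<e. F (fst p) x * G (snd p) y * w x y))
      = (\<Sum>n\<in>N. \<Sum>c\<in>C. \<Sum>x<d. \<Sum>y<e. g n * h c * (F n x * G c y * w x y))"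
    using sum.cartesian_product[of "\<lambda>n c. g n * h c * (\<Sum>x<d. \<Sum>y<e. F n x * G c y * w x y)" C N]
    by (simp add: case_prod_beta' sum_distrib_left)
  also have "\<dots> = (\<Sum>x<d. \<Sum>y<e. \<Sum>n\<in>N. \<Sum>c\<in>C. g n * h c * (F n x * G c y * w x y))"
    by (subst sum.swap, subst (2) sum.swap, subst (3) sum.swap, subst (2) sum.swap) (rule refl)
  also have "\<dots> = (\<Sum>x<d. \<Sum>y<e. w x y * (\<Sum>n\<in>N. g n * F n x) * (\<Sum>c\<in>C. h c * G c y))"
    by (intro sum.cong refl) (simp add: sum_distrib_left sum_distrib_right sum_product mult_ac)
  finally show ?thesis .
qed

lemma double_sum_delta:
  fixes w :: "nat \<Rightarrow> nat \<Rightarrow> complex"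
  assumes b: "b < d" and q: "q < e"
  shows "(\<Sum>x<d. \<Sum>y<e. w x y * (if P \<and> x = b then 1 else 0) * (if Q \<and> y = q then 1 else 0))
       = (if P \<and> Q then w b q else 0)"
proof -
  have "(\<Sum>x<d. \<Sum>y<e. w x y * (if P \<and> x = b then 1 else 0) * (if Q \<and> y = q then 1 else 0))
      = (\<Sum>x<d. \<Sum>y<e. if y = q then (if x = b then (if P \<and> Q then w x y else 0) else 0) else 0)"
    by (intro sum.cong refl) auto
  also have "\<dots> = (if P \<and> Q then w b q else 0)"
    using b q by (simp only: sum.delta finite_lessThan lessThan_iff if_True)
  finally show ?thesis .
qed

context group
begin

lemma rep_inv:
  assumes K: "subgroup K G" and r: "is_rep G K n \<rho>" and k: "k \<in> K"
  shows "\<rho> (inv k) * \<rho> k = 1\<^sub>m n" and "\<rho> k * \<rho> (inv k) = 1\<^sub>m n"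
proof -
  have ik: "inv k \<in> K" using K k by (rule subgroup.m_inv_closed)
  have kG: "k \<in> carrier G" using K k by (rule subgroup.mem_carrier)
  show "\<rho> (inv k) * \<rho> k = 1\<^sub>m n"
    using is_repD(3)[OF r ik k] is_repD(2)[OF r] kG by simp
  show "\<rho> k * \<rho> (inv k) = 1\<^sub>m n"
    using is_repD(3)[OF r k ik] is_repD(2)[OF r] kG by simp
qed

lemma rep_invertible:
  assumes "subgroup K G" "is_rep G K n \<rho>" "k \<in> K"
  shows "invertible_mat (\<rho> k)"
  using rep_inv[OF assms] is_repD(1)[OF assms(2)] subgroup.m_inv_closed[OF assms(1,3)] assms(3)
  by (intro invertible_matI) auto

text \<open>The sum over k \<in> K of \<rho>2(k) E \<rho>1(k\<inverse>), where E is the matrix unit at (j,l).\<close>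
definition rep_average :: "'a set \<Rightarrow> nat \<Rightarrow> nat \<Rightarrow> ('a \<Rightarrow> complex mat) \<Rightarrow> ('a \<Rightarrow> complex mat)
    \<Rightarrow> nat \<Rightarrow> nat \<Rightarrow> complex mat" where
  "rep_average K m n \<rho>2 \<rho>1 j l = mat m n (\<lambda>(i,i'). \<Sum>k\<in>K. \<rho>2 k $$ (i,j) * \<rho>1 (inv k) $$ (l,i'))"

lemma rep_average_carrier: "rep_average K m n \<rho>2 \<rho>1 j l \<in> carrier_mat m n"
  unfolding rep_average_def by auto

lemma index_rep_average: "i < m \<Longrightarrow> i' < n \<Longrightarrow>
  rep_average K m n \<rho>2 \<rho>1 j l $$ (i,i') = (\<Sum>k\<in>K. \<rho>2 k $$ (i,j) * \<rho>1 (inv k) $$ (l,i'))"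
  unfolding rep_average_def by auto

lemma rep_average_intertwines:
  assumes K: "subgroup K G" and r2: "is_rep G K m \<rho>2" and r1: "is_rep G K n \<rho>1"
    and j: "j < m" and l: "l < n" and h: "h \<in> K"
  shows "\<rho>2 h * rep_average K m n \<rho>2 \<rho>1 j l = rep_average K m n \<rho>2 \<rho>1 j l * \<rho>1 h"
proof (rule eq_matI)
  let ?T = "rep_average K m n \<rho>2 \<rho>1 j l"
  have r2h: "\<rho>2 h \<in> carrier_mat m m" and r1h: "\<rho>1 h \<in> carrier_mat n n"
    using is_repD(1)[OF r2 h] is_repD(1)[OF r1 h] .
  note dims = carrier_matD[OF is_repD(1)[OF r1]] carrier_matD[OF is_repD(1)[OF r2]]
  have ik: "\<And>k. k \<in> K \<Longrightarrow> inv k \<in> K" using K by (rule subgroup.m_inv_closed)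
  have shift: "inv (h \<otimes> k) \<otimes> h = inv k" if "k \<in> K" for k
    using that K h by (simp add: subgroup.mem_carrier inv_mult_group m_assoc)
  fix a i' assume "a < dim_row (?T * \<rho>1 h)" "i' < dim_col (?T * \<rho>1 h)"
  hence a: "a < m" and i': "i' < n" using r1h rep_average_carrier[of K m n \<rho>2 \<rho>1 j l] by auto
  have "(\<rho>2 h * ?T) $$ (a,i') = (\<Sum>k\<in>K. (\<Sum>b<m. \<rho>2 h $$ (a,b) * \<rho>2 k $$ (b,j)) * \<rho>1 (inv k) $$ (l,i'))"
    using r2h a i' rep_average_carrier[of K m n \<rho>2 \<rho>1 j l]
    by (simp add: index_rep_average scalar_prod_def atLeast0LessThan sum_distrib_left sum_distrib_right mult.assoc)
      (rule sum.swap)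
  also have "\<dots> = (\<Sum>k\<in>K. \<rho>2 (h \<otimes> k) $$ (a,j) * \<rho>1 (inv (h \<otimes> k) \<otimes> h) $$ (l,i'))"
    using is_repD(3)[OF r2] dims h a j shift by (intro sum.cong refl) (simp add: scalar_prod_def atLeast0LessThan)
  also have "\<dots> = (\<Sum>k\<in>K. \<rho>2 k $$ (a,j) * \<rho>1 (inv k \<otimes> h) $$ (l,i'))"
    using sum.reindex_bij_betw[OF subgroup_mult_left_bij[OF K h],
        of "\<lambda>k. \<rho>2 k $$ (a,j) * \<rho>1 (inv k \<otimes> h) $$ (l,i')"] by simp
  also have "\<dots> = (\<Sum>k\<in>K. \<rho>2 k $$ (a,j) * (\<Sum>b<n. \<rho>1 (inv k) $$ (l,b) * \<rho>1 h $$ (b,i')))"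
    using is_repD(3)[OF r1] dims ik h l i' by (intro sum.cong refl) (simp add: scalar_prod_def atLeast0LessThan)
  also have "\<dots> = (?T * \<rho>1 h) $$ (a,i')"
    using r1h a i' rep_average_carrier[of K m n \<rho>2 \<rho>1 j l]
    by (simp add: index_rep_average scalar_prod_def atLeast0LessThan sum_distrib_left sum_distrib_right mult.assoc)
      (rule sum.swap)
  finally show "(\<rho>2 h * ?T) $$ (a,i') = (?T * \<rho>1 h) $$ (a,i')" .
qed (use is_repD(1)[OF r1 h] is_repD(1)[OF r2 h] in \<open>auto simp: rep_average_def\<close>)

lemma schur_orthogonality:
  assumes K: "subgroup K G" and irr: "irreducible_rep G K n \<rho>"
    and i: "i < n" and i': "i' < n" and j: "j < n" and l: "l < n"
  shows "(\<Sum>k\<in>K. \<rho> k $$ (i,j) * \<rho> (inv k) $$ (l,i')) =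
    (if i = i' \<and> j = l then of_nat (card K) / of_nat n else 0)"
proof -
  note r = irreducible_repD(1)[OF irr]
  have n: "n > 0" using irreducible_repD(2)[OF irr] .
  let ?T = "rep_average K n n \<rho> \<rho> j l"
  have ik: "\<And>k. k \<in> K \<Longrightarrow> inv k \<in> K" using K by (rule subgroup.m_inv_closed)
  have "\<forall>k\<in>K. ?T * \<rho> k = \<rho> k * ?T" using rep_average_intertwines[OF K r r j l] by simp
  then obtain c where c: "?T = c \<cdot>\<^sub>m 1\<^sub>m n" using schur_lemma[OF irr rep_average_carrier] by blast
  have "mat_trace ?T = (\<Sum>k\<in>K. \<Sum>i<n. \<rho> (inv k) $$ (l,i) * \<rho> k $$ (i,j))"
    by (simp add: mat_trace_def rep_average_def) (subst sum.swap, simp add: mult.commute)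
  also have "\<dots> = (\<Sum>k\<in>K. (\<rho> (inv k) * \<rho> k) $$ (l,j))"
    using carrier_matD[OF is_repD(1)[OF r]] ik l j by (intro sum.cong refl) (simp add: scalar_prod_def atLeast0LessThan)
  also have "\<dots> = of_nat (card K) * (if l = j then 1 else 0)"
    by (simp add: rep_inv[OF K r] l j)
  finally have "c * of_nat n = of_nat (card K) * (if l = j then 1 else 0)"
    using c mat_trace_smult[of "1\<^sub>m n" n c] by simp
  hence "c = of_nat (card K) * (if l = j then 1 else 0) / of_nat n" using n by (simp add: field_simps)
  moreover have "(\<Sum>k\<in>K. \<rho> k $$ (i,j) * \<rho> (inv k) $$ (l,i')) = c * (if i = i' then 1 else 0)"
    using c i i' index_rep_average[of i n i' n K \<rho> \<rho> j l] by simp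
  ultimately show ?thesis by auto
qed

lemma matrix_unit_average:
  assumes K: "subgroup K G" and fin: "finite K" and irr: "irreducible_rep G K d \<rho>"
    and x: "x < d" and y: "y < d" and a: "a < d" and b: "b < d"
  shows "(\<Sum>k\<in>K. (of_nat d / of_nat (card K) * \<rho> (inv k) $$ (b,a)) * \<rho> k $$ (x,y)) =
    (if x = a \<and> y = b then 1 else 0)"
proof -
  have "card K > 0" using fin subgroup.one_closed[OF K] card_gt_0_iff by blast
  moreover have "d > 0" using irreducible_repD(2)[OF irr] .
  moreover have "(\<Sum>k\<in>K. (of_nat d / of_nat (card K) * \<rho> (inv k) $$ (b,a)) * \<rho> k $$ (x,y))
     = of_nat d / of_nat (card K) * (\<Sum>k\<in>K. \<rho> k $$ (x,y) * \<rho> (inv k) $$ (b,a))"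
    by (simp add: sum_distrib_left mult_ac)
  ultimately show ?thesis by (simp add: schur_orthogonality[OF K irr x a y b])
qed

lemma character_self_inner:
  assumes K: "subgroup K G" and irr: "irreducible_rep G K n \<rho>"
  shows "(\<Sum>k\<in>K. mat_trace (\<rho> k) * mat_trace (\<rho> (inv k))) = of_nat (card K)"
proof -
  note r = irreducible_repD(1)[OF irr]
  have n: "n > 0" using irreducible_repD(2)[OF irr] .
  have ik: "\<And>k. k \<in> K \<Longrightarrow> inv k \<in> K" using K by (rule subgroup.m_inv_closed)
  have "(\<Sum>k\<in>K. mat_trace (\<rho> k) * mat_trace (\<rho> (inv k)))
      = (\<Sum>k\<in>K. \<Sum>i<n. \<Sum>l<n. \<rho> k $$ (i,i) * \<rho> (inv k) $$ (l,l))"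
    using carrier_matD[OF is_repD(1)[OF r]] ik by (intro sum.cong refl) (simp add: mat_trace_def sum_product)
  also have "\<dots> = (\<Sum>i<n. \<Sum>l<n. \<Sum>k\<in>K. \<rho> k $$ (i,i) * \<rho> (inv k) $$ (l,l))"
    by (subst sum.swap) (simp only: sum.swap[of _ K])
  also have "\<dots> = (\<Sum>i<n. \<Sum>l<n. (if i = l then of_nat (card K) / of_nat n else 0))"
    by (intro sum.cong refl) (simp add: schur_orthogonality[OF K irr])
  also have "\<dots> = of_nat (card K)" using n by simp
  finally show ?thesis .
qed

lemma rep_average_nonzero:
  assumes K: "subgroup K G" and fin: "finite K"
    and irr: "irreducible_rep G K n \<rho>1" and r2: "is_rep G K n \<rho>2"
    and tr: "\<forall>k\<in>K. mat_trace (\<rho>2 k) = mat_trace (\<rho>1 k)"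
  shows "\<exists>j<n. \<exists>l<n. rep_average K n n \<rho>2 \<rho>1 j l \<noteq> 0\<^sub>m n n"
proof (rule ccontr)
  note r1 = irreducible_repD(1)[OF irr]
  have ik: "\<And>k. k \<in> K \<Longrightarrow> inv k \<in> K" using K by (rule subgroup.m_inv_closed)
  assume "\<not> ?thesis"
  hence "(\<Sum>j<n. \<Sum>l<n. rep_average K n n \<rho>2 \<rho>1 j l $$ (j,l)) = 0"
    by (intro sum.neutral ballI) auto
  moreover have "(\<Sum>j<n. \<Sum>l<n. rep_average K n n \<rho>2 \<rho>1 j l $$ (j,l))
      = (\<Sum>k\<in>K. mat_trace (\<rho>2 k) * mat_trace (\<rho>1 (inv k)))"
  proof -
    have "(\<Sum>j<n. \<Sum>l<n. rep_average K n n \<rho>2 \<rho>1 j l $$ (j,l))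
        = (\<Sum>k\<in>K. \<Sum>j<n. \<Sum>l<n. \<rho>2 k $$ (j,j) * \<rho>1 (inv k) $$ (l,l))"
      by (simp add: index_rep_average) (subst sum.swap, simp only: sum.swap[of _ K])
    also have "\<dots> = (\<Sum>k\<in>K. mat_trace (\<rho>2 k) * mat_trace (\<rho>1 (inv k)))"
      using carrier_matD[OF is_repD(1)[OF r2]] carrier_matD[OF is_repD(1)[OF r1]] ik
      by (intro sum.cong refl) (simp add: mat_trace_def sum_product)
    finally show ?thesis .
  qed
  moreover have "(\<Sum>k\<in>K. mat_trace (\<rho>2 k) * mat_trace (\<rho>1 (inv k))) = of_nat (card K)"
    using tr character_self_inner[OF K irr] by simp
  moreover have "card K > 0" using fin subgroup.one_closed[OF K] card_gt_0_iff by blast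
  ultimately show False by simp
qed

lemma same_character_equivalent:
  assumes K: "subgroup K G" and fin: "finite K"
    and irr: "irreducible_rep G K n \<rho>1" and r2: "is_rep G K m \<rho>2"
    and tr: "\<forall>k\<in>K. mat_trace (\<rho>2 k) = mat_trace (\<rho>1 k)"
  shows "m = n \<and> (\<exists>T\<in>carrier_mat n n. invertible_mat T \<and> (\<forall>k\<in>K. \<rho>2 k * T = T * \<rho>1 k))"
proof -
  have "mat_trace (\<rho>2 \<one>) = of_nat m" "mat_trace (\<rho>1 \<one>) = of_nat n"
    using is_repD(2)[OF r2] is_repD(2)[OF irreducible_repD(1)[OF irr]] by simp_all
  hence mn: "m = n" using tr subgroup.one_closed[OF K] by simp
  note r2' = r2[unfolded mn]
  obtain j l where j: "j < n" and l: "l < n" and nz: "rep_average K n n \<rho>2 \<rho>1 j l \<noteq> 0\<^sub>m n n"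
    using rep_average_nonzero[OF K fin irr r2' tr] by blast
  have intw: "\<forall>k\<in>K. \<rho>2 k * rep_average K n n \<rho>2 \<rho>1 j l = rep_average K n n \<rho>2 \<rho>1 j l * \<rho>1 k"
    using rep_average_intertwines[OF K r2' irreducible_repD(1)[OF irr] j l] by simp
  show ?thesis
    using mn rep_average_carrier intw nonzero_intertwiner_invertible[OF irr r2' rep_average_carrier nz intw]
    by blast
qed

lemma kron_matrix_unit_average:
  assumes N: "subgroup N G" "finite N" and C: "subgroup C G" "finite C"
    and irrN: "irreducible_rep G N d \<rho>" and irrC: "irreducible_rep G C e \<sigma>"
    and w: "w \<in> carrier_vec (d*e)" and a: "a < d" and b: "b < d" and s: "s < e" and q: "q < e"
  shows "vec (d*e) (\<lambda>i. \<Sum>p\<in>N\<times>C. (of_nat d / of_nat (card N) * \<rho> (inv (fst p)) $$ (b,a))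
            * (of_nat e / of_nat (card C) * \<sigma> (inv (snd p)) $$ (q,s))
            * (kron (\<rho> (fst p)) (\<sigma> (snd p)) *\<^sub>v w) $ i)
         = w $ (b*e+q) \<cdot>\<^sub>v unit_vec (d*e) (a*e+s)"
proof (rule eq_vecI)
  define g where "g n = of_nat d / of_nat (card N) * \<rho> (inv n) $$ (b,a)" for n
  define h where "h c = of_nat e / of_nat (card C) * \<sigma> (inv c) $$ (q,s)" for c
  note carrier = is_repD(1)[OF irreducible_repD(1)[OF irrN]] is_repD(1)[OF irreducible_repD(1)[OF irrC]]
  fix i assume "i < dim_vec (w $ (b*e+q) \<cdot>\<^sub>v unit_vec (d*e) (a*e+s))"
  hence i: "i < d*e" by simp
  have I: "i div e < d" and J: "i mod e < e" using div_mod_less_of_less_mult[OF i] by auto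
  have "(\<Sum>p\<in>N\<times>C. g (fst p) * h (snd p) * (kron (\<rho> (fst p)) (\<sigma> (snd p)) *\<^sub>v w) $ i)
      = (\<Sum>p\<in>N\<times>C. g (fst p) * h (snd p) *
          (\<Sum>x<d. \<Sum>y<e. \<rho> (fst p) $$ (i div e, x) * \<sigma> (snd p) $$ (i mod e, y) * w $ (x*e+y)))"
    using carrier w i by (intro sum.cong refl) (auto simp: kron_mult_vec_index)
  also have "\<dots> = (\<Sum>x<d. \<Sum>y<e. w $ (x*e+y) * (\<Sum>n\<in>N. g n * \<rho> n $$ (i div e, x))
                                          * (\<Sum>c\<in>C. h c * \<sigma> c $$ (i mod e, y)))"
    by (rule sum_product_double_sum_swap[OF N(2) C(2)])
  also have "\<dots> = (\<Sum>x<d. \<Sum>y<e. w $ (x*e+y) * (if i div e = a \<and> x = b then 1 else 0)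
                                          * (if i mod e = s \<and> y = q then 1 else 0))"
    unfolding g_def h_def
    using matrix_unit_average[OF N irrN I _ a b] matrix_unit_average[OF C irrC J _ s q]
    by (intro sum.cong refl) simp
  also have "\<dots> = (if i div e = a \<and> i mod e = s then w $ (b*e+q) else 0)"
    by (rule double_sum_delta[OF b q])
  also have "\<dots> = (w $ (b*e+q) \<cdot>\<^sub>v unit_vec (d*e) (a*e+s)) $ i"
  proof -
    have "(i div e = a \<and> i mod e = s) \<longleftrightarrow> i = a*e+s" using s by auto
    moreover have "(w $ (b*e+q) \<cdot>\<^sub>v unit_vec (d*e) (a*e+s)) $ i = (if i = a*e+s then w $ (b*e+q) else 0)"
      using i by (simp add: unit_vec_def)
    ultimately show ?thesis by simp
  qed
  finally show "vec (d*e) (\<lambda>i. \<Sum>p\<in>N\<times>C. (of_nat d / of_nat (card N) * \<rho> (inv (fst p)) $$ (b,a))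
            * (of_nat e / of_nat (card C) * \<sigma> (inv (snd p)) $$ (q,s))
            * (kron (\<rho> (fst p)) (\<sigma> (snd p)) *\<^sub>v w) $ i) $ i
         = (w $ (b*e+q) \<cdot>\<^sub>v unit_vec (d*e) (a*e+s)) $ i"
    using i by (simp add: g_def h_def)
qed simp

lemma kron_invariant_subspace_unit_vec:
  assumes N: "subgroup N G" "finite N" and C: "subgroup C G" "finite C"
    and irrN: "irreducible_rep G N d \<rho>" and irrC: "irreducible_rep G C e \<sigma>"
    and inv: "invariant_subspace Y (d*e) R W"
    and NC: "\<forall>n\<in>N. \<forall>c\<in>C. n \<otimes> c \<in> Y \<and> R (n \<otimes> c) = kron (\<rho> n) (\<sigma> c)"
    and w: "w \<in> W" "w $ (b*e+q) \<noteq> 0" and a: "a < d" and b: "b < d" and s: "s < e" and q: "q < e"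
  shows "unit_vec (d*e) (a*e+s) \<in> W"
proof -
  have WR: "\<And>g v. g \<in> Y \<Longrightarrow> v \<in> W \<Longrightarrow> R g *\<^sub>v v \<in> W" and Wsm: "\<And>c v. v \<in> W \<Longrightarrow> c \<cdot>\<^sub>v v \<in> W"
    and wc: "w \<in> carrier_vec (d*e)"
    using inv w unfolding invariant_subspace_def by blast+
  let ?u = "vec (d*e) (\<lambda>i. \<Sum>p\<in>N\<times>C. (of_nat d / of_nat (card N) * \<rho> (inv (fst p)) $$ (b,a))
        * (of_nat e / of_nat (card C) * \<sigma> (inv (snd p)) $$ (q,s))
        * (R (fst p \<otimes> snd p) *\<^sub>v w) $ i)"
  have "\<forall>p\<in>N\<times>C. R (fst p \<otimes> snd p) *\<^sub>v w \<in> W"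
  proof
    fix p assume "p \<in> N \<times> C"
    hence "fst p \<otimes> snd p \<in> Y" using NC by auto
    thus "R (fst p \<otimes> snd p) *\<^sub>v w \<in> W" using WR w by blast
  qed
  hence "?u \<in> W" by (rule invariant_subspace_lincomb[OF inv finite_cartesian_product[OF N(2) C(2)]])
  moreover have "?u = vec (d*e) (\<lambda>i. \<Sum>p\<in>N\<times>C. (of_nat d / of_nat (card N) * \<rho> (inv (fst p)) $$ (b,a))
        * (of_nat e / of_nat (card C) * \<sigma> (inv (snd p)) $$ (q,s))
        * (kron (\<rho> (fst p)) (\<sigma> (snd p)) *\<^sub>v w) $ i)"
    by (intro arg_cong[where f="vec (d*e)"] ext sum.cong refl) (use NC in \<open>auto simp: mem_Times_iff\<close>)
  also have "\<dots> = w $ (b*e+q) \<cdot>\<^sub>v unit_vec (d*e) (a*e+s)"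
    by (rule kron_matrix_unit_average[OF N C irrN irrC wc a b s q])
  ultimately have "(1 / w $ (b*e+q)) \<cdot>\<^sub>v (w $ (b*e+q) \<cdot>\<^sub>v unit_vec (d*e) (a*e+s)) \<in> W" using Wsm by simp
  thus ?thesis using w(2) by (simp add: smult_smult_assoc)
qed

lemma irreducible_rep_kron:
  assumes N: "subgroup N G" "finite N" and C: "subgroup C G" "finite C"
    and irrN: "irreducible_rep G N d \<rho>" and irrC: "irreducible_rep G C e \<sigma>"
    and R: "is_rep G Y (d*e) R"
    and NC: "\<forall>n\<in>N. \<forall>c\<in>C. n \<otimes> c \<in> Y \<and> R (n \<otimes> c) = kron (\<rho> n) (\<sigma> c)"
  shows "irreducible_rep G Y (d*e) R"
proof -
  have "W = {0\<^sub>v (d*e)} \<or> W = carrier_vec (d*e)" if inv: "invariant_subspace Y (d*e) R W" for W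
  proof (cases "W \<subseteq> {0\<^sub>v (d*e)}")
    case True
    moreover have "0\<^sub>v (d*e) \<in> W" using inv unfolding invariant_subspace_def by blast
    ultimately show ?thesis by blast
  next
    case False
    then obtain w where w: "w \<in> W" and wnz: "w \<noteq> 0\<^sub>v (d*e)" by blast
    have wc: "w \<in> carrier_vec (d*e)" using w inv unfolding invariant_subspace_def by blast
    obtain i0 where i0: "i0 < d*e" and wi0: "w $ i0 \<noteq> 0"
    proof (rule ccontr)
      assume "\<not> thesis"
      hence "w = 0\<^sub>v (d*e)" using that wc by (intro eq_vecI) auto
      thus False using wnz by contradiction
    qed
    have wbq: "w $ (i0 div e * e + i0 mod e) \<noteq> 0" using wi0 by simp
    have "unit_vec (d*e) (a*e+s) \<in> W" if "a < d" "s < e" for a s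
      using kron_invariant_subspace_unit_vec[OF N C irrN irrC inv NC w wbq that(1) _ that(2)]
        div_mod_less_of_less_mult[OF i0] by blast
    hence "unit_vec (d*e) (k div e * e + k mod e) \<in> W" if "k < d*e" for k
      using div_mod_less_of_less_mult[OF that] by blast
    hence "unit_vec (d*e) k \<in> W" if "k < d*e" for k using that by simp
    thus ?thesis using invariant_subspace_full_if_unit_vecs[OF inv] by blast
  qed
  thus ?thesis unfolding irreducible_rep_def
    using R irreducible_repD(2)[OF irrN] irreducible_repD(2)[OF irrC] by simp
qed

lemma linear_char_unit:
  assumes Z: "subgroup Z G" "finite Z"
    and mul: "\<forall>x\<in>Z. \<forall>y\<in>Z. \<mu> (x \<otimes> y) = \<mu> x * (\<mu> y :: complex)" and one: "\<mu> \<one> = 1"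
    and z: "z \<in> Z"
  shows "\<mu> z \<noteq> 0" and "cnj (\<mu> z) = 1 / \<mu> z"
proof -
  have nz: "\<mu> x \<noteq> 0" if x: "x \<in> Z" for x
  proof -
    have "x \<otimes> inv x = \<one>" using subgroup.mem_carrier[OF Z(1) x] by simp
    hence "\<mu> x * \<mu> (inv x) = 1" using mul x subgroup.m_inv_closed[OF Z(1) x] one by metis
    thus ?thesis by auto
  qed
  thus "\<mu> z \<noteq> 0" using z .
  have "(\<Prod>x\<in>Z. \<mu> x) = (\<Prod>x\<in>Z. \<mu> (z \<otimes> x))"
    using prod.reindex_bij_betw[OF subgroup_mult_left_bij[OF Z(1) z], of \<mu>] by simp
  also have "\<dots> = \<mu> z ^ card Z * (\<Prod>x\<in>Z. \<mu> x)" using mul z by (simp add: prod.distrib)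
  finally have "\<mu> z ^ card Z = 1" using nz Z(2) by (simp add: prod_zero_iff)
  hence "cmod (\<mu> z) ^ card Z = 1" by (metis norm_power norm_one)
  moreover have "card Z > 0" using Z subgroup.one_closed card_gt_0_iff by blast
  ultimately have "cmod (\<mu> z) = 1" using power_eq_imp_eq_base[of "cmod (\<mu> z)" "card Z" 1] by simp
  hence "\<mu> z * cnj (\<mu> z) = 1" by (simp add: complex_norm_square[symmetric])
  thus "cnj (\<mu> z) = 1 / \<mu> z" using nz[OF z] by (simp add: field_simps)
qed

lemma linear_chars_orthogonal:
  assumes Z: "subgroup Z G" "finite Z"
    and mul1: "\<forall>x\<in>Z. \<forall>y\<in>Z. \<mu>1 (x \<otimes> y) = \<mu>1 x * (\<mu>1 y :: complex)"
    and mul2: "\<forall>x\<in>Z. \<forall>y\<in>Z. \<mu>2 (x \<otimes> y) = \<mu>2 x * (\<mu>2 y :: complex)" and one2: "\<mu>2 \<one> = 1"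
    and ne: "(\<Sum>z\<in>Z. \<mu>1 z * cnj (\<mu>2 z)) \<noteq> 0"
  shows "\<forall>z\<in>Z. \<mu>1 z = \<mu>2 z"
proof (rule ccontr)
  assume "\<not> ?thesis"
  then obtain z0 where z0: "z0 \<in> Z" and neq: "\<mu>1 z0 \<noteq> \<mu>2 z0" by blast
  define f where "f z = \<mu>1 z * cnj (\<mu>2 z)" for z
  have "f z0 = \<mu>1 z0 / \<mu>2 z0" unfolding f_def using linear_char_unit(2)[OF Z mul2 one2 z0] by simp
  hence f0: "f z0 \<noteq> 1" using linear_char_unit(1)[OF Z mul2 one2 z0] neq by simp
  have "(\<Sum>z\<in>Z. f z) = (\<Sum>z\<in>Z. f (z0 \<otimes> z))"
    using sum.reindex_bij_betw[OF subgroup_mult_left_bij[OF Z(1) z0], of f] by simp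
  also have "\<dots> = f z0 * (\<Sum>z\<in>Z. f z)"
    using mul1 mul2 z0 by (simp add: f_def sum_distrib_left mult_ac)
  finally have "(1 - f z0) * (\<Sum>z\<in>Z. f z) = 0" by (simp add: algebra_simps)
  thus False using f0 ne unfolding f_def by simp
qed

lemma central_subgroup_scalar_char:
  assumes irr: "irreducible_rep G K n \<rho>" and Z: "Z \<subseteq> K"
    and cen: "\<forall>z\<in>Z. \<forall>k\<in>K. z \<otimes> k = k \<otimes> z" and one: "\<one> \<in> Z"
  shows "\<forall>z\<in>Z. \<rho> z = (\<rho> z $$ (0,0)) \<cdot>\<^sub>m 1\<^sub>m n"
    and "\<forall>x\<in>Z. \<forall>y\<in>Z. \<rho> (x \<otimes> y) $$ (0,0) = \<rho> x $$ (0,0) * \<rho> y $$ (0,0)"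
    and "\<rho> \<one> $$ (0,0) = 1"
proof -
  note r = irreducible_repD(1)[OF irr]
  have n: "n > 0" using irreducible_repD(2)[OF irr] .
  show sc: "\<forall>z\<in>Z. \<rho> z = (\<rho> z $$ (0,0)) \<cdot>\<^sub>m 1\<^sub>m n"
    using central_element_acts_scalar[OF irr] Z cen by blast
  show "\<forall>x\<in>Z. \<forall>y\<in>Z. \<rho> (x \<otimes> y) $$ (0,0) = \<rho> x $$ (0,0) * \<rho> y $$ (0,0)"
  proof (intro ballI)
    fix x y assume x: "x \<in> Z" and y: "y \<in> Z"
    have "\<rho> (x \<otimes> y) = \<rho> x * \<rho> y" using is_repD(3)[OF r] x y Z by blast
    also have "\<dots> = ((\<rho> x $$ (0,0)) \<cdot>\<^sub>m 1\<^sub>m n) * ((\<rho> y $$ (0,0)) \<cdot>\<^sub>m 1\<^sub>m n)"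
      using sc x y by (intro arg_cong2[where f="(*)"]) blast+
    also have "\<dots> = (\<rho> x $$ (0,0) * \<rho> y $$ (0,0)) \<cdot>\<^sub>m 1\<^sub>m n"
      by (subst scalar_mat_mult_left[of _ n n]) (simp_all add: smult_smult_mat)
    finally show "\<rho> (x \<otimes> y) $$ (0,0) = \<rho> x $$ (0,0) * \<rho> y $$ (0,0)" using n by simp
  qed
  show "\<rho> \<one> $$ (0,0) = 1" using is_repD(2)[OF r] n by simp
qed

lemma lies_over_central_scalar:
  assumes finK: "finite K" and irr: "irreducible_rep G K n \<rho>"
    and Z: "subgroup Z G" and ZK: "Z \<subseteq> K" and cen: "\<forall>z\<in>Z. \<forall>k\<in>K. z \<otimes> k = k \<otimes> z"
    and nu: "\<nu> \<in> Irr G Z" and th: "\<forall>z\<in>Z. \<theta> z = mat_trace (\<rho> z)" and lo: "lies_over Z \<theta> \<nu>"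
  shows "\<forall>z\<in>Z. \<rho> z = (\<nu> z / \<nu> \<one>) \<cdot>\<^sub>m 1\<^sub>m n"
proof -
  have finZ: "finite Z" using finK ZK finite_subset by blast
  have one: "\<one> \<in> Z" using Z by (rule subgroup.one_closed)
  note \<rho> = central_subgroup_scalar_char[OF irr ZK cen one]
  obtain m \<tau> where irr\<tau>: "irreducible_rep G Z m \<tau>" and \<nu>\<tau>: "\<forall>g\<in>Z. \<nu> g = mat_trace (\<tau> g)"
    using nu unfolding Irr_def by blast
  note \<tau> = central_subgroup_scalar_char[OF irr\<tau> subset_refl _ one] 
  have "\<forall>z\<in>Z. \<forall>k\<in>Z. z \<otimes> k = k \<otimes> z" using cen ZK by blast
  note \<tau> = \<tau>[OF this]
  have m: "m > 0" using irreducible_repD(2)[OF irr\<tau>] .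
  have \<nu>z: "\<nu> z = of_nat m * \<tau> z $$ (0,0)" if z: "z \<in> Z" for z
  proof -
    have "\<nu> z = mat_trace ((\<tau> z $$ (0,0)) \<cdot>\<^sub>m 1\<^sub>m m)"
      unfolding \<nu>\<tau>[rule_format, OF z] using \<tau>(1) z by (intro arg_cong[where f=mat_trace]) blast
    thus ?thesis by (simp add: mat_trace_smult[of "1\<^sub>m m" m])
  qed
  have \<theta>z: "\<theta> z = of_nat n * \<rho> z $$ (0,0)" if z: "z \<in> Z" for z
  proof -
    have "\<theta> z = mat_trace ((\<rho> z $$ (0,0)) \<cdot>\<^sub>m 1\<^sub>m n)"
      unfolding th[rule_format, OF z] using \<rho>(1) z by (intro arg_cong[where f=mat_trace]) blast
    thus ?thesis by (simp add: mat_trace_smult[of "1\<^sub>m n" n])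
  qed
  have "(\<Sum>z\<in>Z. \<theta> z * cnj (\<nu> z)) = of_nat n * of_nat m * (\<Sum>z\<in>Z. \<rho> z $$ (0,0) * cnj (\<tau> z $$ (0,0)))"
    by (simp add: sum_distrib_left \<theta>z \<nu>z mult_ac)
  moreover have "(\<Sum>z\<in>Z. \<theta> z * cnj (\<nu> z)) \<noteq> 0" using lo unfolding lies_over_def char_inner_def by auto
  ultimately have "(\<Sum>z\<in>Z. \<rho> z $$ (0,0) * cnj (\<tau> z $$ (0,0))) \<noteq> 0" by auto
  hence eq: "\<forall>z\<in>Z. \<rho> z $$ (0,0) = \<tau> z $$ (0,0)"
    by (rule linear_chars_orthogonal[OF Z finZ \<rho>(2) \<tau>(2,3)])
  show ?thesis
  proof
    fix z assume z: "z \<in> Z"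
    have "\<nu> z / \<nu> \<one> = \<tau> z $$ (0,0)" using \<nu>z[OF z] \<nu>z[OF one] \<tau>(3) m by simp
    thus "\<rho> z = (\<nu> z / \<nu> \<one>) \<cdot>\<^sub>m 1\<^sub>m n" using \<rho>(1) eq z by simp
  qed
qed

end

locale irrep_subgroup = group A for A :: "('a, 'b) monoid_scheme" (structure) +
  fixes C :: "'a set" and e :: nat and \<sigma> :: "'a \<Rightarrow> complex mat"
  assumes finite_carrier: "finite (carrier A)"
    and C: "subgroup C A"
    and irr_\<sigma>: "irreducible_rep A C e \<sigma>"
begin

lemma finite_C: "finite C"
  using finite_carrier subgroup.subset[OF C] finite_subset by blast

lemma rep_\<sigma>: "is_rep A C e \<sigma>"
  using irreducible_repD(1)[OF irr_\<sigma>] .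

lemma C_carrier: "c \<in> C \<Longrightarrow> c \<in> carrier A"
  using subgroup.mem_carrier[OF C] .

lemma \<sigma>_carrier: "c \<in> C \<Longrightarrow> \<sigma> c \<in> carrier_mat e e"
  using is_repD(1)[OF rep_\<sigma>] .

lemma \<sigma>_mult: "c \<in> C \<Longrightarrow> c' \<in> C \<Longrightarrow> \<sigma> (c \<otimes> c') = \<sigma> c * \<sigma> c'"
  using is_repD(3)[OF rep_\<sigma>] .

lemma \<sigma>_one: "\<sigma> \<one> = 1\<^sub>m e"
  using is_repD(2)[OF rep_\<sigma>] .

lemma \<sigma>_invertible: "c \<in> C \<Longrightarrow> invertible_mat (\<sigma> c)"
  using rep_invertible[OF C rep_\<sigma>] .

lemma e_pos: "e > 0"
  using irreducible_repD(2)[OF irr_\<sigma>] .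

lemma trace_\<sigma>_conj:
  assumes c: "c \<in> C" and \<gamma>: "\<gamma> \<in> C"
  shows "mat_trace (\<sigma> (c \<otimes> \<gamma> \<otimes> inv c)) = mat_trace (\<sigma> \<gamma>)"
proof -
  have ic: "inv c \<in> C" using subgroup.m_inv_closed[OF C c] .
  have "\<sigma> (c \<otimes> \<gamma> \<otimes> inv c) = \<sigma> c * \<sigma> \<gamma> * \<sigma> (inv c)"
    using \<sigma>_mult[OF subgroup.m_closed[OF C c \<gamma>] ic] \<sigma>_mult[OF c \<gamma>] by simp
  hence "mat_trace (\<sigma> (c \<otimes> \<gamma> \<otimes> inv c)) = mat_trace (\<sigma> (inv c) * (\<sigma> c * \<sigma> \<gamma>))"
    using mat_trace_mult_comm[of "\<sigma> c * \<sigma> \<gamma>" e e "\<sigma> (inv c)"] \<sigma>_carrier[OF c] \<sigma>_carrier[OF \<gamma>]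
      \<sigma>_carrier[OF ic] by simp
  also have "\<sigma> (inv c) * (\<sigma> c * \<sigma> \<gamma>) = \<sigma> \<gamma>"
    using mult_cancel_left_mat \<sigma>_carrier c \<gamma> ic rep_inv(1)[OF C rep_\<sigma> c] by blast
  finally show ?thesis .
qed

definition normalizes :: "'a \<Rightarrow> bool" where
  "normalizes g \<longleftrightarrow> g \<in> carrier A \<and> (\<forall>c\<in>C. g \<otimes> c \<otimes> inv g \<in> C \<and> inv g \<otimes> c \<otimes> g \<in> C)"

lemma normalizes_mult:
  assumes "normalizes g" "normalizes h"
  shows "normalizes (g \<otimes> h)"
proof -
  have g: "g \<in> carrier A" and h: "h \<in> carrier A" using assms unfolding normalizes_def by auto
  have "g \<otimes> h \<otimes> c \<otimes> inv (g \<otimes> h) = g \<otimes> (h \<otimes> c \<otimes> inv h) \<otimes> inv g"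
    and "inv (g \<otimes> h) \<otimes> c \<otimes> (g \<otimes> h) = inv h \<otimes> (inv g \<otimes> c \<otimes> g) \<otimes> h" if "c \<in> C" for c
    using g h C_carrier[OF that] by (simp_all add: inv_mult_group m_assoc)
  thus ?thesis using assms g h unfolding normalizes_def by auto
qed

lemma normalizes_inv: "normalizes g \<Longrightarrow> normalizes (inv g)"
  unfolding normalizes_def by simp

lemma normalizes_if_in_C: "c \<in> C \<Longrightarrow> normalizes c"
  unfolding normalizes_def using C C_carrier
  by (auto intro!: subgroup.m_closed[OF C] subgroup.m_inv_closed[OF C])

lemma normalizes_if_centralizes:
  assumes "n \<in> carrier A" "\<forall>\<gamma>\<in>C. \<gamma> \<otimes> n = n \<otimes> \<gamma>"
  shows "normalizes n"
  using assms commute_conj[OF assms(1) C_carrier] unfolding normalizes_def by simp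

definition conj_intertwiner :: "complex mat \<Rightarrow> 'a \<Rightarrow> bool" where
  "conj_intertwiner X g \<longleftrightarrow> (\<forall>\<gamma>\<in>C. X * \<sigma> \<gamma> = \<sigma> (g \<otimes> \<gamma> \<otimes> inv g) * X)"

lemma conj_intertwiner_mult:
  assumes X: "conj_intertwiner X g" "X \<in> carrier_mat e e" and g: "normalizes g"
    and Y: "conj_intertwiner Y h" "Y \<in> carrier_mat e e" and h: "normalizes h"
  shows "conj_intertwiner (X * Y) (g \<otimes> h)"
  unfolding conj_intertwiner_def
proof
  fix \<gamma> assume \<gamma>: "\<gamma> \<in> C"
  have gA: "g \<in> carrier A" and hA: "h \<in> carrier A" using g h unfolding normalizes_def by auto
  have h\<gamma>: "h \<otimes> \<gamma> \<otimes> inv h \<in> C" using h \<gamma> unfolding normalizes_def by auto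
  have gh\<gamma>: "(g \<otimes> h) \<otimes> \<gamma> \<otimes> inv (g \<otimes> h) \<in> C"
    using normalizes_mult[OF g h] \<gamma> unfolding normalizes_def by auto
  have "X * Y * \<sigma> \<gamma> = X * \<sigma> (h \<otimes> \<gamma> \<otimes> inv h) * Y"
    using X Y \<sigma>_carrier[OF \<gamma>] \<sigma>_carrier[OF h\<gamma>] \<gamma> unfolding conj_intertwiner_def
    by (simp add: assoc_mult_mat[of _ e e _ e _ e])
  also have "\<dots> = \<sigma> (g \<otimes> (h \<otimes> \<gamma> \<otimes> inv h) \<otimes> inv g) * (X * Y)"
    using X Y \<sigma>_carrier h\<gamma> normalizes_def g unfolding conj_intertwiner_def
    by (simp add: assoc_mult_mat[of _ e e _ e _ e])
  also have "g \<otimes> (h \<otimes> \<gamma> \<otimes> inv h) \<otimes> inv g = (g \<otimes> h) \<otimes> \<gamma> \<otimes> inv (g \<otimes> h)"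
    using gA hA C_carrier[OF \<gamma>] by (simp add: inv_mult_group m_assoc)
  finally show "X * Y * \<sigma> \<gamma> = \<sigma> (g \<otimes> h \<otimes> \<gamma> \<otimes> inv (g \<otimes> h)) * (X * Y)" .
qed

lemma conj_intertwiner_\<sigma>: "c \<in> C \<Longrightarrow> conj_intertwiner (\<sigma> c) c"
  unfolding conj_intertwiner_def
proof
  fix \<gamma> assume c: "c \<in> C" and \<gamma>: "\<gamma> \<in> C"
  have c\<gamma>: "c \<otimes> \<gamma> \<otimes> inv c \<in> C" using normalizes_if_in_C[OF c] \<gamma> unfolding normalizes_def by auto
  have "c \<otimes> \<gamma> = (c \<otimes> \<gamma> \<otimes> inv c) \<otimes> c" using C_carrier[OF c] C_carrier[OF \<gamma>] by (simp add: m_assoc)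
  thus "\<sigma> c * \<sigma> \<gamma> = \<sigma> (c \<otimes> \<gamma> \<otimes> inv c) * \<sigma> c" using \<sigma>_mult[OF c\<gamma> c] \<sigma>_mult[OF c \<gamma>] by simp
qed

lemma conj_intertwiner_centralizing_factor:
  assumes X: "conj_intertwiner X (t \<otimes> c)" and t: "t \<in> carrier A" and m: "m \<in> carrier A"
    and mC: "\<forall>\<gamma>\<in>C. m \<otimes> \<gamma> = \<gamma> \<otimes> m" and c: "c \<in> C"
  shows "conj_intertwiner X (t \<otimes> m \<otimes> c)"
  unfolding conj_intertwiner_def
proof
  fix \<gamma> assume \<gamma>: "\<gamma> \<in> C"
  have c\<gamma>: "c \<otimes> \<gamma> \<otimes> inv c \<in> C" using normalizes_if_in_C[OF c] \<gamma> unfolding normalizes_def by auto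
  note cA = C_carrier[OF c] and \<gamma>A = C_carrier[OF \<gamma>]
  have "(t \<otimes> m \<otimes> c) \<otimes> \<gamma> \<otimes> inv (t \<otimes> m \<otimes> c) = t \<otimes> (m \<otimes> (c \<otimes> \<gamma> \<otimes> inv c)) \<otimes> inv m \<otimes> inv t"
    using t m cA \<gamma>A by (simp add: inv_mult_group m_assoc)
  also have "m \<otimes> (c \<otimes> \<gamma> \<otimes> inv c) = (c \<otimes> \<gamma> \<otimes> inv c) \<otimes> m" using mC c\<gamma> by blast
  also have "t \<otimes> ((c \<otimes> \<gamma> \<otimes> inv c) \<otimes> m) \<otimes> inv m \<otimes> inv t = (t \<otimes> c) \<otimes> \<gamma> \<otimes> inv (t \<otimes> c)"
    using t m cA \<gamma>A by (simp add: inv_mult_group m_assoc)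
  finally show "X * \<sigma> \<gamma> = \<sigma> (t \<otimes> m \<otimes> c \<otimes> \<gamma> \<otimes> inv (t \<otimes> m \<otimes> c)) * X"
    using X \<gamma> unfolding conj_intertwiner_def by simp
qed

lemma conj_intertwiners_proportional:
  assumes X: "conj_intertwiner X g" "X \<in> carrier_mat e e"
    and V: "conj_intertwiner V g" "V \<in> carrier_mat e e" "invertible_mat V" and g: "normalizes g"
  shows "\<exists>\<kappa>. X = \<kappa> \<cdot>\<^sub>m V"
proof (rule twisted_intertwiners_proportional[OF irr_\<sigma> _ X(2) _ V(2,3)])
  have gA: "g \<in> carrier A" using g unfolding normalizes_def by auto
  show "C \<subseteq> (\<lambda>\<gamma>. g \<otimes> \<gamma> \<otimes> inv g) ` C"
  proof
    fix \<gamma> assume \<gamma>: "\<gamma> \<in> C"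
    have "\<gamma> = g \<otimes> (inv g \<otimes> \<gamma> \<otimes> g) \<otimes> inv g"
      using gA C_carrier[OF \<gamma>] by (simp add: m_assoc mult_inv_cancel_left)
    moreover have "inv g \<otimes> \<gamma> \<otimes> g \<in> C" using g \<gamma> unfolding normalizes_def by auto
    ultimately show "\<gamma> \<in> (\<lambda>\<gamma>. g \<otimes> \<gamma> \<otimes> inv g) ` C" by blast
  qed
qed (use X(1) V(1) in \<open>simp_all add: conj_intertwiner_def\<close>)

lemma conj_intertwiner_exists:
  assumes t: "normalizes t" and tr: "\<forall>c\<in>C. mat_trace (\<sigma> (t \<otimes> c \<otimes> inv t)) = mat_trace (\<sigma> c)"
  shows "\<exists>T. T \<in> carrier_mat e e \<and> invertible_mat T \<and> (\<forall>c\<in>C. \<sigma> (t \<otimes> c \<otimes> inv t) * T = T * \<sigma> c)"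
proof -
  have tA: "t \<in> carrier A" and tc: "\<And>c. c \<in> C \<Longrightarrow> t \<otimes> c \<otimes> inv t \<in> C"
    using t unfolding normalizes_def by auto
  have "is_rep A C e (\<lambda>c. \<sigma> (t \<otimes> c \<otimes> inv t))"
    unfolding is_rep_def
  proof (intro conjI ballI)
    show "\<sigma> (t \<otimes> g \<otimes> inv t) \<in> carrier_mat e e" if "g \<in> C" for g using \<sigma>_carrier tc that by blast
    show "\<sigma> (t \<otimes> \<one> \<otimes> inv t) = 1\<^sub>m e" using tA \<sigma>_one by simp
    show "\<sigma> (t \<otimes> (g \<otimes> h) \<otimes> inv t) = \<sigma> (t \<otimes> g \<otimes> inv t) * \<sigma> (t \<otimes> h \<otimes> inv t)" if "g \<in> C" "h \<in> C" for g h
      using conj_mult[OF tA C_carrier C_carrier] \<sigma>_mult[OF tc tc] that by simp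
  qed
  from same_character_equivalent[OF C finite_C irr_\<sigma> this tr] show ?thesis by blast
qed

end

section \<open>The central product character and its stabilizer\<close>

locale cprod_triple = irrep_subgroup +
  fixes K N :: "'a set" and \<theta> :: "'a \<Rightarrow> complex" and P :: "'a \<Rightarrow> complex mat"
    and \<alpha> :: "'a \<times> 'a \<Rightarrow> complex" and d :: nat and \<psi> \<nu> :: "'a \<Rightarrow> complex"
  assumes triple: "char_triple A K N \<theta>"
    and P_carrier_invertible: "\<forall>x\<in>K. P x \<in> carrier_mat d d \<and> invertible_mat (P x)"
    and P_factor_set: "\<forall>x\<in>K. \<forall>y\<in>K. P x * P y = \<alpha> (x, y) \<cdot>\<^sub>m P (x \<otimes> y)"
    and rep_P: "is_rep A N d P"
    and \<theta>_P: "\<forall>n\<in>N. \<theta> n = mat_trace (P n)"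
    and P_mult_N: "\<forall>x\<in>K. \<forall>n\<in>N. P (x \<otimes> n) = P x * P n \<and> P (n \<otimes> x) = P n * P x"
    and C_sub_K: "C \<subseteq> K"
    and C_centralizes_N: "\<forall>c\<in>C. \<forall>n\<in>N. c \<otimes> n = n \<otimes> c"
    and \<psi>_\<sigma>: "\<forall>c\<in>C. \<psi> c = mat_trace (\<sigma> c)"
    and \<nu>: "\<nu> \<in> Irr A (C \<inter> N)"
    and \<theta>_over_\<nu>: "lies_over (C \<inter> N) \<theta> \<nu>" and \<psi>_over_\<nu>: "lies_over (C \<inter> N) \<psi> \<nu>"
begin

abbreviation "NC \<equiv> N <#> C"

abbreviation "\<chi> \<equiv> cprod_char A N C \<theta> \<psi>"

abbreviation "stab \<equiv> char_stab A (normalizer_in A K C) \<chi>"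

lemma K_subgroup: "subgroup K A"
  using triple unfolding char_triple_def by blast

lemma N_normal: "N \<lhd> A\<lparr>carrier := K\<rparr>"
  using triple unfolding char_triple_def by blast

lemma N_subgroup: "subgroup N A"
  using incl_subgroup[OF K_subgroup normal_imp_subgroup[OF N_normal]] .

lemma N_sub_K: "N \<subseteq> K"
  using subgroup.subset[OF normal_imp_subgroup[OF N_normal]] by simp

lemma finite_N: "finite N"
  using finite_carrier subgroup.subset[OF N_subgroup] finite_subset by blast

lemma N_carrier: "n \<in> N \<Longrightarrow> n \<in> carrier A"
  using subgroup.mem_carrier[OF N_subgroup] .

lemma K_carrier: "k \<in> K \<Longrightarrow> k \<in> carrier A"
  using subgroup.mem_carrier[OF K_subgroup] .

lemma N_conj: assumes "g \<in> K" "n \<in> N" shows "g \<otimes> n \<otimes> inv g \<in> N"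
proof -
  have "g \<otimes>\<^bsub>A\<lparr>carrier := K\<rparr>\<^esub> n \<otimes>\<^bsub>A\<lparr>carrier := K\<rparr>\<^esub> inv\<^bsub>A\<lparr>carrier := K\<rparr>\<^esub> g \<in> N"
    using normal.inv_op_closed2[OF N_normal] assms by simp
  thus ?thesis using m_inv_consistent[OF K_subgroup assms(1)] by simp
qed

lemma N_conj_inv: "g \<in> K \<Longrightarrow> n \<in> N \<Longrightarrow> inv g \<otimes> n \<otimes> g \<in> N"
  using N_conj[OF subgroup.m_inv_closed[OF K_subgroup]] K_carrier by fastforce

lemma \<theta>_invariant: "g \<in> K \<Longrightarrow> x \<in> carrier A \<Longrightarrow> \<theta> (g \<otimes> x \<otimes> inv g) = \<theta> x"
  using triple unfolding char_triple_def by blast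

lemma P_irreducible: "irreducible_rep A N d P"
proof -
  obtain n0 \<rho>0 where irr0: "irreducible_rep A N n0 \<rho>0" and t0: "\<forall>g\<in>N. \<theta> g = mat_trace (\<rho>0 g)"
    using triple unfolding char_triple_def Irr_def by blast
  have "\<forall>k\<in>N. mat_trace (P k) = mat_trace (\<rho>0 k)" using t0 \<theta>_P by simp
  from same_character_equivalent[OF N_subgroup finite_N irr0 rep_P this]
  obtain T where "d = n0" "T \<in> carrier_mat n0 n0" "invertible_mat T" "\<forall>k\<in>N. P k * T = T * \<rho>0 k"
    by blast
  thus ?thesis using irreducible_rep_similar[OF irr0] rep_P by blast
qed

lemma d_pos: "d > 0"
  using irreducible_repD(2)[OF P_irreducible] .

lemma P_carrier: "x \<in> K \<Longrightarrow> P x \<in> carrier_mat d d"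
  using P_carrier_invertible by blast

lemma P_invertible: "x \<in> K \<Longrightarrow> invertible_mat (P x)"
  using P_carrier_invertible by blast

lemma P_mult_N_right: "x \<in> K \<Longrightarrow> n \<in> N \<Longrightarrow> P (x \<otimes> n) = P x * P n"
  using P_mult_N by blast

lemma P_mult_N_left: "x \<in> K \<Longrightarrow> n \<in> N \<Longrightarrow> P (n \<otimes> x) = P n * P x"
  using P_mult_N by blast

lemma P_one: "P \<one> = 1\<^sub>m d"
  using is_repD(2)[OF rep_P] .

lemma \<theta>_one: "\<theta> \<one> = of_nat d"
  using \<theta>_P P_one subgroup.one_closed[OF N_subgroup] by simp

lemma P_on_C_inter_N: "z \<in> C \<inter> N \<Longrightarrow> P z = (\<nu> z / \<nu> \<one>) \<cdot>\<^sub>m 1\<^sub>m d"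
  using lies_over_central_scalar[OF finite_N P_irreducible subgroups_Inter_pair[OF C N_subgroup]
      _ _ \<nu> _ \<theta>_over_\<nu>] C_centralizes_N \<theta>_P by blast

lemma \<sigma>_on_C_inter_N: "z \<in> C \<inter> N \<Longrightarrow> \<sigma> z = (\<nu> z / \<nu> \<one>) \<cdot>\<^sub>m 1\<^sub>m e"
proof -
  have "\<forall>z\<in>C \<inter> N. \<forall>k\<in>C. z \<otimes> k = k \<otimes> z" using C_centralizes_N by (metis IntD1 IntD2)
  thus "z \<in> C \<inter> N \<Longrightarrow> ?thesis"
    using lies_over_central_scalar[OF finite_C irr_\<sigma> subgroups_Inter_pair[OF C N_subgroup]
        _ _ \<nu> _ \<psi>_over_\<nu>] \<psi>_\<sigma> by blast
qed

lemma N_sub_NC: "N \<subseteq> NC"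
proof
  fix n assume n: "n \<in> N"
  have "n \<otimes> \<one> \<in> NC" using set_multI[where G=A, OF n subgroup.one_closed[OF C]] .
  thus "n \<in> NC" using N_carrier[OF n] by simp
qed

text \<open>Both factors of n c are determined up to an element z of C \<inter> N, on which P and \<sigma> act by
  the same scalar; so the Kronecker product below does not depend on the decomposition.\<close>
lemma kron_decomposition_independent:
  assumes t: "t \<in> K" and n: "n \<in> N" and n': "n' \<in> N" and c: "c \<in> C" and c': "c' \<in> C"
    and eq: "n \<otimes> c = n' \<otimes> c'" and U: "U \<in> carrier_mat e e"
  shows "kron (P (t \<otimes> n)) (U * \<sigma> c) = kron (P (t \<otimes> n')) (U * \<sigma> c')"
proof -
  have nA: "n \<in> carrier A" and n'A: "n' \<in> carrier A" using N_carrier n n' by auto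
  have cA: "c \<in> carrier A" and c'A: "c' \<in> carrier A" using C_carrier c c' by auto
  define z where "z = inv n' \<otimes> n"
  have zN: "z \<in> N" unfolding z_def using N_subgroup n n' by (simp add: subgroup.m_closed subgroup.m_inv_closed)
  have z': "z = c' \<otimes> inv c"
  proof -
    have "inv n' \<otimes> n = inv n' \<otimes> (n \<otimes> c) \<otimes> inv c" using nA n'A cA by (simp add: m_assoc)
    also have "\<dots> = c' \<otimes> inv c" using eq n'A c'A cA by (simp add: m_assoc[symmetric])
    finally show ?thesis unfolding z_def .
  qed
  have zC: "z \<in> C" unfolding z' using C c c' by (simp add: subgroup.m_closed subgroup.m_inv_closed)
  have zA: "z \<in> carrier A" using N_carrier zN .
  have tn': "t \<otimes> n' \<in> K" using t n' N_sub_K subgroup.m_closed[OF K_subgroup] by blast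
  have "P (t \<otimes> n) = P ((t \<otimes> n') \<otimes> z)"
    using K_carrier[OF t] n'A zA nA by (simp add: z_def m_assoc mult_inv_cancel_left)
  also have "\<dots> = (\<nu> z / \<nu> \<one>) \<cdot>\<^sub>m P (t \<otimes> n')"
    using P_mult_N_right[OF tn' zN] P_on_C_inter_N[of z] zC zN P_carrier[OF tn'] scalar_mat_mult_right by simp
  finally have 1: "P (t \<otimes> n) = (\<nu> z / \<nu> \<one>) \<cdot>\<^sub>m P (t \<otimes> n')" .
  have "U * \<sigma> c' = U * (\<sigma> z * \<sigma> c)" using \<sigma>_mult[OF zC c] cA c'A by (simp add: z' m_assoc)
  also have "\<dots> = (\<nu> z / \<nu> \<one>) \<cdot>\<^sub>m (U * \<sigma> c)"
    using \<sigma>_on_C_inter_N[of z] zC zN scalar_mat_mult_left[OF \<sigma>_carrier[OF c]]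
      mult_smult_distrib[OF U \<sigma>_carrier[OF c]] by simp
  finally have 2: "U * \<sigma> c' = (\<nu> z / \<nu> \<one>) \<cdot>\<^sub>m (U * \<sigma> c)" .
  show ?thesis unfolding 1 2 by (simp add: kron_smult_left kron_smult_right)
qed

lemma cprod_char_mult:
  assumes n: "n \<in> N" and c: "c \<in> C"
  shows "\<chi> (n \<otimes> c) = \<theta> n * \<psi> c"
proof -
  define p where "p = (SOME p. fst p \<in> N \<and> snd p \<in> C \<and> n \<otimes> c = fst p \<otimes> snd p)"
  have "\<exists>p. fst p \<in> N \<and> snd p \<in> C \<and> n \<otimes> c = fst p \<otimes> snd p" using n c by (intro exI[of _ "(n,c)"]) simp
  hence p: "fst p \<in> N" "snd p \<in> C" "n \<otimes> c = fst p \<otimes> snd p"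
    unfolding p_def by (metis (mono_tags, lifting) someI_ex)+
  have \<chi>: "\<chi> (n \<otimes> c) = \<theta> (fst p) * \<psi> (snd p)"
    unfolding cprod_char_def using set_multI[where G=A, OF n c] by (simp add: p_def Let_def)
  have kw: "kron (P (\<one> \<otimes> n)) (1\<^sub>m e * \<sigma> c) = kron (P (\<one> \<otimes> fst p)) (1\<^sub>m e * \<sigma> (snd p))"
    by (rule kron_decomposition_independent[OF subgroup.one_closed[OF K_subgroup] n p(1) c p(2) p(3)]) simp
  have "\<theta> n * \<psi> c = mat_trace (kron (P n) (\<sigma> c))"
    using \<theta>_P \<psi>_\<sigma> n c mat_trace_kron[OF is_repD(1)[OF rep_P n] \<sigma>_carrier[OF c]] by simp
  also have "\<dots> = mat_trace (kron (P (fst p)) (\<sigma> (snd p)))"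
    using kw N_carrier[OF n] N_carrier[OF p(1)] \<sigma>_carrier[OF c] \<sigma>_carrier[OF p(2)] by simp
  also have "\<dots> = \<theta> (fst p) * \<psi> (snd p)"
    using \<theta>_P \<psi>_\<sigma> p mat_trace_kron[OF is_repD(1)[OF rep_P p(1)] \<sigma>_carrier[OF p(2)]] by simp
  finally show ?thesis using \<chi> by simp
qed

lemma cprod_char_outside: "x \<notin> NC \<Longrightarrow> \<chi> x = 0"
  unfolding cprod_char_def by simp

lemma normalizer_in_iff: "g \<in> normalizer_in A K C \<longleftrightarrow> g \<in> K \<and> normalizes g"
proof
  assume g: "g \<in> normalizer_in A K C"
  hence gK: "g \<in> K" and im: "(\<lambda>x. g \<otimes> x \<otimes> inv g) ` C = C" unfolding normalizer_in_def by auto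
  have gA: "g \<in> carrier A" using K_carrier[OF gK] .
  have "inv g \<otimes> c \<otimes> g \<in> C" if c: "c \<in> C" for c
  proof -
    from c im obtain c' where c': "c' \<in> C" "c = g \<otimes> c' \<otimes> inv g" by blast
    have "inv g \<otimes> c \<otimes> g = c'" using c' gA C_carrier[OF c'(1)] by (simp add: m_assoc inv_mult_cancel_left)
    thus ?thesis using c' by simp
  qed
  thus "g \<in> K \<and> normalizes g" using gK gA im unfolding normalizes_def by blast
next
  assume g: "g \<in> K \<and> normalizes g"
  hence gA: "g \<in> carrier A" and gC: "\<forall>c\<in>C. g \<otimes> c \<otimes> inv g \<in> C \<and> inv g \<otimes> c \<otimes> g \<in> C"
    unfolding normalizes_def by auto
  have "C \<subseteq> (\<lambda>x. g \<otimes> x \<otimes> inv g) ` C"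
  proof
    fix c assume c: "c \<in> C"
    have "c = g \<otimes> (inv g \<otimes> c \<otimes> g) \<otimes> inv g" using gA C_carrier[OF c] by (simp add: m_assoc mult_inv_cancel_left)
    thus "c \<in> (\<lambda>x. g \<otimes> x \<otimes> inv g) ` C" using gC c by blast
  qed
  hence "(\<lambda>x. g \<otimes> x \<otimes> inv g) ` C = C" using gC by blast
  thus "g \<in> normalizer_in A K C" using g unfolding normalizer_in_def by blast
qed

lemma conj_outside_NC:
  assumes gK: "g \<in> K" and g: "normalizes g" and x: "x \<in> carrier A" "x \<notin> NC"
  shows "g \<otimes> x \<otimes> inv g \<notin> NC"
proof
  assume "g \<otimes> x \<otimes> inv g \<in> NC"
  then obtain n c where n: "n \<in> N" and c: "c \<in> C" and xe: "g \<otimes> x \<otimes> inv g = n \<otimes> c" by (rule set_multE)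
  have gA: "g \<in> carrier A" using K_carrier[OF gK] .
  have "x = inv g \<otimes> (g \<otimes> x \<otimes> inv g) \<otimes> g" using gA x by (simp add: m_assoc inv_mult_cancel_left)
  also have "\<dots> = (inv g \<otimes> n \<otimes> g) \<otimes> (inv g \<otimes> c \<otimes> g)"
    using xe conj_mult[of "inv g" n c] gA N_carrier[OF n] C_carrier[OF c] by simp
  moreover have "inv g \<otimes> c \<otimes> g \<in> C" using g c unfolding normalizes_def by blast
  ultimately have "x \<in> NC" using set_multI[where G=A, OF N_conj_inv[OF gK n]] by simp
  thus False using x(2) by simp
qed

lemma stabD:
  assumes "g \<in> stab"
  shows "g \<in> K" and "normalizes g" and "\<forall>c\<in>C. \<psi> (g \<otimes> c \<otimes> inv g) = \<psi> c"
proof -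
  from assms have gN: "g \<in> normalizer_in A K C" and st: "\<forall>x\<in>carrier A. \<chi> (g \<otimes> x \<otimes> inv g) = \<chi> x"
    unfolding char_stab_def by auto
  thus gK: "g \<in> K" and ng: "normalizes g" using normalizer_in_iff by auto
  have one: "\<one> \<in> N" using subgroup.one_closed[OF N_subgroup] .
  show "\<forall>c\<in>C. \<psi> (g \<otimes> c \<otimes> inv g) = \<psi> c"
  proof
    fix c assume c: "c \<in> C"
    have gc: "g \<otimes> c \<otimes> inv g \<in> C" using ng c unfolding normalizes_def by auto
    have "\<theta> \<one> * \<psi> (g \<otimes> c \<otimes> inv g) = \<theta> \<one> * \<psi> c"
      using st C_carrier[OF c] cprod_char_mult[OF one gc] cprod_char_mult[OF one c] C_carrier[OF gc] by simp
    thus "\<psi> (g \<otimes> c \<otimes> inv g) = \<psi> c" using \<theta>_one d_pos by simp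
  qed
qed

lemma stabI:
  assumes gK: "g \<in> K" and ng: "normalizes g" and \<psi>g: "\<forall>c\<in>C. \<psi> (g \<otimes> c \<otimes> inv g) = \<psi> c"
  shows "g \<in> stab"
proof -
  have gA: "g \<in> carrier A" using K_carrier[OF gK] .
  have "\<chi> (g \<otimes> x \<otimes> inv g) = \<chi> x" if x: "x \<in> carrier A" for x
  proof (cases "x \<in> NC")
    case True
    then obtain n c where n: "n \<in> N" and c: "c \<in> C" and xe: "x = n \<otimes> c" by (rule set_multE)
    have gc: "g \<otimes> c \<otimes> inv g \<in> C" using ng c unfolding normalizes_def by auto
    have "\<chi> (g \<otimes> x \<otimes> inv g) = \<chi> ((g \<otimes> n \<otimes> inv g) \<otimes> (g \<otimes> c \<otimes> inv g))"
      using xe conj_mult gA N_carrier[OF n] C_carrier[OF c] by simp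
    also have "\<dots> = \<theta> n * \<psi> c"
      using cprod_char_mult[OF N_conj[OF gK n] gc] \<theta>_invariant[OF gK N_carrier[OF n]] \<psi>g c by simp
    also have "\<dots> = \<chi> x" using cprod_char_mult[OF n c] xe by simp
    finally show ?thesis .
  next
    case False
    thus ?thesis using conj_outside_NC[OF gK ng x False] cprod_char_outside by simp
  qed
  moreover have "g \<in> normalizer_in A K C" using normalizer_in_iff gK ng by blast
  ultimately show "g \<in> stab" unfolding char_stab_def by blast
qed

lemma stab_iff: "g \<in> stab \<longleftrightarrow> g \<in> K \<and> normalizes g \<and> (\<forall>c\<in>C. \<psi> (g \<otimes> c \<otimes> inv g) = \<psi> c)"
  using stabD stabI by blast

lemma NC_subgroup: "subgroup NC A"
proof (rule subgroupI)
  show "NC \<subseteq> carrier A"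
  proof
    fix y assume "y \<in> NC"
    then obtain n c where "n \<in> N" "c \<in> C" "y = n \<otimes> c" by (rule set_multE)
    thus "y \<in> carrier A" using N_carrier C_carrier by simp
  qed
  show "NC \<noteq> {}" using set_multI[where G=A, OF subgroup.one_closed[OF N_subgroup] subgroup.one_closed[OF C]] by blast
next
  fix a assume "a \<in> NC"
  then obtain n c where n: "n \<in> N" and c: "c \<in> C" and a: "a = n \<otimes> c" by (rule set_multE)
  have "inv a = inv c \<otimes> inv n" using a N_carrier[OF n] C_carrier[OF c] by (simp add: inv_mult_group)
  also have "\<dots> = inv n \<otimes> inv c"
    using C_centralizes_N subgroup.m_inv_closed[OF C c] subgroup.m_inv_closed[OF N_subgroup n] by blast
  finally show "inv a \<in> NC"
    using set_multI[where G=A, OF subgroup.m_inv_closed[OF N_subgroup n] subgroup.m_inv_closed[OF C c]] by simp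
next
  fix a b assume "a \<in> NC" "b \<in> NC"
  obtain n c where n: "n \<in> N" and c: "c \<in> C" and a: "a = n \<otimes> c" using \<open>a \<in> NC\<close> by (rule set_multE)
  obtain n' c' where n': "n' \<in> N" and c': "c' \<in> C" and b: "b = n' \<otimes> c'" using \<open>b \<in> NC\<close> by (rule set_multE)
  note carr = N_carrier[OF n] C_carrier[OF c] N_carrier[OF n'] C_carrier[OF c']
  have "a \<otimes> b = n \<otimes> (c \<otimes> n') \<otimes> c'" using a b carr by (simp add: m_assoc)
  also have "c \<otimes> n' = n' \<otimes> c" using C_centralizes_N c n' by blast
  also have "n \<otimes> (n' \<otimes> c) \<otimes> c' = (n \<otimes> n') \<otimes> (c \<otimes> c')" using carr by (simp add: m_assoc)
  finally show "a \<otimes> b \<in> NC"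
    using set_multI[where G=A, OF subgroup.m_closed[OF N_subgroup n n'] subgroup.m_closed[OF C c c']] by simp
qed

lemma NC_carrier: "y \<in> NC \<Longrightarrow> y \<in> carrier A"
  using subgroup.mem_carrier[OF NC_subgroup] .

lemma NC_sub_K: "NC \<subseteq> K"
proof
  fix y assume "y \<in> NC"
  then obtain n c where "n \<in> N" "c \<in> C" "y = n \<otimes> c" by (rule set_multE)
  thus "y \<in> K" using N_sub_K C_sub_K subgroup.m_closed[OF K_subgroup] by auto
qed

lemma stab_subgroup: "subgroup stab A"
proof (rule subgroupI)
  show "stab \<subseteq> carrier A" using stab_iff K_carrier by blast
  have "\<one> \<in> stab"
    using stabI[OF subgroup.one_closed[OF K_subgroup]] C_carrier
    unfolding normalizes_def by simp
  thus "stab \<noteq> {}" by blast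
next
  fix g assume g: "g \<in> stab"
  hence gK: "g \<in> K" and ng: "normalizes g" and \<psi>g: "\<forall>c\<in>C. \<psi> (g \<otimes> c \<otimes> inv g) = \<psi> c"
    using stab_iff by auto
  have gA: "g \<in> carrier A" using K_carrier[OF gK] .
  have "\<psi> (inv g \<otimes> c \<otimes> inv (inv g)) = \<psi> c" if c: "c \<in> C" for c
  proof -
    have c': "inv g \<otimes> c \<otimes> g \<in> C" using ng c unfolding normalizes_def by auto
    have "g \<otimes> (inv g \<otimes> c \<otimes> g) \<otimes> inv g = c" using gA C_carrier[OF c] by (simp add: m_assoc mult_inv_cancel_left)
    thus ?thesis using \<psi>g c' gA by force
  qed
  thus "inv g \<in> stab"
    using stabI[OF subgroup.m_inv_closed[OF K_subgroup gK] normalizes_inv[OF ng]] by blast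
next
  fix g h assume g: "g \<in> stab" and h: "h \<in> stab"
  hence gK: "g \<in> K" and ng: "normalizes g" and \<psi>g: "\<forall>c\<in>C. \<psi> (g \<otimes> c \<otimes> inv g) = \<psi> c"
    and hK: "h \<in> K" and nh: "normalizes h" and \<psi>h: "\<forall>c\<in>C. \<psi> (h \<otimes> c \<otimes> inv h) = \<psi> c"
    using stab_iff by auto
  have "\<psi> ((g \<otimes> h) \<otimes> c \<otimes> inv (g \<otimes> h)) = \<psi> c" if c: "c \<in> C" for c
  proof -
    have hc: "h \<otimes> c \<otimes> inv h \<in> C" using nh c unfolding normalizes_def by auto
    have "(g \<otimes> h) \<otimes> c \<otimes> inv (g \<otimes> h) = g \<otimes> (h \<otimes> c \<otimes> inv h) \<otimes> inv g"
      using K_carrier[OF gK] K_carrier[OF hK] C_carrier[OF c] by (simp add: m_assoc inv_mult_group)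
    thus ?thesis using \<psi>g \<psi>h hc c by simp
  qed
  thus "g \<otimes> h \<in> stab"
    using stabI[OF subgroup.m_closed[OF K_subgroup gK hK] normalizes_mult[OF ng nh]] by blast
qed

lemma stab_carrier: "x \<in> stab \<Longrightarrow> x \<in> carrier A"
  using subgroup.mem_carrier[OF stab_subgroup] .

lemma NC_sub_stab: "NC \<subseteq> stab"
proof
  fix y assume y: "y \<in> NC"
  then obtain n c where n: "n \<in> N" and c: "c \<in> C" and ye: "y = n \<otimes> c" by (rule set_multE)
  have nA: "n \<in> carrier A" using N_carrier[OF n] .
  have nC: "n \<otimes> \<gamma> \<otimes> inv n = \<gamma>" if "\<gamma> \<in> C" for \<gamma>
  proof -
    have "n \<otimes> \<gamma> = \<gamma> \<otimes> n" using bspec[OF bspec[OF C_centralizes_N that] n] by (rule sym)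
    thus ?thesis using commute_conj(1)[OF nA C_carrier[OF that]] by simp
  qed
  have "\<forall>\<gamma>\<in>C. \<gamma> \<otimes> n = n \<otimes> \<gamma>" using C_centralizes_N n by blast
  hence ny: "normalizes y"
    using ye normalizes_mult[OF normalizes_if_centralizes[OF nA] normalizes_if_in_C[OF c]] by simp
  have "\<psi> (y \<otimes> \<gamma> \<otimes> inv y) = \<psi> \<gamma>" if \<gamma>: "\<gamma> \<in> C" for \<gamma>
  proof -
    have c\<gamma>: "c \<otimes> \<gamma> \<otimes> inv c \<in> C" using normalizes_if_in_C[OF c] \<gamma> unfolding normalizes_def by auto
    have "y \<otimes> \<gamma> \<otimes> inv y = n \<otimes> (c \<otimes> \<gamma> \<otimes> inv c) \<otimes> inv n"
      using ye nA C_carrier[OF c] C_carrier[OF \<gamma>] by (simp add: m_assoc inv_mult_group)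
    also have "\<dots> = c \<otimes> \<gamma> \<otimes> inv c" using nC[OF c\<gamma>] .
    finally show ?thesis using trace_\<sigma>_conj[OF c \<gamma>] \<psi>_\<sigma> c \<gamma> c\<gamma> by simp
  qed
  thus "y \<in> stab" using stabI ny NC_sub_K y by blast
qed

lemma NC_conj: assumes g: "g \<in> stab" and y: "y \<in> NC" shows "g \<otimes> y \<otimes> inv g \<in> NC"
proof -
  obtain n c where n: "n \<in> N" and c: "c \<in> C" and ye: "y = n \<otimes> c" using y by (rule set_multE)
  have gK: "g \<in> K" and ng: "normalizes g" using g stab_iff by auto
  have "g \<otimes> y \<otimes> inv g = (g \<otimes> n \<otimes> inv g) \<otimes> (g \<otimes> c \<otimes> inv g)"
    using conj_mult ye K_carrier[OF gK] N_carrier[OF n] C_carrier[OF c] by simp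
  moreover have "g \<otimes> c \<otimes> inv g \<in> C" using ng c unfolding normalizes_def by blast
  ultimately show ?thesis using set_multI[where G=A, OF N_conj[OF gK n]] by simp
qed

lemma NC_normal: "NC \<lhd> A\<lparr>carrier := stab\<rparr>"
proof -
  have "group (A\<lparr>carrier := stab\<rparr>)" using subgroup.subgroup_is_group[OF stab_subgroup is_group] .
  moreover have "subgroup NC (A\<lparr>carrier := stab\<rparr>)" using subgroup_incl[OF NC_subgroup stab_subgroup NC_sub_stab] .
  moreover have "\<forall>x\<in>carrier (A\<lparr>carrier := stab\<rparr>). \<forall>h\<in>NC.
      x \<otimes>\<^bsub>A\<lparr>carrier := stab\<rparr>\<^esub> h \<otimes>\<^bsub>A\<lparr>carrier := stab\<rparr>\<^esub> inv\<^bsub>A\<lparr>carrier := stab\<rparr>\<^esub> x \<in> NC"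
    using NC_conj m_inv_consistent[OF stab_subgroup] by simp
  ultimately show ?thesis using group.normal_inv_iff by blast
qed

lemma P_mult_scalar:
  assumes w: "w \<in> K" and c: "c \<in> K" and Pc: "P c = z \<cdot>\<^sub>m 1\<^sub>m d"
  shows "\<alpha> (w, c) \<noteq> 0" and "P (w \<otimes> c) = (z / \<alpha> (w, c)) \<cdot>\<^sub>m P w"
proof -
  have wc: "w \<otimes> c \<in> K" using subgroup.m_closed[OF K_subgroup w c] .
  have prod: "P w * P c = \<alpha> (w, c) \<cdot>\<^sub>m P (w \<otimes> c)" using P_factor_set w c by blast
  have fs: "\<alpha> (w, c) \<cdot>\<^sub>m P (w \<otimes> c) = z \<cdot>\<^sub>m P w"
    using prod Pc scalar_mat_mult_right[OF P_carrier[OF w]] by simp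
  have "invertible_mat (\<alpha> (w, c) \<cdot>\<^sub>m P (w \<otimes> c))"
    using invertible_mat_mult[OF P_carrier[OF w] P_carrier[OF c] P_invertible[OF w] P_invertible[OF c]]
    unfolding prod .
  thus a: "\<alpha> (w, c) \<noteq> 0" using invertible_smult_imp_nonzero[OF _ P_carrier[OF wc] d_pos] by blast
  have "P (w \<otimes> c) = (1 / \<alpha> (w, c)) \<cdot>\<^sub>m (\<alpha> (w, c) \<cdot>\<^sub>m P (w \<otimes> c))" using a by (simp add: smult_smult_mat)
  thus "P (w \<otimes> c) = (z / \<alpha> (w, c)) \<cdot>\<^sub>m P w" unfolding fs by (simp add: smult_smult_mat)
qed

end

section \<open>Extending the central product character to its stabilizer\<close>

text \<open>The extension of \<theta>\<cdot>\<psi> is built from a transversal tr of NC in the stabilizer with values in Q,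
  and from matrices V t intertwining \<sigma> with its t-conjugate: for x = t n c with t = tr x,
  the matrix of x is P(t n) \<otimes> V(t) \<sigma>(c).\<close>
locale cprod_extension = cprod_triple +
  fixes Q :: "'a set" and V :: "'a \<Rightarrow> complex mat" and tr :: "'a \<Rightarrow> 'a"
  assumes Q_subgroup: "subgroup Q A"
    and Q_normalizes: "\<forall>h\<in>Q. \<forall>c\<in>C. h \<otimes> c \<otimes> inv h \<in> C \<and> inv h \<otimes> c \<otimes> h \<in> C"
    and V_intertwines: "\<forall>t\<in>Q. V t \<in> carrier_mat e e \<and> invertible_mat (V t) \<and>
      (\<forall>c\<in>C. \<sigma> (t \<otimes> c \<otimes> inv t) * V t = V t * \<sigma> c)"
    and V_one: "V \<one> = 1\<^sub>m e"
    and Q_sub_stab: "Q \<subseteq> char_stab A (normalizer_in A K C) (cprod_char A N C \<theta> \<psi>)"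
    and tr_coset: "\<forall>x\<in>char_stab A (normalizer_in A K C) (cprod_char A N C \<theta> \<psi>).
      tr x \<in> Q \<and> inv (tr x) \<otimes> x \<in> N <#> C"
    and tr_NC: "\<forall>y\<in>N <#> C. tr y = \<one>"
    and tr_mult_NC: "\<forall>x\<in>char_stab A (normalizer_in A K C) (cprod_char A N C \<theta> \<psi>). \<forall>y\<in>N <#> C.
      tr (x \<otimes> y) = tr x"
begin

definition ext_rep :: "'a \<Rightarrow> complex mat" where
  "ext_rep x = (let t = tr x; p = (SOME p. fst p \<in> N \<and> snd p \<in> C \<and> inv t \<otimes> x = fst p \<otimes> snd p)
     in kron (P (t \<otimes> fst p)) (V t * \<sigma> (snd p)))"

lemma Q_sub_K: "Q \<subseteq> K"
  using Q_sub_stab stab_iff by blast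

lemma normalizes_Q: "t \<in> Q \<Longrightarrow> normalizes t"
  unfolding normalizes_def using Q_normalizes subgroup.mem_carrier[OF Q_subgroup] by blast

lemma V_carrier: "t \<in> Q \<Longrightarrow> V t \<in> carrier_mat e e"
  using V_intertwines by blast

lemma V_invertible: "t \<in> Q \<Longrightarrow> invertible_mat (V t)"
  using V_intertwines by blast

lemma conj_intertwiner_V: "t \<in> Q \<Longrightarrow> conj_intertwiner (V t) t"
  unfolding conj_intertwiner_def using V_intertwines by simp

lemma V_conj_inv:
  assumes t: "t \<in> Q" and c: "c \<in> C"
  shows "V t * \<sigma> (inv t \<otimes> c \<otimes> t) = \<sigma> c * V t"
proof -
  have "inv t \<otimes> c \<otimes> t \<in> C" using Q_normalizes t c by blast
  hence "\<sigma> (t \<otimes> (inv t \<otimes> c \<otimes> t) \<otimes> inv t) * V t = V t * \<sigma> (inv t \<otimes> c \<otimes> t)"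
    using V_intertwines t by blast
  moreover have "t \<otimes> (inv t \<otimes> c \<otimes> t) \<otimes> inv t = c"
    using subgroup.mem_carrier[OF Q_subgroup t] C_carrier[OF c] by (simp add: m_assoc mult_inv_cancel_left)
  ultimately show ?thesis by simp
qed

lemma tr_in_Q: "x \<in> stab \<Longrightarrow> tr x \<in> Q"
  using tr_coset by blast

lemma tr_carrier: "x \<in> stab \<Longrightarrow> tr x \<in> carrier A"
  using tr_in_Q Q_sub_K K_carrier by blast

lemma tr_decomp:
  assumes "x \<in> stab"
  obtains n c where "n \<in> N" "c \<in> C" "inv (tr x) \<otimes> x = n \<otimes> c"
proof -
  have "inv (tr x) \<otimes> x \<in> NC" using tr_coset assms by blast
  then obtain n c where "n \<in> N" "c \<in> C" "inv (tr x) \<otimes> x = n \<otimes> c" by (rule set_multE)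
  thus ?thesis by (rule that)
qed

lemma ext_rep_eq:
  assumes x: "x \<in> stab" and n: "n \<in> N" and c: "c \<in> C" and e: "inv (tr x) \<otimes> x = n \<otimes> c"
  shows "ext_rep x = kron (P (tr x \<otimes> n)) (V (tr x) * \<sigma> c)"
proof -
  define p where "p = (SOME p. fst p \<in> N \<and> snd p \<in> C \<and> inv (tr x) \<otimes> x = fst p \<otimes> snd p)"
  have "\<exists>p. fst p \<in> N \<and> snd p \<in> C \<and> inv (tr x) \<otimes> x = fst p \<otimes> snd p"
    using n c e by (intro exI[of _ "(n,c)"]) simp
  hence p: "fst p \<in> N" "snd p \<in> C" "inv (tr x) \<otimes> x = fst p \<otimes> snd p"
    unfolding p_def by (metis (mono_tags, lifting) someI_ex)+
  have "ext_rep x = kron (P (tr x \<otimes> fst p)) (V (tr x) * \<sigma> (snd p))"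
    unfolding ext_rep_def p_def Let_def by simp
  also have "\<dots> = kron (P (tr x \<otimes> n)) (V (tr x) * \<sigma> c)"
  proof (rule kron_decomposition_independent[OF _ p(1) n p(2) c _ V_carrier[OF tr_in_Q[OF x]]])
    show "tr x \<in> K" using Q_sub_K tr_in_Q[OF x] by blast
    show "fst p \<otimes> snd p = n \<otimes> c" using p(3) e by simp
  qed
  finally show ?thesis .
qed

lemma ext_rep_NC:
  assumes n: "n \<in> N" and c: "c \<in> C"
  shows "ext_rep (n \<otimes> c) = kron (P n) (\<sigma> c)"
proof -
  have y: "n \<otimes> c \<in> NC" using set_multI[where G=A, OF n c] .
  hence t: "tr (n \<otimes> c) = \<one>" using tr_NC by blast
  have "ext_rep (n \<otimes> c) = kron (P (tr (n \<otimes> c) \<otimes> n)) (V (tr (n \<otimes> c)) * \<sigma> c)"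
    by (rule ext_rep_eq[OF subsetD[OF NC_sub_stab y] n c]) (simp add: t NC_carrier[OF y])
  thus ?thesis using t V_one N_carrier[OF n] \<sigma>_carrier[OF c] by simp
qed

lemma ext_rep_carrier_invertible:
  assumes x: "x \<in> stab"
  shows "ext_rep x \<in> carrier_mat (d*e) (d*e)" and "invertible_mat (ext_rep x)"
proof -
  obtain n c where n: "n \<in> N" and c: "c \<in> C" and e: "inv (tr x) \<otimes> x = n \<otimes> c"
    using tr_decomp[OF x] by blast
  have t: "tr x \<in> Q" using tr_in_Q[OF x] .
  have tn: "tr x \<otimes> n \<in> K" using subgroup.m_closed[OF K_subgroup] Q_sub_K t N_sub_K n by blast
  have Vc: "V (tr x) * \<sigma> c \<in> carrier_mat e e" using V_carrier[OF t] \<sigma>_carrier[OF c] by simp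
  have Vi: "invertible_mat (V (tr x) * \<sigma> c)"
    using invertible_mat_mult[OF V_carrier[OF t] \<sigma>_carrier[OF c] V_invertible[OF t] \<sigma>_invertible[OF c]] .
  show "ext_rep x \<in> carrier_mat (d*e) (d*e)"
    unfolding ext_rep_eq[OF x n c e] by (rule kron_carrier[OF P_carrier[OF tn] Vc])
  show "invertible_mat (ext_rep x)"
    unfolding ext_rep_eq[OF x n c e] by (rule kron_invertible[OF P_carrier[OF tn] Vc P_invertible[OF tn] Vi])
qed

lemma ext_rep_mult_NC_right:
  assumes x: "x \<in> stab" and y: "y \<in> NC"
  shows "ext_rep (x \<otimes> y) = ext_rep x * ext_rep y"
proof -
  obtain n c where n: "n \<in> N" and c: "c \<in> C" and e: "inv (tr x) \<otimes> x = n \<otimes> c"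
    using tr_decomp[OF x] by blast
  obtain n1 c1 where n1: "n1 \<in> N" and c1: "c1 \<in> C" and ye: "y = n1 \<otimes> c1" using y by (rule set_multE)
  define t where "t = tr x"
  have tQ: "t \<in> Q" and tK: "t \<in> K" using tr_in_Q[OF x] Q_sub_K unfolding t_def by auto
  have txy: "tr (x \<otimes> y) = t" using tr_mult_NC x y unfolding t_def by blast
  have tn: "t \<otimes> n \<in> K" using subgroup.m_closed[OF K_subgroup tK] N_sub_K n by blast
  have Vc: "V t * \<sigma> c \<in> carrier_mat e e" using V_carrier[OF tQ] \<sigma>_carrier[OF c] by simp
  have e': "inv t \<otimes> x = n \<otimes> c" using e unfolding t_def .
  have comm: "c \<otimes> n1 = n1 \<otimes> c" using C_centralizes_N c n1 by blast
  have "inv (tr (x \<otimes> y)) \<otimes> (x \<otimes> y) = (n \<otimes> n1) \<otimes> (c \<otimes> c1)"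
    unfolding txy unfolding ye by (rule decomp_mult_right[OF K_carrier[OF tK] stab_carrier[OF x] N_carrier[OF n]
        C_carrier[OF c] N_carrier[OF n1] C_carrier[OF c1] e' comm])
  hence "ext_rep (x \<otimes> y) = kron (P (t \<otimes> (n \<otimes> n1))) (V t * \<sigma> (c \<otimes> c1))"
    using ext_rep_eq[OF subgroup.m_closed[OF stab_subgroup x subsetD[OF NC_sub_stab y]]
        subgroup.m_closed[OF N_subgroup n n1] subgroup.m_closed[OF C c c1]] txy by simp
  also have "P (t \<otimes> (n \<otimes> n1)) = P (t \<otimes> n) * P n1"
    using P_mult_N_right[OF tn n1] K_carrier[OF tK] N_carrier[OF n] N_carrier[OF n1] by (simp add: m_assoc)
  also have "V t * \<sigma> (c \<otimes> c1) = (V t * \<sigma> c) * \<sigma> c1"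
    using \<sigma>_mult[OF c c1] assoc_mult_mat[OF V_carrier[OF tQ] \<sigma>_carrier[OF c] \<sigma>_carrier[OF c1]] by simp
  also have "kron (P (t \<otimes> n) * P n1) ((V t * \<sigma> c) * \<sigma> c1) = kron (P (t \<otimes> n)) (V t * \<sigma> c) * kron (P n1) (\<sigma> c1)"
    using kron_mult[OF P_carrier[OF tn] Vc is_repD(1)[OF rep_P n1] \<sigma>_carrier[OF c1]] by simp
  also have "\<dots> = ext_rep x * ext_rep y" using ext_rep_eq[OF x n c e] ext_rep_NC[OF n1 c1] ye t_def by simp
  finally show ?thesis .
qed

lemma ext_rep_mult_NC_left:
  assumes x: "x \<in> stab" and y: "y \<in> NC"
  shows "ext_rep (y \<otimes> x) = ext_rep y * ext_rep x"
proof -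
  obtain n c where n: "n \<in> N" and c: "c \<in> C" and e: "inv (tr x) \<otimes> x = n \<otimes> c"
    using tr_decomp[OF x] by blast
  obtain n1 c1 where n1: "n1 \<in> N" and c1: "c1 \<in> C" and ye: "y = n1 \<otimes> c1" using y by (rule set_multE)
  define t where "t = tr x"
  have tQ: "t \<in> Q" and tK: "t \<in> K" using tr_in_Q[OF x] Q_sub_K unfolding t_def by auto
  have tA: "t \<in> carrier A" and xA: "x \<in> carrier A" using K_carrier[OF tK] stab_carrier[OF x] .
  have "y \<otimes> x = x \<otimes> (inv x \<otimes> y \<otimes> x)" using xA NC_carrier[OF y] by (simp add: m_assoc mult_inv_cancel_left)
  moreover have "inv x \<otimes> y \<otimes> x \<in> NC"
    using NC_conj[OF subgroup.m_inv_closed[OF stab_subgroup x] y] xA by simp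
  ultimately have txy: "tr (y \<otimes> x) = t" using tr_mult_NC x unfolding t_def by simp
  define n1' where "n1' = inv t \<otimes> n1 \<otimes> t"
  define c1' where "c1' = inv t \<otimes> c1 \<otimes> t"
  have n1': "n1' \<in> N" unfolding n1'_def using N_conj_inv[OF tK n1] .
  have c1': "c1' \<in> C" unfolding c1'_def using Q_normalizes tQ c1 by blast
  have tn: "t \<otimes> n \<in> K" using subgroup.m_closed[OF K_subgroup tK] N_sub_K n by blast
  have Vc: "V t * \<sigma> c \<in> carrier_mat e e" using V_carrier[OF tQ] \<sigma>_carrier[OF c] by simp
  have e': "inv t \<otimes> x = n \<otimes> c" using e unfolding t_def .
  have comm: "(inv t \<otimes> c1 \<otimes> t) \<otimes> n = n \<otimes> (inv t \<otimes> c1 \<otimes> t)"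
    using C_centralizes_N c1' n unfolding c1'_def by blast
  have "inv (tr (y \<otimes> x)) \<otimes> (y \<otimes> x) = (n1' \<otimes> n) \<otimes> (c1' \<otimes> c)"
    unfolding txy unfolding ye n1'_def c1'_def
    by (rule decomp_mult_left[OF tA xA N_carrier[OF n] C_carrier[OF c] N_carrier[OF n1] C_carrier[OF c1] e' comm])
  hence "ext_rep (y \<otimes> x) = kron (P (t \<otimes> (n1' \<otimes> n))) (V t * \<sigma> (c1' \<otimes> c))"
    using ext_rep_eq[OF subgroup.m_closed[OF stab_subgroup subsetD[OF NC_sub_stab y] x]
        subgroup.m_closed[OF N_subgroup n1' n] subgroup.m_closed[OF C c1' c]] txy by simp
  also have "t \<otimes> (n1' \<otimes> n) = n1 \<otimes> (t \<otimes> n)"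
    unfolding n1'_def using tA N_carrier[OF n1] N_carrier[OF n] by (simp add: m_assoc mult_inv_cancel_left)
  also have "V t * \<sigma> (c1' \<otimes> c) = (V t * \<sigma> c1') * \<sigma> c"
    using \<sigma>_mult[OF c1' c] assoc_mult_mat[OF V_carrier[OF tQ] \<sigma>_carrier[OF c1'] \<sigma>_carrier[OF c]] by simp
  also have "V t * \<sigma> c1' = \<sigma> c1 * V t" using V_conj_inv[OF tQ c1] unfolding c1'_def .
  also have "(\<sigma> c1 * V t) * \<sigma> c = \<sigma> c1 * (V t * \<sigma> c)"
    using assoc_mult_mat[OF \<sigma>_carrier[OF c1] V_carrier[OF tQ] \<sigma>_carrier[OF c]] .
  also have "P (n1 \<otimes> (t \<otimes> n)) = P n1 * P (t \<otimes> n)" using P_mult_N_left[OF tn n1] .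
  also have "kron (P n1 * P (t \<otimes> n)) (\<sigma> c1 * (V t * \<sigma> c)) = kron (P n1) (\<sigma> c1) * kron (P (t \<otimes> n)) (V t * \<sigma> c)"
    using kron_mult[OF is_repD(1)[OF rep_P n1] \<sigma>_carrier[OF c1] P_carrier[OF tn] Vc] by simp
  also have "\<dots> = ext_rep y * ext_rep x" using ext_rep_eq[OF x n c e] ext_rep_NC[OF n1 c1] ye t_def by simp
  finally show ?thesis .
qed

lemma ext_rep_conj:
  assumes g: "g \<in> stab" and w: "w \<in> NC"
  shows "ext_rep g * ext_rep w = ext_rep (g \<otimes> w \<otimes> inv g) * ext_rep g"
proof -
  have "g \<otimes> w = (g \<otimes> w \<otimes> inv g) \<otimes> g" using stab_carrier[OF g] NC_carrier[OF w] by (simp add: m_assoc)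
  thus ?thesis using ext_rep_mult_NC_right[OF g w] ext_rep_mult_NC_left[OF g NC_conj[OF g w]] by simp
qed

lemma rep_ext_rep_NC: "is_rep A NC (d*e) ext_rep"
  unfolding is_rep_def
proof (intro conjI ballI)
  show "ext_rep g \<in> carrier_mat (d*e) (d*e)" if "g \<in> NC" for g
    using ext_rep_carrier_invertible(1) NC_sub_stab that by blast
  show "ext_rep \<one> = 1\<^sub>m (d*e)"
    using ext_rep_NC[OF subgroup.one_closed[OF N_subgroup] subgroup.one_closed[OF C]] P_one \<sigma>_one kron_one
    by simp
  show "ext_rep (g \<otimes> h) = ext_rep g * ext_rep h" if "g \<in> NC" "h \<in> NC" for g h
    using ext_rep_mult_NC_right NC_sub_stab that by blast
qed

lemma ext_rep_trace: "y \<in> NC \<Longrightarrow> \<chi> y = mat_trace (ext_rep y)"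
proof -
  assume "y \<in> NC"
  then obtain n c where n: "n \<in> N" and c: "c \<in> C" and ye: "y = n \<otimes> c" by (rule set_multE)
  thus ?thesis
    using ext_rep_NC[OF n c] cprod_char_mult[OF n c] mat_trace_kron[OF is_repD(1)[OF rep_P n] \<sigma>_carrier[OF c]]
      \<theta>_P \<psi>_\<sigma> by simp
qed

lemma ext_rep_irreducible: "irreducible_rep A NC (d*e) ext_rep"
  by (rule irreducible_rep_kron[OF N_subgroup finite_N C finite_C P_irreducible irr_\<sigma> rep_ext_rep_NC])
    (simp add: set_multI[where G=A] ext_rep_NC)

lemma stab_triple: "char_triple A stab NC \<chi>"
proof -
  have "\<chi> \<in> Irr A NC"
    unfolding Irr_def using ext_rep_irreducible ext_rep_trace cprod_char_outside by blast
  moreover have "\<forall>g\<in>stab. \<forall>x\<in>carrier A. \<chi> (g \<otimes> x \<otimes> inv g) = \<chi> x"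
    unfolding char_stab_def by blast
  ultimately show ?thesis unfolding char_triple_def using stab_subgroup NC_normal by blast
qed

lemma conj_NC_surj:
  assumes g: "g \<in> stab"
  shows "NC \<subseteq> (\<lambda>w. g \<otimes> w \<otimes> inv g) ` NC"
proof
  fix w assume w: "w \<in> NC"
  have "w = g \<otimes> (inv g \<otimes> w \<otimes> g) \<otimes> inv g"
    using stab_carrier[OF g] NC_carrier[OF w] by (simp add: m_assoc mult_inv_cancel_left)
  moreover have "inv g \<otimes> w \<otimes> g \<in> NC"
    using NC_conj[OF subgroup.m_inv_closed[OF stab_subgroup g] w] stab_carrier[OF g] by simp
  ultimately show "w \<in> (\<lambda>w. g \<otimes> w \<otimes> inv g) ` NC" by (rule image_eqI)
qed

text \<open>Both ext_rep x ext_rep y and ext_rep (x y) conjugate the irreducible ext_rep on NC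
  like x y does, so by Schur's lemma they are proportional.\<close>
lemma ext_rep_projective:
  assumes x: "x \<in> stab" and y: "y \<in> stab"
  shows "\<exists>a. ext_rep x * ext_rep y = a \<cdot>\<^sub>m ext_rep (x \<otimes> y)"
proof -
  note carr = ext_rep_carrier_invertible(1)
  have xy: "x \<otimes> y \<in> stab" using subgroup.m_closed[OF stab_subgroup x y] .
  show ?thesis
  proof (rule twisted_intertwiners_proportional[OF ext_rep_irreducible conj_NC_surj[OF xy]])
    show "ext_rep x * ext_rep y \<in> carrier_mat (d*e) (d*e)" by (rule mult_carrier_mat[OF carr[OF x] carr[OF y]])
    show "ext_rep (x \<otimes> y) \<in> carrier_mat (d*e) (d*e)" "invertible_mat (ext_rep (x \<otimes> y))"
      using ext_rep_carrier_invertible xy by auto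
    show "\<forall>w\<in>NC. ext_rep (x \<otimes> y) * ext_rep w = ext_rep (x \<otimes> y \<otimes> w \<otimes> inv (x \<otimes> y)) * ext_rep (x \<otimes> y)"
      using ext_rep_conj[OF xy] by simp
    show "\<forall>w\<in>NC. ext_rep x * ext_rep y * ext_rep w = ext_rep (x \<otimes> y \<otimes> w \<otimes> inv (x \<otimes> y)) * (ext_rep x * ext_rep y)"
    proof
      fix w assume w: "w \<in> NC"
      have w': "y \<otimes> w \<otimes> inv y \<in> NC" using NC_conj[OF y w] .
      let ?w = "x \<otimes> y \<otimes> w \<otimes> inv (x \<otimes> y)"
      have "x \<otimes> (y \<otimes> w \<otimes> inv y) \<otimes> inv x = ?w"
        using stab_carrier[OF x] stab_carrier[OF y] NC_carrier[OF w] by (simp add: m_assoc inv_mult_group)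
      hence eq_x: "ext_rep x * ext_rep (y \<otimes> w \<otimes> inv y) = ext_rep ?w * ext_rep x"
        using ext_rep_conj[OF x w'] by simp
      have Fx: "ext_rep x \<in> carrier_mat (d*e) (d*e)" and Fy: "ext_rep y \<in> carrier_mat (d*e) (d*e)"
        and Fw: "ext_rep w \<in> carrier_mat (d*e) (d*e)" and Fw': "ext_rep (y \<otimes> w \<otimes> inv y) \<in> carrier_mat (d*e) (d*e)"
        and Fw'': "ext_rep ?w \<in> carrier_mat (d*e) (d*e)"
        using carr x y w w' NC_conj[OF xy w] NC_sub_stab by auto
      have "ext_rep x * ext_rep y * ext_rep w = ext_rep x * (ext_rep y * ext_rep w)"
        by (rule assoc_mult_mat[OF Fx Fy Fw])
      also have "\<dots> = ext_rep x * (ext_rep (y \<otimes> w \<otimes> inv y) * ext_rep y)"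
        using ext_rep_conj[OF y w] by simp
      also have "\<dots> = (ext_rep x * ext_rep (y \<otimes> w \<otimes> inv y)) * ext_rep y"
        by (rule assoc_mult_mat[OF Fx Fw' Fy, symmetric])
      also have "\<dots> = (ext_rep ?w * ext_rep x) * ext_rep y" unfolding eq_x ..
      also have "\<dots> = ext_rep ?w * (ext_rep x * ext_rep y)" by (rule assoc_mult_mat[OF Fw'' Fx Fy])
      finally show "ext_rep x * ext_rep y * ext_rep w = ext_rep ?w * (ext_rep x * ext_rep y)" .
  qed
  qed
qed

definition ext_factor :: "'a \<times> 'a \<Rightarrow> complex" where
  "ext_factor p = (SOME a. ext_rep (fst p) * ext_rep (snd p) = a \<cdot>\<^sub>m ext_rep (fst p \<otimes> snd p))"

lemma ext_factor:
  "x \<in> stab \<Longrightarrow> y \<in> stab \<Longrightarrow> ext_rep x * ext_rep y = ext_factor (x, y) \<cdot>\<^sub>m ext_rep (x \<otimes> y)"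
  unfolding ext_factor_def fst_conv snd_conv by (rule someI_ex[OF ext_rep_projective])

lemma ext_rep_proj_rep_assoc: "proj_rep_assoc A stab NC \<chi> ext_rep ext_factor"
  unfolding proj_rep_assoc_def
proof (intro exI[of _ "d*e"] conjI ballI)
  have "\<chi> (\<one> \<otimes> \<one>) = \<theta> \<one> * \<psi> \<one>"
    using cprod_char_mult subgroup.one_closed[OF N_subgroup] subgroup.one_closed[OF C] by blast
  thus "of_nat (d*e) = \<chi> \<one>" using \<theta>_one \<psi>_\<sigma> \<sigma>_one subgroup.one_closed[OF C] by simp
  show "is_rep A NC (d*e) ext_rep" by (rule rep_ext_rep_NC)
  fix x assume x: "x \<in> stab"
  show "ext_rep x \<in> carrier_mat (d*e) (d*e)" "invertible_mat (ext_rep x)"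
    using ext_rep_carrier_invertible[OF x] by auto
  show "ext_rep x * ext_rep y = ext_factor (x, y) \<cdot>\<^sub>m ext_rep (x \<otimes> y)" if "y \<in> stab" for y
    using ext_factor[OF x that] .
  show "ext_rep (x \<otimes> n) = ext_rep x * ext_rep n" "ext_rep (n \<otimes> x) = ext_rep n * ext_rep x" if "n \<in> NC" for n
    using ext_rep_mult_NC_right[OF x that] ext_rep_mult_NC_left[OF x that] by auto
next
  show "\<chi> n = mat_trace (ext_rep n)" if "n \<in> NC" for n using ext_rep_trace[OF that] .
qed

lemma ext_rep_central:
  assumes g: "g \<in> stab" and c: "\<forall>y\<in>NC. g \<otimes> y = y \<otimes> g"
  shows "\<exists>w. ext_rep g = w \<cdot>\<^sub>m 1\<^sub>m (d*e)"
proof (rule schur_lemma[OF ext_rep_irreducible ext_rep_carrier_invertible(1)[OF g]], intro ballI)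
  fix y assume y: "y \<in> NC"
  have "ext_rep g * ext_rep y = ext_rep (g \<otimes> y)" using ext_rep_mult_NC_right[OF g y] by simp
  also have "\<dots> = ext_rep y * ext_rep g" using c y ext_rep_mult_NC_left[OF g y] by simp
  finally show "ext_rep g * ext_rep y = ext_rep y * ext_rep g" .
qed

lemma conj_intertwiner_decomp:
  assumes x: "x \<in> stab" and n: "n \<in> N" and c: "c \<in> C" and e: "inv (tr x) \<otimes> x = n \<otimes> c"
  shows "conj_intertwiner (V (tr x) * \<sigma> c) x" and "x = tr x \<otimes> n \<otimes> c"
proof -
  have tQ: "tr x \<in> Q" using tr_in_Q[OF x] .
  have tA: "tr x \<in> carrier A" using tr_carrier[OF x] .
  have "x = tr x \<otimes> (inv (tr x) \<otimes> x)" using tA stab_carrier[OF x] by (simp add: mult_inv_cancel_left)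
  thus xe: "x = tr x \<otimes> n \<otimes> c" unfolding e using tA N_carrier[OF n] C_carrier[OF c] by (simp add: m_assoc)
  have "conj_intertwiner (V (tr x) * \<sigma> c) (tr x \<otimes> c)"
    by (rule conj_intertwiner_mult[OF conj_intertwiner_V[OF tQ] V_carrier[OF tQ] normalizes_Q[OF tQ]
          conj_intertwiner_\<sigma>[OF c] \<sigma>_carrier[OF c] normalizes_if_in_C[OF c]])
  moreover have "\<forall>\<gamma>\<in>C. n \<otimes> \<gamma> = \<gamma> \<otimes> n" using C_centralizes_N n by auto
  ultimately show "conj_intertwiner (V (tr x) * \<sigma> c) x"
    using conj_intertwiner_centralizing_factor[OF _ tA N_carrier[OF n] _ c] xe by simp
qed

lemma decomp_intertwiners_proportional:
  assumes x: "x \<in> stab" and y: "y \<in> stab"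
    and n: "n \<in> N" and c: "c \<in> C" and ex: "inv (tr x) \<otimes> x = n \<otimes> c"
    and n': "n' \<in> N" and c': "c' \<in> C" and ey: "inv (tr y) \<otimes> y = n' \<otimes> c'"
    and n'': "n'' \<in> N" and c'': "c'' \<in> C" and exy: "inv (tr (x \<otimes> y)) \<otimes> (x \<otimes> y) = n'' \<otimes> c''"
  shows "\<exists>\<kappa>. (V (tr x) * \<sigma> c) * (V (tr y) * \<sigma> c') = \<kappa> \<cdot>\<^sub>m (V (tr (x \<otimes> y)) * \<sigma> c'')"
proof -
  have xy: "x \<otimes> y \<in> stab" using subgroup.m_closed[OF stab_subgroup x y] .
  note t = tr_in_Q[OF x] tr_in_Q[OF y] tr_in_Q[OF xy]
  have nx: "normalizes x" "normalizes y" "normalizes (x \<otimes> y)" using stabD(2) x y xy by auto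
  have X: "V (tr x) * \<sigma> c \<in> carrier_mat e e" and Y: "V (tr y) * \<sigma> c' \<in> carrier_mat e e"
    and W: "V (tr (x \<otimes> y)) * \<sigma> c'' \<in> carrier_mat e e"
    using V_carrier[OF t(1)] V_carrier[OF t(2)] V_carrier[OF t(3)] \<sigma>_carrier[OF c] \<sigma>_carrier[OF c']
      \<sigma>_carrier[OF c''] by auto
  have W_inv: "invertible_mat (V (tr (x \<otimes> y)) * \<sigma> c'')"
    by (rule invertible_mat_mult[OF V_carrier[OF t(3)] \<sigma>_carrier[OF c''] V_invertible[OF t(3)] \<sigma>_invertible[OF c'']])
  have "conj_intertwiner ((V (tr x) * \<sigma> c) * (V (tr y) * \<sigma> c')) (x \<otimes> y)"
    by (rule conj_intertwiner_mult[OF conj_intertwiner_decomp(1)[OF x n c ex] X nx(1)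
          conj_intertwiner_decomp(1)[OF y n' c' ey] Y nx(2)])
  thus ?thesis
    by (rule conj_intertwiners_proportional[OF _ mult_carrier_mat[OF X Y]
          conj_intertwiner_decomp(1)[OF xy n'' c'' exy] W W_inv nx(3)])
qed

text \<open>The factor set of ext_rep on x, y is read off from decompositions x = t n c, y = t' n' c',
  x y = t'' n'' c'': the N-parts multiply up to the element c3 of C, and the C-parts up to \<kappa>.\<close>
lemma ext_rep_mult_formula:
  assumes x: "x \<in> stab" and y: "y \<in> stab"
    and n: "n \<in> N" and c: "c \<in> C" and ex: "inv (tr x) \<otimes> x = n \<otimes> c"
    and n': "n' \<in> N" and c': "c' \<in> C" and ey: "inv (tr y) \<otimes> y = n' \<otimes> c'"
    and n'': "n'' \<in> N" and c'': "c'' \<in> C" and exy: "inv (tr (x \<otimes> y)) \<otimes> (x \<otimes> y) = n'' \<otimes> c''"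
    and c3_def: "c3 = c'' \<otimes> (inv y \<otimes> inv c \<otimes> y) \<otimes> inv c'"
    and c3: "c3 \<in> C" and Pc3: "P c3 = z3 \<cdot>\<^sub>m 1\<^sub>m d"
    and \<kappa>: "(V (tr x) * \<sigma> c) * (V (tr y) * \<sigma> c') = \<kappa> \<cdot>\<^sub>m (V (tr (x \<otimes> y)) * \<sigma> c'')"
  shows "\<alpha> (tr (x \<otimes> y) \<otimes> n'', c3) \<noteq> 0"
    and "ext_rep x * ext_rep y
      = (\<alpha> (tr x \<otimes> n, tr y \<otimes> n') * \<kappa> * z3 / \<alpha> (tr (x \<otimes> y) \<otimes> n'', c3)) \<cdot>\<^sub>m ext_rep (x \<otimes> y)"
proof -
  have xy: "x \<otimes> y \<in> stab" using subgroup.m_closed[OF stab_subgroup x y] .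
  define u v w where "u = tr x \<otimes> n" and "v = tr y \<otimes> n'" and "w = tr (x \<otimes> y) \<otimes> n''"
  have inK: "\<And>z m. z \<in> stab \<Longrightarrow> m \<in> N \<Longrightarrow> tr z \<otimes> m \<in> K"
    using subgroup.m_closed[OF K_subgroup] tr_in_Q Q_sub_K N_sub_K by blast
  have u: "u \<in> K" and v: "v \<in> K" and w: "w \<in> K" unfolding u_def v_def w_def using inK x y xy n n' n'' by auto
  have uvw: "u \<otimes> v = w \<otimes> c3"
    unfolding c3_def u_def v_def w_def
    by (rule mult_defect[OF stab_carrier[OF x] stab_carrier[OF y] K_carrier[OF inK[OF x n]]
          K_carrier[OF inK[OF y n']] K_carrier[OF inK[OF xy n'']] C_carrier[OF c] C_carrier[OF c']
          C_carrier[OF c'']])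
      (use conj_intertwiner_decomp(2) x y xy n n' n'' c c' c'' ex ey exy in \<open>simp_all add: m_assoc\<close>)
  note Pw = P_mult_scalar[OF w subsetD[OF C_sub_K c3] Pc3]
  show "\<alpha> (tr (x \<otimes> y) \<otimes> n'', c3) \<noteq> 0" using Pw(1) unfolding w_def .
  have Vx: "V (tr x) * \<sigma> c \<in> carrier_mat e e" and Vy: "V (tr y) * \<sigma> c' \<in> carrier_mat e e"
    using V_carrier[OF tr_in_Q[OF x]] V_carrier[OF tr_in_Q[OF y]] \<sigma>_carrier[OF c] \<sigma>_carrier[OF c'] by auto
  have "ext_rep x * ext_rep y = kron (P u * P v) ((V (tr x) * \<sigma> c) * (V (tr y) * \<sigma> c'))"
    unfolding ext_rep_eq[OF x n c ex] ext_rep_eq[OF y n' c' ey] u_def[symmetric] v_def[symmetric]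
    by (rule kron_mult[OF P_carrier[OF u] Vx P_carrier[OF v] Vy])
  also have "P u * P v = \<alpha> (u, v) \<cdot>\<^sub>m ((z3 / \<alpha> (w, c3)) \<cdot>\<^sub>m P w)"
    using P_factor_set u v uvw Pw(2) by simp
  also have "kron (\<alpha> (u, v) \<cdot>\<^sub>m ((z3 / \<alpha> (w, c3)) \<cdot>\<^sub>m P w)) ((V (tr x) * \<sigma> c) * (V (tr y) * \<sigma> c'))
      = (\<alpha> (u, v) * \<kappa> * z3 / \<alpha> (w, c3)) \<cdot>\<^sub>m kron (P w) (V (tr (x \<otimes> y)) * \<sigma> c'')"
    unfolding \<kappa> by (simp add: kron_smult_left kron_smult_right smult_smult_mat mult_ac)
  also have "kron (P w) (V (tr (x \<otimes> y)) * \<sigma> c'') = ext_rep (x \<otimes> y)"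
    unfolding w_def using ext_rep_eq[OF xy n'' c'' exy] by simp
  finally show "ext_rep x * ext_rep y
      = (\<alpha> (tr x \<otimes> n, tr y \<otimes> n') * \<kappa> * z3 / \<alpha> (tr (x \<otimes> y) \<otimes> n'', c3)) \<cdot>\<^sub>m ext_rep (x \<otimes> y)"
    unfolding u_def v_def w_def .
qed

end

section \<open>Comparing the two character triples\<close>

locale geq_c_setting = irrep_subgroup +
  fixes G N H M :: "'a set" and \<theta> \<phi> \<nu> \<psi> :: "'a \<Rightarrow> complex" and P P' :: "'a \<Rightarrow> complex mat"
    and \<alpha> \<alpha>' :: "'a \<times> 'a \<Rightarrow> complex" and d d' :: nat
  assumes triple_G: "char_triple A G N \<theta>" and triple_H: "char_triple A H M \<phi>"
    and G_eq: "G = N <#> H" and M_eq: "M = N \<inter> H" and centralizer_sub_H: "centralizer_in A G N \<subseteq> H"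
    and P_carrier_invertible: "\<forall>x\<in>G. P x \<in> carrier_mat d d \<and> invertible_mat (P x)"
    and P_factor_set: "\<forall>x\<in>G. \<forall>y\<in>G. P x * P y = \<alpha> (x, y) \<cdot>\<^sub>m P (x \<otimes> y)"
    and rep_P: "is_rep A N d P" and \<theta>_P: "\<forall>n\<in>N. \<theta> n = mat_trace (P n)"
    and P_mult_N: "\<forall>x\<in>G. \<forall>n\<in>N. P (x \<otimes> n) = P x * P n \<and> P (n \<otimes> x) = P n * P x"
    and P'_carrier_invertible: "\<forall>x\<in>H. P' x \<in> carrier_mat d' d' \<and> invertible_mat (P' x)"
    and P'_factor_set: "\<forall>x\<in>H. \<forall>y\<in>H. P' x * P' y = \<alpha>' (x, y) \<cdot>\<^sub>m P' (x \<otimes> y)"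
    and rep_P': "is_rep A M d' P'" and \<phi>_P': "\<forall>n\<in>M. \<phi> n = mat_trace (P' n)"
    and P'_mult_M: "\<forall>x\<in>H. \<forall>n\<in>M. P' (x \<otimes> n) = P' x * P' n \<and> P' (n \<otimes> x) = P' n * P' x"
    and factor_sets_eq: "\<forall>x\<in>H. \<forall>y\<in>H. \<alpha> (x, y) = \<alpha>' (x, y)"
    and centralizer_scalars: "\<forall>c\<in>centralizer_in A G N. \<exists>z.
      P c = z \<cdot>\<^sub>m 1\<^sub>m (dim_row (P c)) \<and> P' c = z \<cdot>\<^sub>m 1\<^sub>m (dim_row (P' c))"
    and C_centralizes: "C \<subseteq> centralizer_in A G N"
    and \<nu>: "\<nu> \<in> Irr A (C \<inter> N)" and \<theta>_over_\<nu>: "lies_over (C \<inter> N) \<theta> \<nu>" and \<phi>_over_\<nu>: "lies_over (C \<inter> N) \<phi> \<nu>"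
    and \<psi>_\<sigma>: "\<forall>c\<in>C. \<psi> c = mat_trace (\<sigma> c)" and \<psi>_over_\<nu>: "lies_over (C \<inter> N) \<psi> \<nu>"
begin

lemma C_centralizes_N: "\<forall>c\<in>C. \<forall>n\<in>N. c \<otimes> n = n \<otimes> c"
  using C_centralizes unfolding centralizer_in_def by blast

lemma C_sub_G: "C \<subseteq> G"
  using C_centralizes unfolding centralizer_in_def by blast

lemma C_sub_H: "C \<subseteq> H"
  using C_centralizes centralizer_sub_H by blast

lemma M_sub_N: "M \<subseteq> N"
  using M_eq by blast

sublocale side_G: cprod_triple A C e \<sigma> G N \<theta> P \<alpha> d \<psi> \<nu>
  by unfold_locales
    (use triple_G P_carrier_invertible P_factor_set rep_P \<theta>_P P_mult_N C_sub_G C_centralizes_N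
      \<psi>_\<sigma> \<nu> \<theta>_over_\<nu> \<psi>_over_\<nu> in auto)

sublocale side_H: cprod_triple A C e \<sigma> H M \<phi> P' \<alpha>' d' \<psi> \<nu>
proof unfold_locales
  have "C \<inter> M = C \<inter> N" using M_eq C_sub_H by blast
  thus "\<nu> \<in> Irr A (C \<inter> M)" "lies_over (C \<inter> M) \<phi> \<nu>" "lies_over (C \<inter> M) \<psi> \<nu>"
    using \<nu> \<phi>_over_\<nu> \<psi>_over_\<nu> by simp_all
  show "\<forall>c\<in>C. \<forall>n\<in>M. c \<otimes> n = n \<otimes> c" using C_centralizes_N M_sub_N by blast
qed (use triple_H P'_carrier_invertible P'_factor_set rep_P' \<phi>_P' P'_mult_M C_sub_H \<psi>_\<sigma> in auto)

lemma H_sub_G: "H \<subseteq> G"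
proof
  fix h assume h: "h \<in> H"
  have "h = \<one> \<otimes> h" using side_H.K_carrier[OF h] by simp
  thus "h \<in> G" using G_eq h subgroup.one_closed[OF side_G.N_subgroup] unfolding set_mult_def by blast
qed

lemma stab_H_sub_stab_G: "side_H.stab \<subseteq> side_G.stab"
  using side_H.stab_iff side_G.stab_iff H_sub_G by blast

lemma NC_H_sub_NC_G: "side_H.NC \<subseteq> side_G.NC"
  unfolding set_mult_def using M_eq by blast

lemma stab_G_eq: "side_G.stab = N <#> side_H.stab"
proof
  show "side_G.stab \<subseteq> N <#> side_H.stab"
  proof
    fix g assume g: "g \<in> side_G.stab"
    obtain n h where n: "n \<in> N" and h: "h \<in> H" and ge: "g = n \<otimes> h"
      using g side_G.stab_iff G_eq unfolding set_mult_def by blast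
    have "inv n \<in> side_G.stab"
      using side_G.NC_sub_stab side_G.N_sub_NC subgroup.m_inv_closed[OF side_G.N_subgroup n] by blast
    moreover have "h = inv n \<otimes> g" using ge side_G.N_carrier[OF n] side_H.K_carrier[OF h] by (simp add: inv_mult_cancel_left)
    ultimately have "h \<in> side_G.stab" using subgroup.m_closed[OF side_G.stab_subgroup _ g] by simp
    hence "h \<in> side_H.stab" using side_G.stab_iff side_H.stab_iff h by blast
    thus "g \<in> N <#> side_H.stab" using n ge unfolding set_mult_def by blast
  qed
  show "N <#> side_H.stab \<subseteq> side_G.stab"
    using side_G.N_sub_NC side_G.NC_sub_stab stab_H_sub_stab_G subgroup.m_closed[OF side_G.stab_subgroup]
    unfolding set_mult_def by blast
qed

lemma NC_G_inter_stab_H: "side_G.NC \<inter> side_H.stab = side_H.NC"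
proof
  show "side_G.NC \<inter> side_H.stab \<subseteq> side_H.NC"
  proof
    fix y assume y: "y \<in> side_G.NC \<inter> side_H.stab"
    then obtain n c where n: "n \<in> N" and c: "c \<in> C" and ye: "y = n \<otimes> c" by (rule set_multE[OF IntD1])
    have "n = y \<otimes> inv c" using ye side_G.N_carrier[OF n] C_carrier[OF c] by (simp add: m_assoc)
    moreover have "y \<in> H" "inv c \<in> H" using y side_H.stab_iff C_sub_H c subgroup.m_inv_closed[OF side_H.K_subgroup] by auto
    ultimately have "n \<in> M" using M_eq n subgroup.m_closed[OF side_H.K_subgroup] by auto
    thus "y \<in> side_H.NC" unfolding ye by (rule set_multI[where G=A, OF _ c])
  qed
  show "side_H.NC \<subseteq> side_G.NC \<inter> side_H.stab" using NC_H_sub_NC_G side_H.NC_sub_stab by blast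
qed

definition intertwiner :: "'a \<Rightarrow> complex mat" where
  "intertwiner t = (if t = \<one> then 1\<^sub>m e
     else (SOME T. T \<in> carrier_mat e e \<and> invertible_mat T \<and> (\<forall>c\<in>C. \<sigma> (t \<otimes> c \<otimes> inv t) * T = T * \<sigma> c)))"

lemma intertwiner:
  assumes t: "t \<in> side_H.stab"
  shows "intertwiner t \<in> carrier_mat e e \<and> invertible_mat (intertwiner t) \<and>
    (\<forall>c\<in>C. \<sigma> (t \<otimes> c \<otimes> inv t) * intertwiner t = intertwiner t * \<sigma> c)"
proof (cases "t = \<one>")
  case True
  have "invertible_mat (1\<^sub>m e :: complex mat)" by (rule invertible_matI[of _ e "1\<^sub>m e"]) auto
  moreover have "\<sigma> (\<one> \<otimes> c \<otimes> inv \<one>) * 1\<^sub>m e = 1\<^sub>m e * \<sigma> c" if "c \<in> C" for c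
    using \<sigma>_carrier[OF that] C_carrier[OF that] by simp
  ultimately show ?thesis using True unfolding intertwiner_def by simp
next
  case False
  have nt: "normalizes t" using side_H.stabD(2)[OF t] .
  have "mat_trace (\<sigma> (t \<otimes> c \<otimes> inv t)) = mat_trace (\<sigma> c)" if c: "c \<in> C" for c
  proof -
    have tc: "t \<otimes> c \<otimes> inv t \<in> C" using nt c unfolding normalizes_def by blast
    have "mat_trace (\<sigma> (t \<otimes> c \<otimes> inv t)) = \<psi> (t \<otimes> c \<otimes> inv t)" using bspec[OF \<psi>_\<sigma> tc] by simp
    also have "\<dots> = \<psi> c" using side_H.stabD(3)[OF t] c by blast
    also have "\<dots> = mat_trace (\<sigma> c)" using bspec[OF \<psi>_\<sigma> c] .
    finally show ?thesis .
  qed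
  hence "\<exists>T. T \<in> carrier_mat e e \<and> invertible_mat T \<and> (\<forall>c\<in>C. \<sigma> (t \<otimes> c \<otimes> inv t) * T = T * \<sigma> c)"
    using conj_intertwiner_exists[OF nt] by blast
  from someI_ex[OF this] show ?thesis using False unfolding intertwiner_def by simp
qed

definition transversal :: "'a \<Rightarrow> 'a" where
  "transversal x = (if x \<in> side_G.NC then \<one> else (SOME t. t \<in> side_H.stab \<and> inv t \<otimes> x \<in> side_G.NC))"

lemma transversal_exists:
  assumes x: "x \<in> side_G.stab"
  shows "\<exists>t. t \<in> side_H.stab \<and> inv t \<otimes> x \<in> side_G.NC"
proof -
  obtain n h where n: "n \<in> N" and h: "h \<in> side_H.stab" and xe: "x = n \<otimes> h"
    using stab_G_eq x unfolding set_mult_def by blast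
  have hG: "h \<in> G" using h H_sub_G side_H.stab_iff by blast
  have "inv h \<otimes> x = inv h \<otimes> n \<otimes> h"
    using xe side_G.K_carrier[OF hG] side_G.N_carrier[OF n] by (simp add: m_assoc)
  hence "inv h \<otimes> x \<in> N" using side_G.N_conj_inv[OF hG n] by simp
  thus ?thesis using h side_G.N_sub_NC by blast
qed

lemma transversal_G: "\<forall>x\<in>side_G.stab. transversal x \<in> side_H.stab \<and> inv (transversal x) \<otimes> x \<in> side_G.NC"
  unfolding transversal_def
  using someI_ex[OF transversal_exists] subgroup.one_closed[OF side_H.stab_subgroup] side_G.NC_carrier
  by auto

lemma transversal_NC_G: "\<forall>y\<in>side_G.NC. transversal y = \<one>"
  unfolding transversal_def by simp

lemma transversal_mult_NC_G: "\<forall>x\<in>side_G.stab. \<forall>y\<in>side_G.NC. transversal (x \<otimes> y) = transversal x"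
proof (intro ballI)
  fix x y assume x: "x \<in> side_G.stab" and y: "y \<in> side_G.NC"
  note iff = subgroup_mult_mem_iff[OF side_G.NC_subgroup _ y]
  have xA: "x \<in> carrier A" using side_G.stab_carrier[OF x] .
  have "inv t \<otimes> (x \<otimes> y) \<in> side_G.NC \<longleftrightarrow> inv t \<otimes> x \<in> side_G.NC" if "t \<in> side_H.stab" for t
    using iff[of "inv t \<otimes> x"] side_H.stab_carrier[OF that] xA side_G.NC_carrier[OF y] by (simp add: m_assoc)
  hence "(\<lambda>t. t \<in> side_H.stab \<and> inv t \<otimes> (x \<otimes> y) \<in> side_G.NC) = (\<lambda>t. t \<in> side_H.stab \<and> inv t \<otimes> x \<in> side_G.NC)"
    by blast
  thus "transversal (x \<otimes> y) = transversal x" unfolding transversal_def using iff[OF xA] by simp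
qed

sublocale ext_G: cprod_extension A C e \<sigma> G N \<theta> P \<alpha> d \<psi> \<nu> side_H.stab intertwiner transversal
proof (intro cprod_extension.intro cprod_extension_axioms.intro)
  show "cprod_triple A C e \<sigma> G N \<theta> P \<alpha> d \<psi> \<nu>" by (rule side_G.cprod_triple_axioms)
  show "subgroup side_H.stab A" by (rule side_H.stab_subgroup)
  show "\<forall>h\<in>side_H.stab. \<forall>c\<in>C. h \<otimes> c \<otimes> inv h \<in> C \<and> inv h \<otimes> c \<otimes> h \<in> C"
    using side_H.stabD(2) unfolding normalizes_def by blast
  show "\<forall>t\<in>side_H.stab. intertwiner t \<in> carrier_mat e e \<and> invertible_mat (intertwiner t) \<and>
      (\<forall>c\<in>C. \<sigma> (t \<otimes> c \<otimes> inv t) * intertwiner t = intertwiner t * \<sigma> c)"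
    using intertwiner by blast
  show "intertwiner \<one> = 1\<^sub>m e" unfolding intertwiner_def by simp
qed (rule stab_H_sub_stab_G transversal_G transversal_NC_G transversal_mult_NC_G)+

sublocale ext_H: cprod_extension A C e \<sigma> H M \<phi> P' \<alpha>' d' \<psi> \<nu> side_H.stab intertwiner transversal
proof (intro cprod_extension.intro cprod_extension_axioms.intro)
  show "cprod_triple A C e \<sigma> H M \<phi> P' \<alpha>' d' \<psi> \<nu>" by (rule side_H.cprod_triple_axioms)
  show "subgroup side_H.stab A" by (rule side_H.stab_subgroup)
  show "\<forall>h\<in>side_H.stab. \<forall>c\<in>C. h \<otimes> c \<otimes> inv h \<in> C \<and> inv h \<otimes> c \<otimes> h \<in> C"
    using side_H.stabD(2) unfolding normalizes_def by blast
  show "\<forall>t\<in>side_H.stab. intertwiner t \<in> carrier_mat e e \<and> invertible_mat (intertwiner t) \<and>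
      (\<forall>c\<in>C. \<sigma> (t \<otimes> c \<otimes> inv t) * intertwiner t = intertwiner t * \<sigma> c)"
    using intertwiner by blast
  show "intertwiner \<one> = 1\<^sub>m e" unfolding intertwiner_def by simp
  show "side_H.stab \<subseteq> side_H.stab" ..
  show "\<forall>x\<in>side_H.stab. transversal x \<in> side_H.stab \<and> inv (transversal x) \<otimes> x \<in> side_H.NC"
  proof
    fix x assume x: "x \<in> side_H.stab"
    have t: "transversal x \<in> side_H.stab" and "inv (transversal x) \<otimes> x \<in> side_G.NC"
      using transversal_G stab_H_sub_stab_G x by blast+
    moreover have "inv (transversal x) \<otimes> x \<in> side_H.stab"
      using side_H.stab_subgroup t x by (simp add: subgroup.m_closed subgroup.m_inv_closed)
    ultimately show "transversal x \<in> side_H.stab \<and> inv (transversal x) \<otimes> x \<in> side_H.NC"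
      using NC_G_inter_stab_H by blast
  qed
  show "\<forall>y\<in>side_H.NC. transversal y = \<one>" using transversal_NC_G NC_H_sub_NC_G by blast
  show "\<forall>x\<in>side_H.stab. \<forall>y\<in>side_H.NC. transversal (x \<otimes> y) = transversal x"
    using transversal_mult_NC_G NC_H_sub_NC_G stab_H_sub_stab_G by blast
qed

lemma factor_sets_agree:
  assumes x: "x \<in> side_H.stab" and y: "y \<in> side_H.stab"
  shows "ext_G.ext_factor (x, y) = ext_H.ext_factor (x, y)"
proof -
  have xy: "x \<otimes> y \<in> side_H.stab" using subgroup.m_closed[OF side_H.stab_subgroup x y] .
  obtain m c where m: "m \<in> M" and c: "c \<in> C" and ex: "inv (transversal x) \<otimes> x = m \<otimes> c"
    using ext_H.tr_decomp[OF x] by blast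
  obtain m' c' where m': "m' \<in> M" and c': "c' \<in> C" and ey: "inv (transversal y) \<otimes> y = m' \<otimes> c'"
    using ext_H.tr_decomp[OF y] by blast
  obtain m'' c'' where m'': "m'' \<in> M" and c'': "c'' \<in> C"
    and exy: "inv (transversal (x \<otimes> y)) \<otimes> (x \<otimes> y) = m'' \<otimes> c''"
    using ext_H.tr_decomp[OF xy] by blast
  obtain \<kappa> where \<kappa>: "(intertwiner (transversal x) * \<sigma> c) * (intertwiner (transversal y) * \<sigma> c')
      = \<kappa> \<cdot>\<^sub>m (intertwiner (transversal (x \<otimes> y)) * \<sigma> c'')"
    using ext_H.decomp_intertwiners_proportional[OF x y m c ex m' c' ey m'' c'' exy] by blast
  define c3 where "c3 = c'' \<otimes> (inv y \<otimes> inv c \<otimes> y) \<otimes> inv c'"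
  have c3: "c3 \<in> C"
    unfolding c3_def using side_H.stab_iff y c c' c'' C
    by (auto simp: normalizes_def subgroup.m_closed subgroup.m_inv_closed)
  obtain z3 where "P c3 = z3 \<cdot>\<^sub>m 1\<^sub>m (dim_row (P c3))" "P' c3 = z3 \<cdot>\<^sub>m 1\<^sub>m (dim_row (P' c3))"
    using centralizer_scalars C_centralizes c3 by blast
  hence z3: "P c3 = z3 \<cdot>\<^sub>m 1\<^sub>m d" "P' c3 = z3 \<cdot>\<^sub>m 1\<^sub>m d'"
    using side_G.P_carrier[OF subsetD[OF C_sub_G c3]] side_H.P_carrier[OF subsetD[OF C_sub_H c3]] by auto
  note mN = subsetD[OF M_sub_N m] subsetD[OF M_sub_N m'] subsetD[OF M_sub_N m'']
  note fG = ext_G.ext_rep_mult_formula[OF subsetD[OF stab_H_sub_stab_G x] subsetD[OF stab_H_sub_stab_G y]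
      mN(1) c ex mN(2) c' ey mN(3) c'' exy c3_def c3 z3(1) \<kappa>]
  note fH = ext_H.ext_rep_mult_formula[OF x y m c ex m' c' ey m'' c'' exy c3_def c3 z3(2) \<kappa>]
  note t = ext_H.tr_in_Q[OF x] ext_H.tr_in_Q[OF y] ext_H.tr_in_Q[OF xy]
  have inH: "transversal x \<otimes> m \<in> H" "transversal y \<otimes> m' \<in> H" "transversal (x \<otimes> y) \<otimes> m'' \<in> H"
    using t side_H.stab_iff m m' m'' side_H.N_sub_K subgroup.m_closed[OF side_H.K_subgroup] by blast+
  have fG': "ext_G.ext_rep x * ext_G.ext_rep y = ext_G.ext_factor (x, y) \<cdot>\<^sub>m ext_G.ext_rep (x \<otimes> y)"
    using ext_G.ext_factor stab_H_sub_stab_G x y by blast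
  have fH': "ext_H.ext_rep x * ext_H.ext_rep y = ext_H.ext_factor (x, y) \<cdot>\<^sub>m ext_H.ext_rep (x \<otimes> y)"
    using ext_H.ext_factor x y by blast
  have "ext_G.ext_factor (x, y) = \<alpha> (transversal x \<otimes> m, transversal y \<otimes> m') * \<kappa> * z3
      / \<alpha> (transversal (x \<otimes> y) \<otimes> m'', c3)"
    using smult_invertible_mat_cancel[OF ext_G.ext_rep_carrier_invertible[OF subsetD[OF stab_H_sub_stab_G xy]]]
      side_G.d_pos e_pos fG(2) fG' by simp
  also have "\<dots> = ext_H.ext_factor (x, y)"
    using smult_invertible_mat_cancel[OF ext_H.ext_rep_carrier_invertible[OF xy]] side_H.d_pos e_pos fH(2) fH'
      factor_sets_eq inH subsetD[OF C_sub_H c3] by simp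
  finally show ?thesis .
qed

lemma centralizer_sub_stab_H: "centralizer_in A side_G.stab side_G.NC \<subseteq> side_H.stab"
proof
  fix g assume g: "g \<in> centralizer_in A side_G.stab side_G.NC"
  hence gG: "g \<in> side_G.stab" and gc: "\<forall>y\<in>side_G.NC. g \<otimes> y = y \<otimes> g" unfolding centralizer_in_def by auto
  have "g \<in> centralizer_in A G N" using gG gc side_G.N_sub_NC side_G.stab_iff unfolding centralizer_in_def by blast
  thus "g \<in> side_H.stab" using centralizer_sub_H side_G.stab_iff side_H.stab_iff gG by blast
qed

lemma centralizer_scalars_agree:
  assumes g: "g \<in> centralizer_in A side_G.stab side_G.NC"
  shows "\<exists>z. ext_G.ext_rep g = z \<cdot>\<^sub>m 1\<^sub>m (dim_row (ext_G.ext_rep g)) \<and>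
    ext_H.ext_rep g = z \<cdot>\<^sub>m 1\<^sub>m (dim_row (ext_H.ext_rep g))"
proof -
  have gG: "g \<in> side_G.stab" and gc: "\<forall>y\<in>side_G.NC. g \<otimes> y = y \<otimes> g" using g unfolding centralizer_in_def by auto
  have gH: "g \<in> side_H.stab" using centralizer_sub_stab_H g by blast
  obtain w where w: "ext_G.ext_rep g = w \<cdot>\<^sub>m 1\<^sub>m (d*e)" using ext_G.ext_rep_central[OF gG gc] by blast
  obtain m c where m: "m \<in> M" and c: "c \<in> C" and ex: "inv (transversal g) \<otimes> g = m \<otimes> c"
    using ext_H.tr_decomp[OF gH] by blast
  define u where "u = transversal g \<otimes> m"
  have tQ: "transversal g \<in> side_H.stab" using ext_H.tr_in_Q[OF gH] .
  have uH: "u \<in> H" unfolding u_def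
    using subgroup.m_closed[OF side_H.K_subgroup] side_H.stab_iff tQ m side_H.N_sub_K by blast
  have "g \<otimes> inv c = (transversal g \<otimes> m \<otimes> c) \<otimes> inv c"
    using arg_cong[where f="\<lambda>z. z \<otimes> inv c", OF ext_H.conj_intertwiner_decomp(2)[OF gH m c ex]] .
  hence ue: "u = g \<otimes> inv c"
    using ext_H.tr_carrier[OF gH] side_H.N_carrier[OF m] C_carrier[OF c] unfolding u_def by (simp add: m_assoc)
  have "u \<otimes> n = n \<otimes> u" if n: "n \<in> N" for n
    unfolding ue using commute_mult_inv[OF side_G.stab_carrier[OF gG] C_carrier[OF c] side_G.N_carrier[OF n]]
      gc side_G.N_sub_NC C_centralizes_N c n by blast
  hence "u \<in> centralizer_in A G N" using uH H_sub_G unfolding centralizer_in_def by blast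
  then obtain z where "P u = z \<cdot>\<^sub>m 1\<^sub>m (dim_row (P u))" "P' u = z \<cdot>\<^sub>m 1\<^sub>m (dim_row (P' u))"
    using centralizer_scalars by blast
  hence zG: "P u = z \<cdot>\<^sub>m 1\<^sub>m d" and zH: "P' u = z \<cdot>\<^sub>m 1\<^sub>m d'"
    using side_G.P_carrier[OF subsetD[OF H_sub_G uH]] side_H.P_carrier[OF uH] by auto
  have z: "z \<noteq> 0"
    using invertible_smult_imp_nonzero[of z "1\<^sub>m d" d] side_G.P_invertible[OF subsetD[OF H_sub_G uH]] zG side_G.d_pos
    by simp
  define U where "U = intertwiner (transversal g) * \<sigma> c"
  have U: "U \<in> carrier_mat e e" unfolding U_def using ext_H.V_carrier[OF tQ] \<sigma>_carrier[OF c] by simp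
  have "kron (z \<cdot>\<^sub>m 1\<^sub>m d) U = w \<cdot>\<^sub>m 1\<^sub>m (d*e)"
    using ext_G.ext_rep_eq[OF gG subsetD[OF M_sub_N m] c ex] w zG unfolding U_def u_def by simp
  hence "U = (w / z) \<cdot>\<^sub>m 1\<^sub>m e" by (rule kron_scalar_left_eq_scalar[OF U side_G.d_pos z])
  hence "ext_H.ext_rep g = w \<cdot>\<^sub>m 1\<^sub>m (d'*e)"
    using ext_H.ext_rep_eq[OF gH m c ex] zH z unfolding U_def u_def[symmetric]
    by (simp add: kron_smult_left kron_smult_right smult_smult_mat kron_one)
  thus ?thesis using w by auto
qed

lemma geq_c_stabilizers: "geq_c A side_G.stab side_G.NC side_G.\<chi> side_H.stab side_H.NC side_H.\<chi>"
  unfolding geq_c_def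
proof (intro conjI)
  show "char_triple A side_G.stab side_G.NC side_G.\<chi>" by (rule ext_G.stab_triple)
  show "char_triple A side_H.stab side_H.NC side_H.\<chi>" by (rule ext_H.stab_triple)
  show "side_G.stab = side_G.NC <#> side_H.stab"
  proof
    show "side_G.stab \<subseteq> side_G.NC <#> side_H.stab"
    proof
      fix g assume "g \<in> side_G.stab"
      hence "g \<in> N <#> side_H.stab" by (simp only: stab_G_eq)
      then obtain n h where "n \<in> N" "h \<in> side_H.stab" "g = n \<otimes> h" by (rule set_multE)
      thus "g \<in> side_G.NC <#> side_H.stab" using set_multI[where G=A, OF subsetD[OF side_G.N_sub_NC]] by simp
    qed
    show "side_G.NC <#> side_H.stab \<subseteq> side_G.stab"
    proof
      fix g assume "g \<in> side_G.NC <#> side_H.stab"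
      then obtain y h where "y \<in> side_G.NC" "h \<in> side_H.stab" "g = y \<otimes> h" by (rule set_multE)
      thus "g \<in> side_G.stab"
        using side_G.NC_sub_stab stab_H_sub_stab_G subgroup.m_closed[OF side_G.stab_subgroup] by blast
    qed
  qed
  show "side_H.NC = side_G.NC \<inter> side_H.stab" using NC_G_inter_stab_H by simp
  show "centralizer_in A side_G.stab side_G.NC \<subseteq> side_H.stab" by (rule centralizer_sub_stab_H)
  show "\<exists>Pa \<alpha>a P'a \<alpha>'a. proj_rep_assoc A side_G.stab side_G.NC side_G.\<chi> Pa \<alpha>a \<and>
      proj_rep_assoc A side_H.stab side_H.NC side_H.\<chi> P'a \<alpha>'a \<and>
      (\<forall>x\<in>side_H.stab. \<forall>y\<in>side_H.stab. \<alpha>a (x, y) = \<alpha>'a (x, y)) \<and>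
      (\<forall>c\<in>centralizer_in A side_G.stab side_G.NC. \<exists>z.
        Pa c = z \<cdot>\<^sub>m 1\<^sub>m (dim_row (Pa c)) \<and> P'a c = z \<cdot>\<^sub>m 1\<^sub>m (dim_row (P'a c)))"
    by (rule exI[of _ ext_G.ext_rep], rule exI[of _ ext_G.ext_factor], rule exI[of _ ext_H.ext_rep],
        rule exI[of _ ext_H.ext_factor])
      (use ext_G.ext_rep_proj_rep_assoc ext_H.ext_rep_proj_rep_assoc factor_sets_agree
        centralizer_scalars_agree in blast)
qed

end

lemma geq_c_setting_if_geq_c:
  assumes "group A" and "finite (carrier A)"
    and "geq_c A G N \<theta> H M \<phi>"
    and "subgroup C A" and "C \<subseteq> centralizer_in A G N"
    and "\<nu> \<in> Irr A (C \<inter> N)" and "lies_over (C \<inter> N) \<theta> \<nu>" and "lies_over (C \<inter> N) \<phi> \<nu>"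
    and "\<psi> \<in> Irr_over A C (C \<inter> N) \<nu>"
  shows "\<exists>e \<sigma> P P' \<alpha> \<alpha>' d d'. geq_c_setting A C e \<sigma> G N H M \<theta> \<phi> \<nu> \<psi> P P' \<alpha> \<alpha>' d d'"
proof -
  have tG: "char_triple A G N \<theta>" and tH: "char_triple A H M \<phi>" and GNH: "G = N <#>\<^bsub>A\<^esub> H"
    and MNH: "M = N \<inter> H" and cenH: "centralizer_in A G N \<subseteq> H"
    using assms(3) unfolding geq_c_def by blast+
  obtain P \<alpha> P' \<alpha>' where pG: "proj_rep_assoc A G N \<theta> P \<alpha>" and pH: "proj_rep_assoc A H M \<phi> P' \<alpha>'"
    and \<alpha>\<alpha>': "\<forall>x\<in>H. \<forall>y\<in>H. \<alpha> (x, y) = \<alpha>' (x, y)"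
    and scalars: "\<forall>c\<in>centralizer_in A G N. \<exists>z. P c = z \<cdot>\<^sub>m 1\<^sub>m (dim_row (P c)) \<and> P' c = z \<cdot>\<^sub>m 1\<^sub>m (dim_row (P' c))"
    using assms(3) unfolding geq_c_def by blast
  obtain d where P1: "\<forall>x\<in>G. P x \<in> carrier_mat d d \<and> invertible_mat (P x)"
    and P2: "\<forall>x\<in>G. \<forall>y\<in>G. P x * P y = \<alpha> (x, y) \<cdot>\<^sub>m P (x \<otimes>\<^bsub>A\<^esub> y)"
    and P3: "is_rep A N d P" and P4: "\<forall>n\<in>N. \<theta> n = mat_trace (P n)"
    and P5: "\<forall>x\<in>G. \<forall>n\<in>N. P (x \<otimes>\<^bsub>A\<^esub> n) = P x * P n \<and> P (n \<otimes>\<^bsub>A\<^esub> x) = P n * P x"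
    using pG unfolding proj_rep_assoc_def by blast
  obtain d' where P'1: "\<forall>x\<in>H. P' x \<in> carrier_mat d' d' \<and> invertible_mat (P' x)"
    and P'2: "\<forall>x\<in>H. \<forall>y\<in>H. P' x * P' y = \<alpha>' (x, y) \<cdot>\<^sub>m P' (x \<otimes>\<^bsub>A\<^esub> y)"
    and P'3: "is_rep A M d' P'" and P'4: "\<forall>n\<in>M. \<phi> n = mat_trace (P' n)"
    and P'5: "\<forall>x\<in>H. \<forall>n\<in>M. P' (x \<otimes>\<^bsub>A\<^esub> n) = P' x * P' n \<and> P' (n \<otimes>\<^bsub>A\<^esub> x) = P' n * P' x"
    using pH unfolding proj_rep_assoc_def by blast
  obtain e \<sigma> where \<sigma>: "irreducible_rep A C e \<sigma>" and \<psi>\<sigma>: "\<forall>c\<in>C. \<psi> c = mat_trace (\<sigma> c)"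
    using assms(9) unfolding Irr_over_def Irr_def by blast
  have \<psi>\<nu>: "lies_over (C \<inter> N) \<psi> \<nu>" using assms(9) unfolding Irr_over_def by blast
  show ?thesis
    using geq_c_setting.intro[OF irrep_subgroup.intro[OF assms(1) irrep_subgroup_axioms.intro[OF assms(2,4) \<sigma>]]
        geq_c_setting_axioms.intro[OF tG tH GNH MNH cenH P1 P2 P3 P4 P5 P'1 P'2 P'3 P'4 P'5 \<alpha>\<alpha>' scalars
          assms(5-8) \<psi>\<sigma> \<psi>\<nu>]] by blast
qed

theorem lemma3p3:
  fixes A :: "('a, 'b) monoid_scheme"
    and G N H M C :: "'a set"
    and \<theta> \<phi> \<nu> \<psi> :: "'a \<Rightarrow> complex"
  assumes "group A" and "finite (carrier A)"
    and "geq_c A G N \<theta> H M \<phi>"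
    and "subgroup C A" and "C \<subseteq> centralizer_in A G N"
    and "\<nu> \<in> Irr A (C \<inter> N)" and "lies_over (C \<inter> N) \<theta> \<nu>" and "lies_over (C \<inter> N) \<phi> \<nu>"
    and "\<psi> \<in> Irr_over A C (C \<inter> N) \<nu>"
  shows "geq_c A
           (char_stab A (normalizer_in A G C) (cprod_char A N C \<theta> \<psi>)) (N <#>\<^bsub>A\<^esub> C) (cprod_char A N C \<theta> \<psi>)
           (char_stab A (normalizer_in A H C) (cprod_char A M C \<phi> \<psi>)) (M <#>\<^bsub>A\<^esub> C) (cprod_char A M C \<phi> \<psi>)"
proof -
  obtain e \<sigma> P P' \<alpha> \<alpha>' d d' where "geq_c_setting A C e \<sigma> G N H M \<theta> \<phi> \<nu> \<psi> P P' \<alpha> \<alpha>' d d'"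
    using geq_c_setting_if_geq_c[OF assms] by blast
  thus ?thesis by (rule geq_c_setting.geq_c_stabilizers)
qed

end
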